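(* The reduction $\to_{\mathsf{se}}$ is sound: whenever $B\to_{\mathsf{se}}C$ and $\Phi$ is an $\mathsf{SKS}$ derivation with associated atomic flow $B$, there exists an $\mathsf{SKS}$ derivation $\Psi$ with associated atomic flow $C$ and with the same premiss and conclusion as $\Phi$.
   Context: Formulae are built from the units $\mathsf f$ and $\mathsf t$, atoms, disjunction $[\alpha\vee\beta]$ and conjunction $(\alpha\wedge\beta)$; on atoms there is an involution $a\mapsto\bar a$ with $\bar a\neq a$. An inference step of a rule $\alpha/\beta$ rewrites $\xi\{\alpha\}$ into $\xi\{\beta\}$ for an arbitrary context (formula with a hole) $\xi$. A derivation from $\alpha$ (premiss) to $\beta$ (conclusion) is a finite chain of steps from $\alpha$ to $\beta$. System $\mathsf{SKS}$: interaction $\mathsf t/[a\vee\bar a]$; weakening $\mathsf f/a$; contraction $[a\vee a]/a$; cut $(a\wedge\bar a)/\mathsf f$; coweakening $a/\mathsf t$; cocontraction $a/(a\wedge a)$; switch $(\alpha\wedge[\beta\vee\gamma])/[(\alpha\wedge\beta)\vee\gamma]$; medial $[(\alpha\wedge\beta)\vee(\gamma\wedge\delta)]/([\alpha\vee\gamma]\wedge[\beta\vee\delta])$; and $\gamma/\delta$ whenever $\gamma=\delta$ is (either direction of) an instance of commutativity or associativity of $\vee,\wedge$, $[\alpha\vee\mathsf f]=\alpha$, $(\alpha\wedge\mathsf t)=\alpha$, $[\mathsf t\vee\mathsf t]=\mathsf t$, $(\mathsf f\wedge\mathsf f)=\mathsf f$. An atomic flow is a tuple $(V,E,\eta,up,lo)$: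 finite vertex and edge sets, a labelling of vertices by interaction, cut, weakening, coweakening, contraction, cocontraction, and maps $up:E\to V\cup\{\top\}$, $lo:E\to V\cup\{\bot\}$. Upper edges of $\nu$: $lo(\epsilon)=\nu$; lower edges: $up(\epsilon)=\nu$. (Upper, lower) edge numbers: $(0,2)$ interaction, $(2,0)$ cut, $(0,1)$ weakening, $(1,0)$ coweakening, $(2,1)$ contraction, $(1,2)$ cocontraction; no directed cycles; a sign map $\pi:E\to\{+,-\}$ exists giving all edges of a (co)contraction the same sign and the two edges of an interaction/cut different signs. Edges with $up=\top$ ($lo=\bot$) are the upper (lower) edges of the flow. The atomic flow of an $\mathsf{SKS}$ derivation traces atom occurrences: occurrences in contexts and instantiated subformulae of switch, medial, $=$ keep their edge through a step; each step of an atomic rule gives a vertex with that label whose upper edges are the redex occurrences in the step's premiss and lower edges those in its conclusion; occurrences in the premiss/conclusion of the derivation have $up=\top$ / $lo=\bot$. Reduction $\to_{\mathsf{se}}$: let $B$ contain an edge $\epsilon$ from an interaction $\iota$ to a cut $\kappa$; let $\epsilon_2$ be the other lower edge of $\iota$ and $\epsilon_3$ the other upper edge of $\kappa$. Let $A$ be obtained from $B$ by deleting $\iota$, $\kappa$ and $\epsilon$, so that $\epsilon_2$ becomes an upper edge and $\epsilon_3$ a lower edge of $A$; let $\epsilon_1,\dots,\epsilon_h$ be the other upper edges and $\epsilon'_1,\dots,\epsilon'_k$ the other lower edges of $A$. Take disjoint copies $\tilde A$, $\hat A$ of $A$. Then $B\to_{\mathsf{se}}C$ where $C$ is formed by: making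 $\tilde\epsilon_2$ the lower edge of a new weakening; making $\hat\epsilon_3$ the upper edge of a new coweakening; identifying $\tilde\epsilon_3$ and $\hat\epsilon_2$ into a single edge (from the upper endpoint of $\tilde\epsilon_3$ to the lower endpoint of $\hat\epsilon_2$); for each $i\le h$ adding a cocontraction with upper edge $\epsilon_i$ and lower edges $\tilde\epsilon_i,\hat\epsilon_i$; for each $j\le k$ adding a contraction with upper edges $\tilde\epsilon'_j,\hat\epsilon'_j$ and lower edge $\epsilon'_j$. *)

theory Defs
  imports Main
begin

datatype 'x formula = Ff | Tt | At 'x | Dis "'x formula" "'x formula" | Con "'x formula" "'x formula"

datatype 'x ctx = Hole | DL "'x ctx" "'x formula" | DR "'x formula" "'x ctx"
               | CL "'x ctx" "'x formula" | CR "'x formula" "'x ctx"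

fun plug :: "'x ctx \<Rightarrow> 'x formula \<Rightarrow> 'x formula" where
  "plug Hole a = a"
| "plug (DL c b) a = Dis (plug c a) b"
| "plug (DR b c) a = Dis b (plug c a)"
| "plug (CL c b) a = Con (plug c a) b"
| "plug (CR b c) a = Con b (plug c a)"

fun atoms_of :: "'x formula \<Rightarrow> 'x list" where
  "atoms_of Ff = []"
| "atoms_of Tt = []"
| "atoms_of (At x) = [x]"
| "atoms_of (Dis a b) = atoms_of a @ atoms_of b"
| "atoms_of (Con a b) = atoms_of a @ atoms_of b"

text \<open>Atoms: a name together with a polarity; the involution flips the polarity
  (every fixed-point-free involution is of this form).\<close>
type_synonym 'n atom = "'n \<times> bool"

definition bar :: "'n atom \<Rightarrow> 'n atom" where
  "bar a = (fst a, \<not> snd a)"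

datatype 'x inst =
    RInt 'x 'x | RCut 'x 'x | RWk 'x | RCowk 'x | RCtr 'x 'x 'x | RCoctr 'x 'x 'x
  | RSw "'x formula" "'x formula" "'x formula"
  | RMed "'x formula" "'x formula" "'x formula" "'x formula"
  | RCommD "'x formula" "'x formula" | RCommC "'x formula" "'x formula"
  | RAssocD "'x formula" "'x formula" "'x formula" | RAssocD' "'x formula" "'x formula" "'x formula"
  | RAssocC "'x formula" "'x formula" "'x formula" | RAssocC' "'x formula" "'x formula" "'x formula"
  | RUnitF "'x formula" | RUnitF' "'x formula" | RUnitT "'x formula" | RUnitT' "'x formula"
  | RTT | RTT' | RFF | RFF'

fun rprem :: "'x inst \<Rightarrow> 'x formula" where
  "rprem (RInt x y) = Tt"
| "rprem (RCut x y) = Con (At x) (At y)"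
| "rprem (RWk x) = Ff"
| "rprem (RCowk x) = At x"
| "rprem (RCtr x y z) = Dis (At x) (At y)"
| "rprem (RCoctr x y z) = At x"
| "rprem (RSw a b c) = Con a (Dis b c)"
| "rprem (RMed a b c d) = Dis (Con a b) (Con c d)"
| "rprem (RCommD a b) = Dis a b"
| "rprem (RCommC a b) = Con a b"
| "rprem (RAssocD a b c) = Dis (Dis a b) c"
| "rprem (RAssocD' a b c) = Dis a (Dis b c)"
| "rprem (RAssocC a b c) = Con (Con a b) c"
| "rprem (RAssocC' a b c) = Con a (Con b c)"
| "rprem (RUnitF a) = Dis a Ff"
| "rprem (RUnitF' a) = a"
| "rprem (RUnitT a) = Con a Tt"
| "rprem (RUnitT' a) = a"
| "rprem RTT = Dis Tt Tt"
| "rprem RTT' = Tt"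
| "rprem RFF = Con Ff Ff"
| "rprem RFF' = Ff"

fun rconcl :: "'x inst \<Rightarrow> 'x formula" where
  "rconcl (RInt x y) = Dis (At x) (At y)"
| "rconcl (RCut x y) = Ff"
| "rconcl (RWk x) = At x"
| "rconcl (RCowk x) = Tt"
| "rconcl (RCtr x y z) = At z"
| "rconcl (RCoctr x y z) = Con (At y) (At z)"
| "rconcl (RSw a b c) = Dis (Con a b) c"
| "rconcl (RMed a b c d) = Con (Dis a c) (Dis b d)"
| "rconcl (RCommD a b) = Dis b a"
| "rconcl (RCommC a b) = Con b a"
| "rconcl (RAssocD a b c) = Dis a (Dis b c)"
| "rconcl (RAssocD' a b c) = Dis (Dis a b) c"
| "rconcl (RAssocC a b c) = Con a (Con b c)"
| "rconcl (RAssocC' a b c) = Con (Con a b) c"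
| "rconcl (RUnitF a) = a"
| "rconcl (RUnitF' a) = Dis a Ff"
| "rconcl (RUnitT a) = a"
| "rconcl (RUnitT' a) = Con a Tt"
| "rconcl RTT = Tt"
| "rconcl RTT' = Dis Tt Tt"
| "rconcl RFF = Ff"
| "rconcl RFF' = Con Ff Ff"

fun sks_inst :: "'n atom inst \<Rightarrow> bool" where
  "sks_inst (RInt x y) = (y = bar x)"
| "sks_inst (RCut x y) = (y = bar x)"
| "sks_inst (RCtr x y z) = (y = x \<and> z = x)"
| "sks_inst (RCoctr x y z) = (y = x \<and> z = x)"
| "sks_inst _ = True"

datatype vkind = KInt | KCut | KWk | KCowk | KCtr | KCoctr

fun is_atomic :: "'x inst \<Rightarrow> bool" where
  "is_atomic (RInt x y) = True"
| "is_atomic (RCut x y) = True"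
| "is_atomic (RWk x) = True"
| "is_atomic (RCowk x) = True"
| "is_atomic (RCtr x y z) = True"
| "is_atomic (RCoctr x y z) = True"
| "is_atomic _ = False"

fun kind :: "'x inst \<Rightarrow> vkind" where
  "kind (RInt x y) = KInt"
| "kind (RCut x y) = KCut"
| "kind (RWk x) = KWk"
| "kind (RCowk x) = KCowk"
| "kind (RCtr x y z) = KCtr"
| "kind (RCoctr x y z) = KCoctr"
| "kind _ = KInt"

type_synonym 'x deriv = "'x formula \<times> ('x ctx \<times> 'x inst) list"

fun chain_ok :: "'x formula \<Rightarrow> ('x ctx \<times> 'x inst) list \<Rightarrow> bool" where
  "chain_ok a [] = True"
| "chain_ok a ((c, r) # s) = (plug c (rprem r) = a \<and> chain_ok (plug c (rconcl r)) s)"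

fun forms :: "'x formula \<Rightarrow> ('x ctx \<times> 'x inst) list \<Rightarrow> 'x formula list" where
  "forms a [] = [a]"
| "forms a ((c, r) # s) = a # forms (plug c (rconcl r)) s"

definition premiss :: "'x deriv \<Rightarrow> 'x formula" where
  "premiss D = fst D"

definition conclusion :: "'x deriv \<Rightarrow> 'x formula" where
  "conclusion D = last (forms (fst D) (snd D))"

definition sks_deriv :: "'n atom deriv \<Rightarrow> bool" where
  "sks_deriv D \<longleftrightarrow> chain_ok (fst D) (snd D) \<and> (\<forall>(c, r) \<in> set (snd D). sks_inst r)"

record ('v, 'e) flow =
  fV :: "'v set"
  fE :: "'e set"
  flab :: "'v \<Rightarrow> vkind"
  fup :: "'e \<Rightarrow> 'v option"   \<comment> \<open>None = top\<close>
  flo :: "'e \<Rightarrow> 'v option"   \<comment> \<open>None = bottom\<close>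

fun n_upper :: "vkind \<Rightarrow> nat" where
  "n_upper KInt = 0" | "n_upper KCut = 2" | "n_upper KWk = 0"
| "n_upper KCowk = 1" | "n_upper KCtr = 2" | "n_upper KCoctr = 1"

fun n_lower :: "vkind \<Rightarrow> nat" where
  "n_lower KInt = 2" | "n_lower KCut = 0" | "n_lower KWk = 1"
| "n_lower KCowk = 0" | "n_lower KCtr = 1" | "n_lower KCoctr = 2"

definition upper_edges :: "('v, 'e) flow \<Rightarrow> 'v \<Rightarrow> 'e set" where
  "upper_edges F v = {e \<in> fE F. flo F e = Some v}"

definition lower_edges :: "('v, 'e) flow \<Rightarrow> 'v \<Rightarrow> 'e set" where
  "lower_edges F v = {e \<in> fE F. fup F e = Some v}"

definition atomic_flow :: "('v, 'e) flow \<Rightarrow> bool" where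
  "atomic_flow F \<longleftrightarrow>
     finite (fV F) \<and> finite (fE F) \<and>
     (\<forall>e \<in> fE F. (\<forall>v. fup F e = Some v \<longrightarrow> v \<in> fV F) \<and> (\<forall>v. flo F e = Some v \<longrightarrow> v \<in> fV F)) \<and>
     (\<forall>v \<in> fV F. card (upper_edges F v) = n_upper (flab F v) \<and>
                 card (lower_edges F v) = n_lower (flab F v)) \<and>
     acyclic {(u, v). \<exists>e \<in> fE F. fup F e = Some u \<and> flo F e = Some v} \<and>
     (\<exists>\<pi> :: 'e \<Rightarrow> bool. \<forall>v \<in> fV F.
        (flab F v \<in> {KCtr, KCoctr} \<longrightarrow>
           (\<forall>e1 \<in> upper_edges F v \<union> lower_edges F v. \<forall>e2 \<in> upper_edges F v \<union> lower_edges F v. \<pi> e1 = \<pi> e2)) \<and>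
        (flab F v = KInt \<longrightarrow> (\<forall>e1 \<in> lower_edges F v. \<forall>e2 \<in> lower_edges F v. e1 \<noteq> e2 \<longrightarrow> \<pi> e1 \<noteq> \<pi> e2)) \<and>
        (flab F v = KCut \<longrightarrow> (\<forall>e1 \<in> upper_edges F v. \<forall>e2 \<in> upper_edges F v. e1 \<noteq> e2 \<longrightarrow> \<pi> e1 \<noteq> \<pi> e2)))"

definition flow_iso :: "('v, 'e) flow \<Rightarrow> ('w, 'f) flow \<Rightarrow> bool" where
  "flow_iso F G \<longleftrightarrow> (\<exists>fv fe. bij_betw fv (fV F) (fV G) \<and> bij_betw fe (fE F) (fE G) \<and>
     (\<forall>v \<in> fV F. flab G (fv v) = flab F v) \<and>
     (\<forall>e \<in> fE F. fup G (fe e) = map_option fv (fup F e) \<and> flo G (fe e) = map_option fv (flo F e)))"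

text \<open>Atom occurrences are traced by annotating each atom occurrence with an edge name
  (a natural number); structural steps move annotated atoms along, atomic steps
  consume the annotated atoms of their premiss and create fresh ones.\<close>

type_synonym 'n ann_deriv = "('n atom \<times> nat) deriv"

definition lbls :: "('x \<times> nat) formula \<Rightarrow> nat set" where
  "lbls f = snd ` set (atoms_of f)"

definition erase :: "'n ann_deriv \<Rightarrow> 'n atom deriv" where
  "erase D = (map_formula fst (fst D), map (map_prod (map_ctx fst) (map_inst fst)) (snd D))"

definition ann_ok :: "'n ann_deriv \<Rightarrow> bool" where
  "ann_ok D \<longleftrightarrow> sks_deriv (erase D) \<and> chain_ok (fst D) (snd D) \<and>
     (\<forall>f \<in> set (forms (fst D) (snd D)). distinct (map snd (atoms_of f))) \<and>
     (\<forall>i < length (snd D). is_atomic (snd (snd D ! i)) \<longrightarrow>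
        (\<forall>e \<in> lbls (rconcl (snd (snd D ! i))). \<forall>j \<le> i. e \<notin> lbls (forms (fst D) (snd D) ! j)))"

definition flow_of_ann :: "'n ann_deriv \<Rightarrow> (nat, nat) flow" where
  "flow_of_ann D = (let fs = forms (fst D) (snd D); st = snd D; n = length st in
     \<lparr> fV = {i. i < n \<and> is_atomic (snd (st ! i))},
       fE = \<Union> (lbls ` set fs),
       flab = (\<lambda>i. kind (snd (st ! i))),
       fup = (\<lambda>e. if e \<in> lbls (hd fs) then None
                  else Some (THE i. i < n \<and> is_atomic (snd (st ! i)) \<and> e \<in> lbls (rconcl (snd (st ! i))))),
       flo = (\<lambda>e. if e \<in> lbls (last fs) then None
                  else Some (THE i. i < n \<and> is_atomic (snd (st ! i)) \<and> e \<in> lbls (rprem (snd (st ! i))))) \<rparr>)"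

definition is_flow_of :: "('v, 'e) flow \<Rightarrow> 'n atom deriv \<Rightarrow> bool" where
  "is_flow_of B Phi \<longleftrightarrow> (\<exists>D. ann_ok D \<and> erase D = Phi \<and> flow_iso B (flow_of_ann D))"

datatype ('v, 'e) sev = Cp bool 'v | NW | NCW | NCoc 'e | NCon 'e
datatype 'e see = ECp bool 'e | EIn 'e | EOut 'e | EMid

text \<open>Cp True / ECp True = tilde copy, Cp False / ECp False = hat copy.
  EIn e: the original upper edge e above its new cocontraction; EOut e: the original
  lower edge e below its new contraction; EMid: the identification of tilde eps3 and hat eps2.\<close>

definition se_construct :: "('v, 'e) flow \<Rightarrow> 'e \<Rightarrow> (('v, 'e) sev, 'e see) flow" where
  "se_construct B \<epsilon> = (let
      \<iota> = the (fup B \<epsilon>); \<kappa> = the (flo B \<epsilon>);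
      \<epsilon>2 = (THE e. e \<in> fE B \<and> e \<noteq> \<epsilon> \<and> fup B e = Some \<iota>);
      \<epsilon>3 = (THE e. e \<in> fE B \<and> e \<noteq> \<epsilon> \<and> flo B e = Some \<kappa>);
      VA = fV B - {\<iota>, \<kappa>};
      EA = fE B - {\<epsilon>};
      Ups = {e \<in> EA. e \<noteq> \<epsilon>2 \<and> fup B e = None};
      Los = {e \<in> EA. e \<noteq> \<epsilon>3 \<and> flo B e = None};
      upc = (\<lambda>b e. if e = \<epsilon>2 then Some NW
                    else (case fup B e of None \<Rightarrow> Some (NCoc e) | Some v \<Rightarrow> Some (Cp b v)));
      loc = (\<lambda>b e. if e = \<epsilon>3 then Some NCW
                    else (case flo B e of None \<Rightarrow> Some (NCon e) | Some v \<Rightarrow> Some (Cp b v)))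
    in
    \<lparr> fV = {Cp b v | b v. v \<in> VA} \<union> {NW, NCW} \<union> NCoc ` Ups \<union> NCon ` Los,
      fE = {ECp True e | e. e \<in> EA \<and> e \<noteq> \<epsilon>3} \<union> {ECp False e | e. e \<in> EA \<and> e \<noteq> \<epsilon>2}
           \<union> {EMid} \<union> EIn ` Ups \<union> EOut ` Los,
      flab = (\<lambda>x. case x of Cp b v \<Rightarrow> flab B v | NW \<Rightarrow> KWk | NCW \<Rightarrow> KCowk
                          | NCoc e \<Rightarrow> KCoctr | NCon e \<Rightarrow> KCtr),
      fup = (\<lambda>x. case x of ECp b e \<Rightarrow> upc b e | EIn e \<Rightarrow> None | EOut e \<Rightarrow> Some (NCon e)
                         | EMid \<Rightarrow> upc True \<epsilon>3),
      flo = (\<lambda>x. case x of ECp b e \<Rightarrow> loc b e | EIn e \<Rightarrow> Some (NCoc e) | EOut e \<Rightarrow> None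
                         | EMid \<Rightarrow> loc False \<epsilon>2) \<rparr>)"

definition se_red :: "('v, 'e) flow \<Rightarrow> ('w, 'f) flow \<Rightarrow> bool" where
  "se_red B C \<longleftrightarrow> (\<exists>\<epsilon> \<iota> \<kappa>. atomic_flow B \<and> \<epsilon> \<in> fE B \<and>
      fup B \<epsilon> = Some \<iota> \<and> flab B \<iota> = KInt \<and> flo B \<epsilon> = Some \<kappa> \<and> flab B \<kappa> = KCut \<and>
      flow_iso C (se_construct B \<epsilon>))"

end

theory Submission
  imports Defs "HOL-Library.Multiset" "HOL-Library.Countable"
begin

text \<open>
  Label every atom occurrence of \<Phi>. In a well-labelled annotation each atomic step consumes the
  labels of its redex and creates fresh ones, so the atomic flow of \<Phi> is, up to isomorphism, the
  flow whose vertices are the signatures (kind, consumed labels, created labels) of its atomic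
  steps.

  Split \<Phi> = S1; \<iota>; S2; \<kappa>; S3 at the interaction and the cut joined by \<epsilon>, and let w and z be
  their atoms not on \<epsilon>. The new derivation \<Psi> cocontracts the premiss into a tilde and a hat copy.
  The tilde copy replays \<Phi> with the \<epsilon>-atom replaced by \<open>t\<close>: \<iota> becomes a weakening of w, and z is
  pulled out of what is left of \<kappa>, so this copy ends in p \<or> z, p being the conclusion of \<Phi>. The
  hat copy replays \<Phi> from a \<and> w with the \<epsilon>-atom replaced by \<open>f\<close>: w stands in for \<iota> and \<kappa>
  becomes a coweakening of z, so it ends in p. A switch hands z over to the hat copy (z and w are the
  same atom, because \<epsilon> traces one atom from \<iota> to \<kappa>), and contractions merge the two copies of p.
  The atomic steps of \<Psi> then correspond to the vertices of the reduct, edge for edge.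
\<close>

section \<open>Well-labelled annotated derivations\<close>

fun ctx_atoms :: "'x ctx \<Rightarrow> 'x list" where
  "ctx_atoms Hole = []"
| "ctx_atoms (DL c b) = ctx_atoms c @ atoms_of b"
| "ctx_atoms (DR b c) = atoms_of b @ ctx_atoms c"
| "ctx_atoms (CL c b) = ctx_atoms c @ atoms_of b"
| "ctx_atoms (CR b c) = atoms_of b @ ctx_atoms c"

lemma mset_atoms_plug: "mset (atoms_of (plug c f)) = mset (ctx_atoms c) + mset (atoms_of f)"
  by (induction c) (auto simp: ac_simps)

lemma set_atoms_plug: "set (atoms_of (plug c f)) = set (ctx_atoms c) \<union> set (atoms_of f)"
  using mset_atoms_plug by (metis set_mset_mset set_mset_union)

definition lbl_dist :: "('x \<times> nat) formula \<Rightarrow> bool" where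
  "lbl_dist f \<longleftrightarrow> distinct (map snd (atoms_of f))"

definition ctx_lbls :: "('x \<times> nat) ctx \<Rightarrow> nat set" where
  "ctx_lbls c = snd ` set (ctx_atoms c)"

definition ctx_lbl_dist :: "('x \<times> nat) ctx \<Rightarrow> bool" where
  "ctx_lbl_dist c \<longleftrightarrow> distinct (map snd (ctx_atoms c))"

lemma lbls_plug: "lbls (plug c f) = ctx_lbls c \<union> lbls f"
  by (auto simp: lbls_def ctx_lbls_def set_atoms_plug)

lemma ctx_lbls_simps[simp]:
  "ctx_lbls (DL c b) = ctx_lbls c \<union> lbls b" "ctx_lbls (DR b c) = lbls b \<union> ctx_lbls c"
  "ctx_lbls (CL c b) = ctx_lbls c \<union> lbls b" "ctx_lbls (CR b c) = lbls b \<union> ctx_lbls c"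
  by (auto simp: ctx_lbls_def lbls_def)

lemma lbl_dist_plug: "lbl_dist (plug c f) \<longleftrightarrow> ctx_lbl_dist c \<and> lbl_dist f \<and> ctx_lbls c \<inter> lbls f = {}"
proof -
  have "mset (map snd (atoms_of (plug c f))) = mset (map snd (ctx_atoms c @ atoms_of f))"
    by (simp add: mset_atoms_plug)
  then have "lbl_dist (plug c f) \<longleftrightarrow> distinct (map snd (ctx_atoms c @ atoms_of f))"
    unfolding lbl_dist_def by (rule mset_eq_imp_distinct_iff)
  then show ?thesis by (auto simp: lbl_dist_def ctx_lbl_dist_def ctx_lbls_def lbls_def)
qed

lemma lbls_simps[simp]:
  "lbls Ff = {}" "lbls Tt = {}" "lbls (At x) = {snd x}"
  "lbls (Dis a b) = lbls a \<union> lbls b" "lbls (Con a b) = lbls a \<union> lbls b"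
  by (auto simp: lbls_def)

lemma lbl_dist_simps[simp]:
  "lbl_dist Ff" "lbl_dist Tt" "lbl_dist (At x)"
  "lbl_dist (Dis a b) \<longleftrightarrow> lbl_dist a \<and> lbl_dist b \<and> lbls a \<inter> lbls b = {}"
  "lbl_dist (Con a b) \<longleftrightarrow> lbl_dist a \<and> lbl_dist b \<and> lbls a \<inter> lbls b = {}"
  by (auto simp: lbl_dist_def lbls_def)

lemma mset_structural: "\<not> is_atomic r \<Longrightarrow> mset (atoms_of (rconcl r)) = mset (atoms_of (rprem r))"
  by (cases r) (auto simp: ac_simps)

lemma set_structural: "\<not> is_atomic r \<Longrightarrow> set (atoms_of (rconcl r)) = set (atoms_of (rprem r))"
  using mset_structural by (metis set_mset_mset)

lemma lbls_structural: "\<not> is_atomic r \<Longrightarrow> lbls (rconcl r) = lbls (rprem r)"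
  by (simp add: lbls_def set_structural)

lemma lbl_dist_structural: "\<not> is_atomic r \<Longrightarrow> lbl_dist (plug c (rconcl r)) = lbl_dist (plug c (rprem r))"
proof -
  assume "\<not> is_atomic r"
  then have "mset (map snd (atoms_of (plug c (rconcl r)))) = mset (map snd (atoms_of (plug c (rprem r))))"
    by (simp add: mset_atoms_plug mset_structural)
  then show ?thesis unfolding lbl_dist_def by (rule mset_eq_imp_distinct_iff)
qed

fun final :: "'x formula \<Rightarrow> ('x ctx \<times> 'x inst) list \<Rightarrow> 'x formula" where
  "final a [] = a"
| "final a ((c, r) # s) = final (plug c (rconcl r)) s"

lemma forms_ne: "forms a s \<noteq> []"
  by (induction a s rule: forms.induct) auto

lemma last_forms_final: "last (forms a s) = final a s"
  by (induction a s rule: forms.induct) (auto simp: forms_ne)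

lemma hd_forms: "hd (forms a s) = a"
  by (cases s) auto

lemma chain_ok_append: "chain_ok a (s1 @ s2) \<longleftrightarrow> chain_ok a s1 \<and> chain_ok (final a s1) s2"
  by (induction a s1 rule: chain_ok.induct) auto

lemma final_append: "final a (s1 @ s2) = final (final a s1) s2"
  by (induction a s1 rule: final.induct) auto

fun created :: "(('x \<times> nat) ctx \<times> ('x \<times> nat) inst) list \<Rightarrow> nat set" where
  "created [] = {}"
| "created ((c, r) # s) = (if is_atomic r then lbls (rconcl r) else {}) \<union> created s"

fun consumed :: "(('x \<times> nat) ctx \<times> ('x \<times> nat) inst) list \<Rightarrow> nat set" where
  "consumed [] = {}"
| "consumed ((c, r) # s) = (if is_atomic r then lbls (rprem r) else {}) \<union> consumed s"

text \<open>A vertex of the flow is represented by the signature of its atomic step.\<close>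
definition step_sig :: "('x \<times> nat) inst \<Rightarrow> vkind \<times> nat set \<times> nat set" where
  "step_sig r = (kind r, lbls (rprem r), lbls (rconcl r))"

fun step_sigs :: "(('x \<times> nat) ctx \<times> ('x \<times> nat) inst) list \<Rightarrow> (vkind \<times> nat set \<times> nat set) set" where
  "step_sigs [] = {}"
| "step_sigs ((c, r) # s) = (if is_atomic r then {step_sig r} else {}) \<union> step_sigs s"

lemma created_append[simp]: "created (s1 @ s2) = created s1 \<union> created s2"
  by (induction s1 rule: created.induct) auto
lemma consumed_append[simp]: "consumed (s1 @ s2) = consumed s1 \<union> consumed s2"
  by (induction s1 rule: consumed.induct) auto
lemma step_sigs_append[simp]: "step_sigs (s1 @ s2) = step_sigs s1 \<union> step_sigs s2"
  by (induction s1 rule: step_sigs.induct) auto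

text \<open>\<open>X\<close> collects the labels of all earlier formulas, which created labels must avoid.\<close>
fun well_labelled_from :: "nat set \<Rightarrow> ('x \<times> nat) formula \<Rightarrow> (('x \<times> nat) ctx \<times> ('x \<times> nat) inst) list \<Rightarrow> bool" where
  "well_labelled_from X a [] = lbl_dist a"
| "well_labelled_from X a ((c, r) # s) = (plug c (rprem r) = a \<and> lbl_dist a \<and>
      (is_atomic r \<longrightarrow> lbls (rconcl r) \<inter> (X \<union> lbls a) = {}) \<and>
      well_labelled_from (X \<union> lbls a) (plug c (rconcl r)) s)"

definition well_labelled :: "('x \<times> nat) formula \<Rightarrow> (('x \<times> nat) ctx \<times> ('x \<times> nat) inst) list \<Rightarrow> bool" where
  "well_labelled a s = well_labelled_from {} a s"

lemma well_labelled_from_iff: "well_labelled_from X a s \<longleftrightarrow> well_labelled_from {} a s \<and> X \<inter> created s = {}"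
proof (induction s arbitrary: X a)
  case Nil then show ?case by simp
next
  case (Cons st s)
  obtain c r where st: "st = (c, r)" by (cases st)
  show ?case using Cons.IH[of "X \<union> lbls a"] Cons.IH[of "lbls a"] unfolding st by auto
qed

lemma well_labelled_Nil[simp]: "well_labelled a [] = lbl_dist a" by (simp add: well_labelled_def)

lemma well_labelled_Cons: "well_labelled a ((c, r) # s) \<longleftrightarrow> plug c (rprem r) = a \<and> lbl_dist a \<and>
   (is_atomic r \<longrightarrow> lbls (rconcl r) \<inter> lbls a = {}) \<and> well_labelled (plug c (rconcl r)) s \<and>
   lbls a \<inter> created s = {}"
  unfolding well_labelled_def using well_labelled_from_iff[of "lbls a" "plug c (rconcl r)" s] by auto

lemma well_labelled_dist: "well_labelled a s \<Longrightarrow> lbl_dist a"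
proof (induction s)
  case (Cons st t) then show ?case by (cases st) (auto simp: well_labelled_Cons)
qed simp

lemma lbls_step: "plug c (rprem r) = a \<Longrightarrow>
   lbls (plug c (rconcl r)) \<subseteq> lbls a \<union> (if is_atomic r then lbls (rconcl r) else {})"
  by (auto simp: lbls_plug lbls_structural)

lemma well_labelled_chain: "well_labelled a s \<Longrightarrow> chain_ok a s"
  by (induction s arbitrary: a) (auto simp: well_labelled_Cons)

lemma well_labelled_final_lbls: "well_labelled a s \<Longrightarrow> lbls (final a s) \<subseteq> lbls a \<union> created s"
proof (induction s arbitrary: a)
  case Nil then show ?case by simp
next
  case (Cons st s)
  obtain c r where st: "st = (c, r)" by (cases st)
  from Cons.prems have "well_labelled (plug c (rconcl r)) s" "plug c (rprem r) = a" by (auto simp: st well_labelled_Cons)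
  with Cons.IH lbls_step[of c r a] show ?case unfolding st by (auto split: if_splits)
qed

lemma well_labelled_final_dist: "well_labelled a s \<Longrightarrow> lbl_dist (final a s)"
  by (induction s arbitrary: a) (auto simp: well_labelled_Cons)

lemma well_labelled_created_fresh: "well_labelled a s \<Longrightarrow> lbls a \<inter> created s = {}"
proof (induction s)
  case (Cons st t) then show ?case by (cases st) (auto simp: well_labelled_Cons)
qed simp

lemma well_labelled_append: "well_labelled a (s1 @ s2) \<longleftrightarrow>
   well_labelled a s1 \<and> well_labelled (final a s1) s2 \<and> (lbls a \<union> created s1) \<inter> created s2 = {}"
proof (induction s1 arbitrary: a)
  case Nil
  then show ?case using well_labelled_created_fresh[of a s2] well_labelled_dist[of a s2] by auto
next
  case (Cons st s1)
  obtain c r where st: "st = (c, r)" by (cases st)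
  show ?case unfolding st append_Cons well_labelled_Cons Cons.IH
    by (auto simp: lbls_plug lbls_structural)
qed

lemma well_labelled_appendI: "well_labelled a s1 \<Longrightarrow> final a s1 = b \<Longrightarrow> well_labelled b s2 \<Longrightarrow>
   (lbls a \<union> created s1) \<inter> created s2 = {} \<Longrightarrow>
   well_labelled a (s1 @ s2)"
  by (simp add: well_labelled_append)

lemma well_labelled_atom_const: "well_labelled a s \<Longrightarrow> (A, l) \<in> set (atoms_of a) \<Longrightarrow>
   (A', l) \<in> set (atoms_of (final a s)) \<Longrightarrow> A = A'"
proof (induction s arbitrary: a)
  case Nil
  then have "lbl_dist a" by simp
  then have "inj_on snd (set (atoms_of a))" by (simp add: lbl_dist_def distinct_map)
  then show ?case using inj_onD[of snd _ "(A, l)" "(A', l)"] Nil.prems(2,3) by auto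
next
  case (Cons st s)
  obtain c r where st: "st = (c, r)" by (cases st)
  from Cons.prems(1) have g: "plug c (rprem r) = a" "lbl_dist a" "is_atomic r \<longrightarrow> lbls (rconcl r) \<inter> lbls a = {}"
     "well_labelled (plug c (rconcl r)) s" "lbls a \<inter> created s = {}"
    by (auto simp: st well_labelled_Cons)
  have la: "l \<in> lbls a" using Cons.prems(2) by (force simp: lbls_def)
  have "l \<in> lbls (final (plug c (rconcl r)) s)" using Cons.prems(3) st by (force simp: lbls_def)
  then have lb: "l \<in> lbls (plug c (rconcl r))" using well_labelled_final_lbls[OF g(4)] g(5) la by blast
  have "(A, l) \<in> set (atoms_of (plug c (rconcl r)))"
  proof -
    have "(A, l) \<in> set (ctx_atoms c) \<or> (A, l) \<in> set (atoms_of (rprem r))"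
    proof -
      have "(A, l) \<in> set (atoms_of (plug c (rprem r)))" using Cons.prems(2) g(1) by simp
      then show ?thesis by (simp add: set_atoms_plug)
    qed
    then show ?thesis
    proof
      assume "(A, l) \<in> set (ctx_atoms c)" then show ?thesis by (simp add: set_atoms_plug)
    next
      assume A: "(A, l) \<in> set (atoms_of (rprem r))"
      show ?thesis
      proof (cases "is_atomic r")
        case False then show ?thesis using A set_structural[OF False] by (simp add: set_atoms_plug)
      next
        case True
        have "l \<in> lbls (rprem r)" using A by (force simp: lbls_def)
        moreover have "ctx_lbls c \<inter> lbls (rprem r) = {}" using g(1,2) lbl_dist_plug by blast
        ultimately show ?thesis using lb g(3) True la by (auto simp: lbls_plug)
      qed
    qed
  qed
  then show ?case using Cons.IH[OF g(4)] Cons.prems(3) st by simp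
qed

lemma all_le_Suc: "(\<forall>j\<le>Suc i. P j) \<longleftrightarrow> P 0 \<and> (\<forall>j\<le>i. P (Suc j))"
  by (metis Suc_le_mono le0 not0_implies_Suc)

lemma well_labelled_from_nth: "well_labelled_from X a s \<longleftrightarrow> chain_ok a s \<and> (\<forall>f\<in>set (forms a s). lbl_dist f) \<and>
   (\<forall>i<length s. is_atomic (snd (s ! i)) \<longrightarrow>
      (\<forall>e\<in>lbls (rconcl (snd (s ! i))). e \<notin> X \<and> (\<forall>j\<le>i. e \<notin> lbls (forms a s ! j))))"
proof (induction s arbitrary: X a)
  case Nil then show ?case by simp
next
  case (Cons st s)
  obtain c r where st: "st = (c, r)" by (cases st)
  show ?case unfolding st length_Cons All_less_Suc2
    by (simp add: Cons.IH all_le_Suc) blast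
qed

definition sks_steps :: "(('n atom \<times> nat) ctx \<times> ('n atom \<times> nat) inst) list \<Rightarrow> bool" where
  "sks_steps s \<longleftrightarrow> (\<forall>(c, r)\<in>set s. sks_inst (map_inst fst r))"

definition map_steps :: "('x \<Rightarrow> 'y) \<Rightarrow> ('x ctx \<times> 'x inst) list \<Rightarrow> ('y ctx \<times> 'y inst) list" where
  "map_steps h s = map (map_prod (map_ctx h) (map_inst h)) s"

lemma plug_map: "plug (map_ctx h c) (map_formula h f) = map_formula h (plug c f)"
  by (induction c) auto

lemma rprem_map: "rprem (map_inst h r) = map_formula h (rprem r)"
  by (cases r) auto
lemma rconcl_map: "rconcl (map_inst h r) = map_formula h (rconcl r)"
  by (cases r) auto
lemma is_atomic_map[simp]: "is_atomic (map_inst h r) = is_atomic r"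
  by (cases r) auto
lemma kind_map[simp]: "kind (map_inst h r) = kind r"
  by (cases r) auto
lemma atoms_of_map: "atoms_of (map_formula h f) = map h (atoms_of f)"
  by (induction f) auto

lemma map_steps_Nil[simp]: "map_steps h [] = []" by (simp add: map_steps_def)
lemma map_steps_Cons[simp]: "map_steps h ((c, r) # s) = (map_ctx h c, map_inst h r) # map_steps h s"
  by (simp add: map_steps_def)

lemma chain_ok_map: "chain_ok a s \<Longrightarrow> chain_ok (map_formula h a) (map_steps h s)"
  by (induction a s rule: chain_ok.induct) (auto simp: plug_map rprem_map rconcl_map)

lemma final_map: "final (map_formula h a) (map_steps h s) = map_formula h (final a s)"
  by (induction a s rule: final.induct) (auto simp: plug_map rconcl_map)

lemma erase_eq: "erase D = (map_formula fst (fst D), map_steps fst (snd D))"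
  by (simp add: erase_def map_steps_def)

lemma sks_deriv_erase: "chain_ok a s \<Longrightarrow> sks_steps s \<Longrightarrow> sks_deriv (erase (a, s))"
  unfolding sks_deriv_def erase_eq sks_steps_def
  using chain_ok_map[of a s fst] by (auto simp: map_steps_def)

lemma ann_ok_iff: "ann_ok D \<longleftrightarrow> well_labelled (fst D) (snd D) \<and> sks_steps (snd D)"
proof -
  have 1: "sks_deriv (erase D) \<Longrightarrow> sks_steps (snd D)"
    unfolding sks_deriv_def erase_eq sks_steps_def map_steps_def by auto
  show ?thesis unfolding ann_ok_def well_labelled_def well_labelled_from_nth
    using 1 sks_deriv_erase[of "fst D" "snd D"] by (auto simp: lbl_dist_def)
qed

lemma created_set: "created s = (\<Union>(c, r)\<in>set s. if is_atomic r then lbls (rconcl r) else {})"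
  by (induction s rule: created.induct) auto
lemma consumed_set: "consumed s = (\<Union>(c, r)\<in>set s. if is_atomic r then lbls (rprem r) else {})"
  by (induction s rule: consumed.induct) auto
lemma step_sigs_set: "step_sigs s = {step_sig r | c r. (c, r) \<in> set s \<and> is_atomic r}"
  by (induction s rule: step_sigs.induct) auto

lemma well_labelled_lbls_balance: "well_labelled a s \<Longrightarrow> lbls (final a s) \<union> consumed s = lbls a \<union> created s"
proof (induction s arbitrary: a)
  case Nil then show ?case by simp
next
  case (Cons st s)
  obtain c r where st: "st = (c, r)" by (cases st)
  from Cons.prems have g: "well_labelled (plug c (rconcl r)) s" "plug c (rprem r) = a" by (auto simp: st well_labelled_Cons)
  have IH: "lbls (final (plug c (rconcl r)) s) \<union> consumed s = ctx_lbls c \<union> lbls (rconcl r) \<union> created s"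
    using Cons.IH[OF g(1)] by (simp add: lbls_plug)
  have A: "lbls a = ctx_lbls c \<union> lbls (rprem r)" using g(2) by (auto simp: lbls_plug)
  show ?case
  proof (cases "is_atomic r")
    case True then show ?thesis using IH A unfolding st by auto
  next
    case False then show ?thesis using IH A lbls_structural[OF False] unfolding st by auto
  qed
qed

lemma well_labelled_consumed_final: "well_labelled a s \<Longrightarrow> consumed s \<inter> lbls (final a s) = {}"
proof (induction s arbitrary: a)
  case Nil then show ?case by simp
next
  case (Cons st s)
  obtain c r where st: "st = (c, r)" by (cases st)
  from Cons.prems have g: "well_labelled (plug c (rconcl r)) s" "plug c (rprem r) = a" "lbl_dist a"
    "is_atomic r \<longrightarrow> lbls (rconcl r) \<inter> lbls a = {}" "lbls a \<inter> created s = {}"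
    by (auto simp: st well_labelled_Cons)
  have "lbls (final (plug c (rconcl r)) s) \<subseteq> lbls (plug c (rconcl r)) \<union> created s"
    using well_labelled_final_lbls[OF g(1)] .
  moreover have "is_atomic r \<Longrightarrow> lbls (rprem r) \<inter> lbls (plug c (rconcl r)) = {}"
    using g(2,3,4) by (auto simp: lbls_plug lbl_dist_plug)
  moreover have "lbls (rprem r) \<subseteq> lbls a" using g(2) by (auto simp: lbls_plug)
  ultimately show ?case using Cons.IH[OF g(1)] g(5) unfolding st by (simp; blast)
qed

lemma well_labelled_all_lbls: "well_labelled a s \<Longrightarrow> (\<Union>f\<in>set (forms a s). lbls f) = lbls a \<union> created s"
proof (induction s arbitrary: a)
  case Nil then show ?case by simp
next
  case (Cons st s)
  obtain c r where st: "st = (c, r)" by (cases st)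
  from Cons.prems have g: "well_labelled (plug c (rconcl r)) s" "plug c (rprem r) = a" by (auto simp: st well_labelled_Cons)
  show ?case using Cons.IH[OF g(1)] g(2) unfolding st
    by (auto simp: lbls_plug lbls_structural)
qed

lemma created_mem: "(c, r) \<in> set s \<Longrightarrow> is_atomic r \<Longrightarrow> lbls (rconcl r) \<subseteq> created s"
  by (auto simp: created_set)
lemma consumed_mem: "(c, r) \<in> set s \<Longrightarrow> is_atomic r \<Longrightarrow> lbls (rprem r) \<subseteq> consumed s"
  by (auto simp: consumed_set)

lemma well_labelled_step_later: "well_labelled a (s1 @ (c, r) # s2) \<Longrightarrow> is_atomic r \<Longrightarrow>
   lbls (rconcl r) \<inter> created s2 = {} \<and> lbls (rprem r) \<inter> consumed s2 = {}"
proof -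
  assume g0: "well_labelled a (s1 @ (c, r) # s2)" and at: "is_atomic r"
  let ?b = "final a s1"
  from g0 have g: "well_labelled ?b ((c, r) # s2)" by (simp add: well_labelled_append)
  then have h: "plug c (rprem r) = ?b" "lbl_dist ?b" "lbls (rconcl r) \<inter> lbls ?b = {}"
     "well_labelled (plug c (rconcl r)) s2" "lbls ?b \<inter> created s2 = {}"
    using at by (auto simp: well_labelled_Cons)
  have 1: "lbls (rconcl r) \<inter> created s2 = {}"
    using well_labelled_created_fresh[OF h(4)] by (auto simp: lbls_plug)
  have "consumed s2 \<subseteq> lbls (plug c (rconcl r)) \<union> created s2"
    using well_labelled_lbls_balance[OF h(4)] by auto
  moreover have "ctx_lbls c \<inter> lbls (rprem r) = {}" using h(2) unfolding h(1)[symmetric] by (simp add: lbl_dist_plug)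
  moreover have "lbls (rprem r) \<subseteq> lbls ?b" unfolding h(1)[symmetric] by (simp add: lbls_plug)
  ultimately have 2: "lbls (rprem r) \<inter> consumed s2 = {}"
    using h(3,5) by (simp add: lbls_plug) blast
  show ?thesis using 1 2 by blast
qed

lemma well_labelled_step_earlier: "well_labelled a (s1 @ (c, r) # s2) \<Longrightarrow> is_atomic r \<Longrightarrow>
   lbls (rconcl r) \<inter> created s1 = {} \<and> lbls (rprem r) \<inter> consumed s1 = {}"
proof -
  assume g0: "well_labelled a (s1 @ (c, r) # s2)" and at: "is_atomic r"
  let ?b = "final a s1"
  from g0 have g: "well_labelled ?b ((c, r) # s2)" "well_labelled a s1" "(lbls a \<union> created s1) \<inter> created ((c,r)#s2) = {}"
    by (auto simp: well_labelled_append)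
  then have h: "plug c (rprem r) = ?b" by (auto simp: well_labelled_Cons)
  have 1: "lbls (rconcl r) \<inter> created s1 = {}" using g(3) at by auto
  have "lbls (rprem r) \<subseteq> lbls ?b" unfolding h[symmetric] by (simp add: lbls_plug)
  then have 2: "lbls (rprem r) \<inter> consumed s1 = {}" using well_labelled_consumed_final[OF g(2)] by auto
  show ?thesis using 1 2 by blast
qed

lemma atomic_nonempty: "is_atomic r \<Longrightarrow> lbls (rprem r) \<union> lbls (rconcl r) \<noteq> {}"
  by (cases r) auto

lemma well_labelled_nth_disjoint: "well_labelled a s \<Longrightarrow> i < j \<Longrightarrow> j < length s \<Longrightarrow>
   is_atomic (snd (s ! i)) \<Longrightarrow> is_atomic (snd (s ! j)) \<Longrightarrow>
   lbls (rconcl (snd (s ! i))) \<inter> lbls (rconcl (snd (s ! j))) = {} \<and>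
   lbls (rprem (snd (s ! i))) \<inter> lbls (rprem (snd (s ! j))) = {}"
proof -
  assume g: "well_labelled a s" and ij: "i < j" "j < length s" and at: "is_atomic (snd (s ! i))" "is_atomic (snd (s ! j))"
  obtain c r where cr: "s ! i = (c, r)" by (cases "s ! i")
  have i: "i < length s" using ij by simp
  have s: "s = take i s @ (c, r) # drop (Suc i) s" using id_take_nth_drop[OF i] cr by simp
  have e1: "drop (Suc i) s ! (j - Suc i) = s ! j" using ij by simp
  have e2: "j - Suc i < length (drop (Suc i) s)" using ij by simp
  have "s ! j \<in> set (drop (Suc i) s)" using nth_mem[OF e2] e1 by simp
  moreover obtain c' r' where m2: "s ! j = (c', r')" by (cases "s ! j")
  ultimately have m: "(c', r') \<in> set (drop (Suc i) s)" "s ! j = (c', r')" by auto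
  have l: "lbls (rconcl r) \<inter> created (drop (Suc i) s) = {} \<and> lbls (rprem r) \<inter> consumed (drop (Suc i) s) = {}"
    using well_labelled_step_later[of a "take i s" c r "drop (Suc i) s"] g s at cr by simp
  show ?thesis using l created_mem[OF m(1)] consumed_mem[OF m(1)] at cr m(2) by auto
qed

lemma well_labelled_sig_inj: "well_labelled a s \<Longrightarrow> inj_on (\<lambda>i. step_sig (snd (s ! i))) {i. i < length s \<and> is_atomic (snd (s ! i))}"
proof (rule inj_onI)
  fix i j
  assume g: "well_labelled a s" and iA: "i \<in> {i. i < length s \<and> is_atomic (snd (s ! i))}"
    and jA: "j \<in> {i. i < length s \<and> is_atomic (snd (s ! i))}"
    and eq: "step_sig (snd (s ! i)) = step_sig (snd (s ! j))"
  show "i = j"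
  proof (rule ccontr)
    assume "i \<noteq> j"
    then have "i < j \<or> j < i" by arith
    then have "lbls (rconcl (snd (s ! i))) \<inter> lbls (rconcl (snd (s ! j))) = {} \<and>
      lbls (rprem (snd (s ! i))) \<inter> lbls (rprem (snd (s ! j))) = {}"
      using well_labelled_nth_disjoint[OF g] iA jA by auto
    then show False using eq atomic_nonempty[of "snd (s ! i)"] iA by (auto simp: step_sig_def)
  qed
qed

lemma step_sigs_nth: "step_sigs s = (\<lambda>i. step_sig (snd (s ! i))) ` {i. i < length s \<and> is_atomic (snd (s ! i))}"
proof
  show "step_sigs s \<subseteq> (\<lambda>i. step_sig (snd (s ! i))) ` {i. i < length s \<and> is_atomic (snd (s ! i))}"
  proof
    fix x assume "x \<in> step_sigs s"
    then obtain c r where cr: "x = step_sig r" "(c, r) \<in> set s" "is_atomic r" unfolding step_sigs_set by blast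
    then obtain i where "i < length s" "s ! i = (c, r)" by (auto simp: in_set_conv_nth)
    then show "x \<in> (\<lambda>i. step_sig (snd (s ! i))) ` {i. i < length s \<and> is_atomic (snd (s ! i))}"
      using cr by force
  qed
next
  show "(\<lambda>i. step_sig (snd (s ! i))) ` {i. i < length s \<and> is_atomic (snd (s ! i))} \<subseteq> step_sigs s"
  proof
    fix x assume "x \<in> (\<lambda>i. step_sig (snd (s ! i))) ` {i. i < length s \<and> is_atomic (snd (s ! i))}"
    then obtain i where i: "i < length s" "is_atomic (snd (s ! i))" "x = step_sig (snd (s ! i))" by blast
    have "(fst (s ! i), snd (s ! i)) \<in> set s" using i(1) by simp
    then show "x \<in> step_sigs s" unfolding step_sigs_set using i by blast
  qed
qed

lemma step_sigs_out_created: "\<sigma> \<in> step_sigs s \<Longrightarrow> snd (snd \<sigma>) \<subseteq> created s"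
  unfolding step_sigs_set created_set step_sig_def by auto
lemma step_sigs_in_consumed: "\<sigma> \<in> step_sigs s \<Longrightarrow> fst (snd \<sigma>) \<subseteq> consumed s"
  unfolding step_sigs_set consumed_set step_sig_def by auto
lemma created_step_sigs: "created s = \<Union> ((snd \<circ> snd) ` step_sigs s)"
  by (induction s rule: created.induct) (auto simp: step_sig_def)
lemma consumed_step_sigs: "consumed s = \<Union> ((fst \<circ> snd) ` step_sigs s)"
  by (induction s rule: consumed.induct) (auto simp: step_sig_def)

lemma well_labelled_sigs_disjoint:
  "well_labelled a s \<Longrightarrow> \<sigma>1 \<in> step_sigs s \<Longrightarrow> \<sigma>2 \<in> step_sigs s \<Longrightarrow> \<sigma>1 \<noteq> \<sigma>2 \<Longrightarrow>
   snd (snd \<sigma>1) \<inter> snd (snd \<sigma>2) = {} \<and> fst (snd \<sigma>1) \<inter> fst (snd \<sigma>2) = {}"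
proof -
  assume g: "well_labelled a s" and m: "\<sigma>1 \<in> step_sigs s" "\<sigma>2 \<in> step_sigs s" and ne: "\<sigma>1 \<noteq> \<sigma>2"
  obtain i where i: "i < length s" "is_atomic (snd (s ! i))" "\<sigma>1 = step_sig (snd (s ! i))"
    using m(1) step_sigs_nth by blast
  obtain j where j: "j < length s" "is_atomic (snd (s ! j))" "\<sigma>2 = step_sig (snd (s ! j))"
    using m(2) step_sigs_nth by blast
  have "i \<noteq> j" using i j ne by auto
  then have "i < j \<or> j < i" by arith
  then show ?thesis using well_labelled_nth_disjoint[OF g] i j by (auto simp: step_sig_def)
qed

section \<open>The atomic flow of a well-labelled derivation\<close>

text \<open>Edges are labels: an edge leaves the vertex whose signature creates it, unless it is in \<open>P\<close>,
  and enters the vertex whose signature consumes it, unless it is in \<open>Q\<close>.\<close>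
definition sig_flow :: "nat set \<Rightarrow> (vkind \<times> nat set \<times> nat set) set \<Rightarrow> nat set \<Rightarrow>
    (vkind \<times> nat set \<times> nat set, nat) flow" where
  "sig_flow P Sg Q = \<lparr> fV = Sg, fE = P \<union> \<Union> ((snd \<circ> snd) ` Sg), flab = fst,
     fup = (\<lambda>e. if e \<in> P then None else Some (THE \<sigma>. \<sigma> \<in> Sg \<and> e \<in> snd (snd \<sigma>))),
     flo = (\<lambda>e. if e \<in> Q then None else Some (THE \<sigma>. \<sigma> \<in> Sg \<and> e \<in> fst (snd \<sigma>))) \<rparr>"

abbreviation "steps_flow a s \<equiv> sig_flow (lbls a) (step_sigs s) (lbls (final a s))"

lemma the_step_sig_out: "well_labelled a s \<Longrightarrow> \<sigma> \<in> step_sigs s \<Longrightarrow> e \<in> snd (snd \<sigma>) \<Longrightarrow>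
   (THE \<sigma>. \<sigma> \<in> step_sigs s \<and> e \<in> snd (snd \<sigma>)) = \<sigma>"
  by (rule the_equality) (use well_labelled_sigs_disjoint in blast)+

lemma the_step_sig_in: "well_labelled a s \<Longrightarrow> \<sigma> \<in> step_sigs s \<Longrightarrow> e \<in> fst (snd \<sigma>) \<Longrightarrow>
   (THE \<sigma>. \<sigma> \<in> step_sigs s \<and> e \<in> fst (snd \<sigma>)) = \<sigma>"
  by (rule the_equality) (use well_labelled_sigs_disjoint in blast)+

lemma step_sigs_nonempty: "\<sigma> \<in> step_sigs s \<Longrightarrow> fst (snd \<sigma>) \<union> snd (snd \<sigma>) \<noteq> {}"
  unfolding step_sigs_set step_sig_def using atomic_nonempty by fastforce

lemma created_ex: "l \<in> created s \<Longrightarrow> \<exists>\<sigma>\<in>step_sigs s. l \<in> snd (snd \<sigma>)"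
  unfolding created_step_sigs by auto
lemma consumed_ex: "l \<in> consumed s \<Longrightarrow> \<exists>\<sigma>\<in>step_sigs s. l \<in> fst (snd \<sigma>)"
  unfolding consumed_step_sigs by auto

lemma the_step_out: "well_labelled a s \<Longrightarrow> i < length s \<Longrightarrow> is_atomic (snd (s ! i)) \<Longrightarrow> e \<in> lbls (rconcl (snd (s ! i))) \<Longrightarrow>
  (THE i. i < length s \<and> is_atomic (snd (s ! i)) \<and> e \<in> lbls (rconcl (snd (s ! i)))) = i"
proof (rule the_equality)
  fix j assume g: "well_labelled a s" and i: "i < length s" "is_atomic (snd (s ! i))" "e \<in> lbls (rconcl (snd (s ! i)))"
    and j: "j < length s \<and> is_atomic (snd (s ! j)) \<and> e \<in> lbls (rconcl (snd (s ! j)))"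
  show "j = i"
  proof (rule ccontr)
    assume "j \<noteq> i" then have "i < j \<or> j < i" by arith
    then show False using well_labelled_nth_disjoint[OF g] i j by fastforce
  qed
qed simp

lemma the_step_in: "well_labelled a s \<Longrightarrow> i < length s \<Longrightarrow> is_atomic (snd (s ! i)) \<Longrightarrow> e \<in> lbls (rprem (snd (s ! i))) \<Longrightarrow>
  (THE i. i < length s \<and> is_atomic (snd (s ! i)) \<and> e \<in> lbls (rprem (snd (s ! i)))) = i"
proof (rule the_equality)
  fix j assume g: "well_labelled a s" and i: "i < length s" "is_atomic (snd (s ! i))" "e \<in> lbls (rprem (snd (s ! i)))"
    and j: "j < length s \<and> is_atomic (snd (s ! j)) \<and> e \<in> lbls (rprem (snd (s ! j)))"
  show "j = i"
  proof (rule ccontr)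
    assume "j \<noteq> i" then have "i < j \<or> j < i" by arith
    then show False using well_labelled_nth_disjoint[OF g] i j by fastforce
  qed
qed simp

lemma flow_of_ann_endpoints:
  assumes g: "well_labelled a s"
  shows "\<forall>e\<in>fE (flow_of_ann (a, s)). (\<forall>v. fup (flow_of_ann (a, s)) e = Some v \<longrightarrow> v \<in> fV (flow_of_ann (a, s))) \<and>
     (\<forall>v. flo (flow_of_ann (a, s)) e = Some v \<longrightarrow> v \<in> fV (flow_of_ann (a, s)))"
proof (intro ballI conjI allI impI)
  fix e v assume e: "e \<in> fE (flow_of_ann (a, s))"
  then have eE: "e \<in> lbls a \<union> created s" using well_labelled_all_lbls[OF g] by (simp add: flow_of_ann_def Let_def)
  {
    assume u: "fup (flow_of_ann (a, s)) e = Some v"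
    then have n: "e \<notin> lbls a" by (simp add: flow_of_ann_def Let_def hd_forms split: if_splits)
    then have "e \<in> created s" using eE by blast
    then obtain c r where cr: "(c, r) \<in> set s" "is_atomic r" "e \<in> lbls (rconcl r)"
      by (auto simp: created_set split: if_splits)
    then obtain i where i: "i < length s" "s ! i = (c, r)" by (auto simp: in_set_conv_nth)
    have "v = i" using u n the_step_out[OF g i(1), of e] i cr by (simp add: flow_of_ann_def Let_def hd_forms)
    then show "v \<in> fV (flow_of_ann (a, s))" using i cr by (simp add: flow_of_ann_def Let_def)
  }
  {
    assume u: "flo (flow_of_ann (a, s)) e = Some v"
    then have n: "e \<notin> lbls (final a s)" by (simp add: flow_of_ann_def Let_def last_forms_final split: if_splits)
    then have "e \<in> consumed s" using eE well_labelled_lbls_balance[OF g] by blast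
    then obtain c r where cr: "(c, r) \<in> set s" "is_atomic r" "e \<in> lbls (rprem r)"
      by (auto simp: consumed_set split: if_splits)
    then obtain i where i: "i < length s" "s ! i = (c, r)" by (auto simp: in_set_conv_nth)
    have "v = i" using u n the_step_in[OF g i(1), of e] i cr by (simp add: flow_of_ann_def Let_def last_forms_final)
    then show "v \<in> fV (flow_of_ann (a, s))" using i cr by (simp add: flow_of_ann_def Let_def)
  }
qed

lemma steps_flow_fup_Some: assumes g: "well_labelled a s" and e: "e \<in> lbls a \<union> created s" and u: "fup (steps_flow a s) e = Some \<sigma>"
  shows "\<sigma> \<in> step_sigs s \<and> e \<in> snd (snd \<sigma>)"
proof -
  have n: "e \<notin> lbls a" using u by (simp add: sig_flow_def split: if_splits)
  then have "e \<in> created s" using e by blast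
  then obtain \<sigma>' where s': "\<sigma>' \<in> step_sigs s" "e \<in> snd (snd \<sigma>')" using created_ex by blast
  have "(THE \<sigma>. \<sigma> \<in> step_sigs s \<and> e \<in> snd (snd \<sigma>)) = \<sigma>'" using the_step_sig_out[OF g s'] .
  then have "\<sigma> = \<sigma>'" using u n by (simp add: sig_flow_def)
  then show ?thesis using s' by simp
qed

lemma steps_flow_flo_Some: assumes g: "well_labelled a s" and e: "e \<in> lbls a \<union> created s" and u: "flo (steps_flow a s) e = Some \<sigma>"
  shows "\<sigma> \<in> step_sigs s \<and> e \<in> fst (snd \<sigma>)"
proof -
  have n: "e \<notin> lbls (final a s)" using u by (simp add: sig_flow_def split: if_splits)
  then have "e \<in> consumed s" using e well_labelled_lbls_balance[OF g] by blast
  then obtain \<sigma>' where s': "\<sigma>' \<in> step_sigs s" "e \<in> fst (snd \<sigma>')" using consumed_ex by blast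
  have "(THE \<sigma>. \<sigma> \<in> step_sigs s \<and> e \<in> fst (snd \<sigma>)) = \<sigma>'" using the_step_sig_in[OF g s'] .
  then have "\<sigma> = \<sigma>'" using u n by (simp add: sig_flow_def)
  then show ?thesis using s' by simp
qed

lemma steps_flow_fup_eq:
  assumes g: "well_labelled a s" and e: "e \<in> lbls a \<union> created s"
  shows "fup (steps_flow a s) e = map_option (\<lambda>i. step_sig (snd (s ! i))) (fup (flow_of_ann (a, s)) e)"
proof (cases "e \<in> lbls a")
  case True then show ?thesis by (simp add: sig_flow_def flow_of_ann_def Let_def hd_forms)
next
  case False
  then have "e \<in> created s" using e by simp
  then obtain c r where cr: "(c, r) \<in> set s" "is_atomic r" "e \<in> lbls (rconcl r)"
    by (auto simp: created_set split: if_splits)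
  then obtain i where i: "i < length s" "s ! i = (c, r)" by (auto simp: in_set_conv_nth)
  have th: "(THE i. i < length s \<and> is_atomic (snd (s ! i)) \<and> e \<in> lbls (rconcl (snd (s ! i)))) = i"
    using the_step_out[OF g i(1)] i cr by simp
  have sm: "step_sig r \<in> step_sigs s" using cr by (auto simp: step_sigs_set)
  have "(THE \<sigma>. \<sigma> \<in> step_sigs s \<and> e \<in> snd (snd \<sigma>)) = step_sig r"
    using the_step_sig_out[OF g sm] cr by (simp add: step_sig_def)
  then show ?thesis using False th i by (simp add: sig_flow_def flow_of_ann_def Let_def hd_forms)
qed

lemma steps_flow_flo_eq:
  assumes g: "well_labelled a s" and e: "e \<in> lbls a \<union> created s"
  shows "flo (steps_flow a s) e = map_option (\<lambda>i. step_sig (snd (s ! i))) (flo (flow_of_ann (a, s)) e)"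
proof (cases "e \<in> lbls (final a s)")
  case True then show ?thesis by (simp add: sig_flow_def flow_of_ann_def Let_def last_forms_final)
next
  case False
  then have "e \<in> consumed s" using e well_labelled_lbls_balance[OF g] by blast
  then obtain c r where cr: "(c, r) \<in> set s" "is_atomic r" "e \<in> lbls (rprem r)"
    by (auto simp: consumed_set split: if_splits)
  then obtain i where i: "i < length s" "s ! i = (c, r)" by (auto simp: in_set_conv_nth)
  have th: "(THE i. i < length s \<and> is_atomic (snd (s ! i)) \<and> e \<in> lbls (rprem (snd (s ! i)))) = i"
    using the_step_in[OF g i(1)] i cr by simp
  have sm: "step_sig r \<in> step_sigs s" using cr by (auto simp: step_sigs_set)
  have "(THE \<sigma>. \<sigma> \<in> step_sigs s \<and> e \<in> fst (snd \<sigma>)) = step_sig r"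
    using the_step_sig_in[OF g sm] cr by (simp add: step_sig_def)
  then show ?thesis using False th i by (simp add: sig_flow_def flow_of_ann_def Let_def last_forms_final)
qed

lemma flow_of_ann_iso_steps_flow:
  assumes g: "well_labelled a s"
  shows "flow_iso (flow_of_ann (a, s)) (steps_flow a s)"
proof -
  let ?V = "{i. i < length s \<and> is_atomic (snd (s ! i))}"
  let ?fv = "\<lambda>i. step_sig (snd (s ! i))"
  have E1: "fE (flow_of_ann (a, s)) = lbls a \<union> created s"
    using well_labelled_all_lbls[OF g] by (simp add: flow_of_ann_def Let_def)
  have E2: "fE (steps_flow a s) = lbls a \<union> created s"
    by (simp add: sig_flow_def created_step_sigs)
  have V: "fV (flow_of_ann (a, s)) = ?V" by (simp add: flow_of_ann_def Let_def)
  have bv: "bij_betw ?fv ?V (step_sigs s)"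
    using well_labelled_sig_inj[OF g] step_sigs_nth[of s] by (simp add: bij_betw_def)
  show ?thesis unfolding flow_iso_def
  proof (intro exI conjI)
    show "bij_betw ?fv (fV (flow_of_ann (a, s))) (fV (steps_flow a s))" using bv V by (simp add: sig_flow_def)
    show "bij_betw id (fE (flow_of_ann (a, s))) (fE (steps_flow a s))" using E1 E2 by simp
    show "\<forall>v\<in>fV (flow_of_ann (a, s)). flab (steps_flow a s) (?fv v) = flab (flow_of_ann (a, s)) v"
      by (simp add: sig_flow_def flow_of_ann_def Let_def step_sig_def)
    show "\<forall>e\<in>fE (flow_of_ann (a, s)). fup (steps_flow a s) (id e) = map_option ?fv (fup (flow_of_ann (a, s)) e) \<and>
        flo (steps_flow a s) (id e) = map_option ?fv (flo (flow_of_ann (a, s)) e)"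
      using steps_flow_fup_eq[OF g] steps_flow_flo_eq[OF g] E1 by simp
  qed
qed

fun ctx_comp :: "'x ctx \<Rightarrow> 'x ctx \<Rightarrow> 'x ctx" where
  "ctx_comp Hole d = d"
| "ctx_comp (DL c b) d = DL (ctx_comp c d) b"
| "ctx_comp (DR b c) d = DR b (ctx_comp c d)"
| "ctx_comp (CL c b) d = CL (ctx_comp c d) b"
| "ctx_comp (CR b c) d = CR b (ctx_comp c d)"

lemma plug_ctx_comp[simp]: "plug (ctx_comp c d) f = plug c (plug d f)"
  by (induction c) auto

definition lift_steps :: "'x ctx \<Rightarrow> ('x ctx \<times> 'x inst) list \<Rightarrow> ('x ctx \<times> 'x inst) list" where
  "lift_steps c0 s = map (\<lambda>(c, r). (ctx_comp c0 c, r)) s"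

lemma lift_steps_Nil[simp]: "lift_steps c0 [] = []" by (simp add: lift_steps_def)
lemma lift_steps_Cons[simp]: "lift_steps c0 ((c, r) # s) = (ctx_comp c0 c, r) # lift_steps c0 s" by (simp add: lift_steps_def)
lemma lift_steps_append[simp]: "lift_steps c0 (s1 @ s2) = lift_steps c0 s1 @ lift_steps c0 s2" by (simp add: lift_steps_def)

lemma final_lift: "final (plug c0 a) (lift_steps c0 s) = plug c0 (final a s)"
  by (induction a s rule: final.induct) auto

lemma created_lift[simp]: "created (lift_steps c0 s) = created s"
  by (induction s rule: created.induct) auto
lemma step_sigs_lift[simp]: "step_sigs (lift_steps c0 s) = step_sigs s"
  by (induction s rule: step_sigs.induct) auto

lemma sks_steps_lift[simp]: "sks_steps (lift_steps c0 s) = sks_steps s"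
  by (auto simp: sks_steps_def lift_steps_def)

lemma well_labelled_lift: "well_labelled a s \<Longrightarrow> lbl_dist (plug c0 a) \<Longrightarrow> ctx_lbls c0 \<inter> created s = {} \<Longrightarrow>
    well_labelled (plug c0 a) (lift_steps c0 s)"
proof (induction s arbitrary: a)
  case Nil then show ?case by simp
next
  case (Cons st s)
  obtain c r where st: "st = (c, r)" by (cases st)
  from Cons.prems have g: "plug c (rprem r) = a" "lbl_dist a" "is_atomic r \<longrightarrow> lbls (rconcl r) \<inter> lbls a = {}"
     "well_labelled (plug c (rconcl r)) s" "lbls a \<inter> created s = {}"
    by (auto simp: st well_labelled_Cons)
  have d0: "lbl_dist (plug c0 a)" "ctx_lbls c0 \<inter> created ((c, r) # s) = {}" using Cons.prems st by auto
  have lb: "lbls (plug c (rconcl r)) \<subseteq> lbls a \<union> (if is_atomic r then lbls (rconcl r) else {})"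
    using lbls_step[OF g(1)] .
  have dn: "lbl_dist (plug c (rconcl r))" using well_labelled_dist[OF g(4)] .
  have dd: "lbl_dist (plug c0 (plug c (rconcl r)))"
    unfolding lbl_dist_plug[of c0] using d0 dn lb by (auto simp: lbl_dist_plug split: if_splits)
  have ih: "well_labelled (plug c0 (plug c (rconcl r))) (lift_steps c0 s)"
    using Cons.IH[OF g(4) dd] d0 by auto
  show ?case unfolding st lift_steps_Cons well_labelled_Cons
    using g d0 ih by (auto simp: lbls_plug)
qed

abbreviation relabel :: "(nat \<Rightarrow> nat) \<Rightarrow> ('x \<times> nat) formula \<Rightarrow> ('x \<times> nat) formula" where
  "relabel g f \<equiv> map_formula (apsnd g) f"

abbreviation relabel_steps where "relabel_steps g s \<equiv> map_steps (apsnd g) s"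

definition relabel_sig :: "(nat \<Rightarrow> nat) \<Rightarrow> vkind \<times> nat set \<times> nat set \<Rightarrow> vkind \<times> nat set \<times> nat set" where
  "relabel_sig g \<sigma> = (fst \<sigma>, g ` fst (snd \<sigma>), g ` snd (snd \<sigma>))"

lemma lbls_relabel[simp]: "lbls (relabel g f) = g ` lbls f"
  by (auto simp: lbls_def atoms_of_map image_image)

lemma relabel_cong: "(\<And>l. l \<in> lbls f \<Longrightarrow> g l = g' l) \<Longrightarrow> relabel g f = relabel g' f"
  by (induction f) auto

lemma map_snd_apsnd: "map snd (map (apsnd g) xs) = map g (map snd xs)"
  by (induction xs) auto

lemma distinct_map_inj: "inj g \<Longrightarrow> distinct (map g ys) = distinct ys"
  by (simp add: distinct_map inj_on_subset[of g UNIV])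

lemma lbl_dist_relabel: "inj g \<Longrightarrow> lbl_dist (relabel g f) = lbl_dist f"
  unfolding lbl_dist_def atoms_of_map map_snd_apsnd by (rule distinct_map_inj)

lemma created_relabel: "created (relabel_steps g s) = g ` created s"
  by (induction s rule: created.induct) (auto simp: rconcl_map)
lemma step_sigs_relabel: "step_sigs (relabel_steps g s) = relabel_sig g ` step_sigs s"
  by (induction s rule: step_sigs.induct) (auto simp: rprem_map rconcl_map step_sig_def relabel_sig_def)

lemma sks_steps_relabel: "sks_steps (relabel_steps g s) = sks_steps s"
  by (auto simp: sks_steps_def map_steps_def inst.map_comp comp_def)

lemma well_labelled_relabel: "inj g \<Longrightarrow> well_labelled a s \<Longrightarrow> well_labelled (relabel g a) (relabel_steps g s)"
proof (induction s arbitrary: a)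
  case Nil then show ?case by (simp add: lbl_dist_relabel)
next
  case (Cons st s)
  obtain c r where st: "st = (c, r)" by (cases st)
  from Cons.prems have g: "plug c (rprem r) = a" "lbl_dist a" "is_atomic r \<longrightarrow> lbls (rconcl r) \<inter> lbls a = {}"
     "well_labelled (plug c (rconcl r)) s" "lbls a \<inter> created s = {}"
    by (auto simp: st well_labelled_Cons)
  have ih: "well_labelled (relabel g (plug c (rconcl r))) (relabel_steps g s)" using Cons.IH[OF Cons.prems(1) g(4)] .
  show ?case unfolding st map_steps_Cons well_labelled_Cons
    using g ih Cons.prems(1)
    by (auto simp: plug_map rprem_map rconcl_map lbl_dist_relabel created_relabel image_Int[symmetric])
qed

lemma erase_relabel: "map_formula fst (relabel g f) = map_formula fst f"
  by (simp add: formula.map_comp comp_def)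

fun subst_lbl :: "nat \<Rightarrow> ('x \<times> nat) formula \<Rightarrow> ('x \<times> nat) formula \<Rightarrow> ('x \<times> nat) formula" where
  "subst_lbl l u Ff = Ff"
| "subst_lbl l u Tt = Tt"
| "subst_lbl l u (At x) = (if snd x = l then u else At x)"
| "subst_lbl l u (Dis a b) = Dis (subst_lbl l u a) (subst_lbl l u b)"
| "subst_lbl l u (Con a b) = Con (subst_lbl l u a) (subst_lbl l u b)"

fun subst_ctx :: "nat \<Rightarrow> ('x \<times> nat) formula \<Rightarrow> ('x \<times> nat) ctx \<Rightarrow> ('x \<times> nat) ctx" where
  "subst_ctx l u Hole = Hole"
| "subst_ctx l u (DL c b) = DL (subst_ctx l u c) (subst_lbl l u b)"
| "subst_ctx l u (DR b c) = DR (subst_lbl l u b) (subst_ctx l u c)"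
| "subst_ctx l u (CL c b) = CL (subst_ctx l u c) (subst_lbl l u b)"
| "subst_ctx l u (CR b c) = CR (subst_lbl l u b) (subst_ctx l u c)"

fun subst_inst :: "nat \<Rightarrow> ('x \<times> nat) formula \<Rightarrow> ('x \<times> nat) inst \<Rightarrow> ('x \<times> nat) inst" where
  "subst_inst l u (RSw a b c) = RSw (subst_lbl l u a) (subst_lbl l u b) (subst_lbl l u c)"
| "subst_inst l u (RMed a b c d) = RMed (subst_lbl l u a) (subst_lbl l u b) (subst_lbl l u c) (subst_lbl l u d)"
| "subst_inst l u (RCommD a b) = RCommD (subst_lbl l u a) (subst_lbl l u b)"
| "subst_inst l u (RCommC a b) = RCommC (subst_lbl l u a) (subst_lbl l u b)"
| "subst_inst l u (RAssocD a b c) = RAssocD (subst_lbl l u a) (subst_lbl l u b) (subst_lbl l u c)"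
| "subst_inst l u (RAssocD' a b c) = RAssocD' (subst_lbl l u a) (subst_lbl l u b) (subst_lbl l u c)"
| "subst_inst l u (RAssocC a b c) = RAssocC (subst_lbl l u a) (subst_lbl l u b) (subst_lbl l u c)"
| "subst_inst l u (RAssocC' a b c) = RAssocC' (subst_lbl l u a) (subst_lbl l u b) (subst_lbl l u c)"
| "subst_inst l u (RUnitF a) = RUnitF (subst_lbl l u a)"
| "subst_inst l u (RUnitF' a) = RUnitF' (subst_lbl l u a)"
| "subst_inst l u (RUnitT a) = RUnitT (subst_lbl l u a)"
| "subst_inst l u (RUnitT' a) = RUnitT' (subst_lbl l u a)"
| "subst_inst l u r = r"

lemma plug_subst: "plug (subst_ctx l u c) (subst_lbl l u f) = subst_lbl l u (plug c f)"
  by (induction c) auto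

lemma subst_lbl_id: "l \<notin> lbls f \<Longrightarrow> subst_lbl l u f = f"
  by (induction f) auto

lemma subst_ctx_id: "l \<notin> ctx_lbls c \<Longrightarrow> subst_ctx l u c = c"
  by (induction c) (auto simp: subst_lbl_id)

lemma subst_inst_atomic: "is_atomic r \<Longrightarrow> subst_inst l u r = r"
  by (cases r) auto

lemma is_atomic_subst_inst[simp]: "is_atomic (subst_inst l u r) = is_atomic r"
  by (cases r) auto

lemma subst_inst_structural: "\<not> is_atomic r \<Longrightarrow> rprem (subst_inst l u r) = subst_lbl l u (rprem r) \<and> rconcl (subst_inst l u r) = subst_lbl l u (rconcl r)"
  by (cases r) auto

definition avoids :: "nat \<Rightarrow> (('x \<times> nat) ctx \<times> ('x \<times> nat) inst) list \<Rightarrow> bool" where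
  "avoids l s \<longleftrightarrow> (\<forall>(c, r)\<in>set s. is_atomic r \<longrightarrow> l \<notin> lbls (rprem r) \<and> l \<notin> lbls (rconcl r))"

definition subst_steps :: "nat \<Rightarrow> ('x \<times> nat) formula \<Rightarrow> (('x \<times> nat) ctx \<times> ('x \<times> nat) inst) list \<Rightarrow>
    (('x \<times> nat) ctx \<times> ('x \<times> nat) inst) list" where
  "subst_steps l u s = map (\<lambda>(c, r). (subst_ctx l u c, subst_inst l u r)) s"

lemma subst_steps_Nil[simp]: "subst_steps l u [] = []" by (simp add: subst_steps_def)
lemma subst_steps_Cons[simp]: "subst_steps l u ((c, r) # s) = (subst_ctx l u c, subst_inst l u r) # subst_steps l u s" by (simp add: subst_steps_def)

lemma avoids_Nil[simp]: "avoids l []" by (simp add: avoids_def)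
lemma avoids_Cons[simp]: "avoids l ((c, r) # s) \<longleftrightarrow> (is_atomic r \<longrightarrow> l \<notin> lbls (rprem r) \<and> l \<notin> lbls (rconcl r)) \<and> avoids l s"
  by (simp add: avoids_def)

lemma subst_step: "avoids l [(c, r)] \<Longrightarrow> rprem (subst_inst l u r) = subst_lbl l u (rprem r) \<and> rconcl (subst_inst l u r) = subst_lbl l u (rconcl r)"
  by (cases "is_atomic r") (auto simp: subst_inst_structural subst_inst_atomic subst_lbl_id avoids_def)

lemma final_subst: "avoids l s \<Longrightarrow> final (subst_lbl l u a) (subst_steps l u s) = subst_lbl l u (final a s)"
proof (induction a s rule: final.induct)
  case (2 a c r s)
  then show ?case using subst_step[of l c r u] by (simp add: plug_subst)
qed simp

lemma atoms_subst: "atoms_of u = [] \<Longrightarrow> atoms_of (subst_lbl l u f) = filter (\<lambda>x. snd x \<noteq> l) (atoms_of f)"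
  by (induction f) auto

lemma lbls_subst: "atoms_of u = [] \<Longrightarrow> lbls (subst_lbl l u f) = lbls f - {l}"
  by (auto simp: lbls_def atoms_subst)

lemma lbl_dist_subst: "atoms_of u = [] \<Longrightarrow> lbl_dist f \<Longrightarrow> lbl_dist (subst_lbl l u f)"
  by (simp add: lbl_dist_def atoms_subst distinct_map_filter)

lemma created_subst[simp]: "created (subst_steps l u s) = created s"
  by (induction s rule: created.induct) (auto simp: subst_inst_atomic)
lemma step_sigs_subst[simp]: "step_sigs (subst_steps l u s) = step_sigs s"
  by (induction s rule: step_sigs.induct) (auto simp: subst_inst_atomic)

lemma sks_inst_subst: "sks_inst (map_inst fst r) \<Longrightarrow> sks_inst (map_inst fst (subst_inst l u r))"
  by (cases r) auto

lemma sks_steps_subst: "sks_steps s \<Longrightarrow> sks_steps (subst_steps l u s)"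
  by (auto simp: sks_steps_def subst_steps_def sks_inst_subst)

lemma well_labelled_subst: "atoms_of u = [] \<Longrightarrow> avoids l s \<Longrightarrow> well_labelled a s \<Longrightarrow> well_labelled (subst_lbl l u a) (subst_steps l u s)"
proof (induction s arbitrary: a)
  case Nil then show ?case by (simp add: lbl_dist_subst)
next
  case (Cons st s)
  obtain c r where st: "st = (c, r)" by (cases st)
  from Cons.prems have g: "plug c (rprem r) = a" "lbl_dist a" "is_atomic r \<longrightarrow> lbls (rconcl r) \<inter> lbls a = {}"
     "well_labelled (plug c (rconcl r)) s" "lbls a \<inter> created s = {}" "avoids l s" "avoids l [(c, r)]"
    by (auto simp: st well_labelled_Cons)
  have ih: "well_labelled (subst_lbl l u (plug c (rconcl r))) (subst_steps l u s)" using Cons.IH[OF Cons.prems(1) g(6) g(4)] .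
  show ?case unfolding st subst_steps_Cons well_labelled_Cons
    using g ih subst_step[OF g(7), of u] Cons.prems(1)
    by (auto simp: plug_subst lbl_dist_subst lbls_subst subst_inst_atomic)
qed

definition structural :: "('x ctx \<times> 'x inst) list \<Rightarrow> bool" where
  "structural s \<longleftrightarrow> (\<forall>(c, r)\<in>set s. \<not> is_atomic r)"

lemma structural_Cons[simp]: "structural ((c, r) # s) \<longleftrightarrow> \<not> is_atomic r \<and> structural s"
  by (simp add: structural_def)
lemma structural_Nil[simp]: "structural []"
  by (simp add: structural_def)
lemma structural_append[simp]: "structural (s1 @ s2) \<longleftrightarrow> structural s1 \<and> structural s2"
  by (auto simp: structural_def)

lemma structural_lift[simp]: "structural (lift_steps c s) = structural s"
  by (auto simp: structural_def lift_steps_def)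

lemma structural_no_atomic: "structural s \<Longrightarrow> created s = {} \<and> consumed s = {} \<and> step_sigs s = {}"
  by (induction s rule: created.induct) auto

lemma structural_well_labelled: "structural s \<Longrightarrow> chain_ok a s \<Longrightarrow> lbl_dist a \<Longrightarrow> well_labelled a s \<and> lbls (final a s) = lbls a"
proof (induction s arbitrary: a)
  case Nil then show ?case by simp
next
  case (Cons st s)
  obtain c r where st: "st = (c, r)" by (cases st)
  from Cons.prems have h: "\<not> is_atomic r" "structural s" "plug c (rprem r) = a" "chain_ok (plug c (rconcl r)) s"
    by (auto simp: st)
  have d: "lbl_dist (plug c (rconcl r))" using lbl_dist_structural[OF h(1), of c] h(3) Cons.prems(3) by simp
  have l: "lbls (plug c (rconcl r)) = lbls a" using h(1,3) by (auto simp: lbls_plug lbls_structural)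
  show ?case using Cons.IH[OF h(2) h(4) d] h Cons.prems(3) l structural_no_atomic[OF h(2)]
    unfolding st by (simp add: well_labelled_Cons)
qed

lemma structural_sks_steps: "structural s \<Longrightarrow> sks_steps s"
proof -
  have "\<not> is_atomic r \<Longrightarrow> sks_inst (map_inst fst r)" for r :: "('n atom \<times> nat) inst"
    by (cases r) auto
  then show "structural s \<Longrightarrow> sks_steps s" unfolding structural_def sks_steps_def by auto
qed

lemma well_labelled_single: "well_labelled a [(c, r)] \<longleftrightarrow> plug c (rprem r) = a \<and> lbl_dist a \<and>
   (is_atomic r \<longrightarrow> lbls (rconcl r) \<inter> lbls a = {}) \<and> lbl_dist (plug c (rconcl r))"
  by (simp add: well_labelled_Cons)

lemma sks_steps_append[simp]: "sks_steps (s1 @ s2) \<longleftrightarrow> sks_steps s1 \<and> sks_steps s2"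
  by (auto simp: sks_steps_def)
lemma sks_steps_Cons[simp]: "sks_steps ((c, r) # s) \<longleftrightarrow> sks_inst (map_inst fst r) \<and> sks_steps s"
  by (auto simp: sks_steps_def)
lemma sks_steps_Nil[simp]: "sks_steps []"
  by (auto simp: sks_steps_def)

lemma plug_inj[simp]: "plug c x = plug c y \<longleftrightarrow> x = y"
  by (induction c) auto

lemma chain_ok_lift: "chain_ok (plug c0 a) (lift_steps c0 s) = chain_ok a s"
  by (induction a s rule: chain_ok.induct) auto

lemma lift_steps_single_simps[simp]:
  "chain_ok (Dis a b) (lift_steps (DL Hole b) s) = chain_ok a s"
  "chain_ok (Dis b a) (lift_steps (DR b Hole) s) = chain_ok a s"
  "chain_ok (Con a b) (lift_steps (CL Hole b) s) = chain_ok a s"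
  "chain_ok (Con b a) (lift_steps (CR b Hole) s) = chain_ok a s"
  "final (Dis a b) (lift_steps (DL Hole b) s) = Dis (final a s) b"
  "final (Dis b a) (lift_steps (DR b Hole) s) = Dis b (final a s)"
  "final (Con a b) (lift_steps (CL Hole b) s) = Con (final a s) b"
  "final (Con b a) (lift_steps (CR b Hole) s) = Con b (final a s)"
  using chain_ok_lift[of "DL Hole b" a s] chain_ok_lift[of "DR b Hole" a s]
    chain_ok_lift[of "CL Hole b" a s] chain_ok_lift[of "CR b Hole" a s]
    final_lift[of "DL Hole b" a s] final_lift[of "DR b Hole" a s]
    final_lift[of "CL Hole b" a s] final_lift[of "CR b Hole" a s]
  by simp_all

lemma ctx_lbls_single_hole[simp]: "ctx_lbls (DL Hole b) = lbls b" "ctx_lbls (DR b Hole) = lbls b"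
   "ctx_lbls (CL Hole b) = lbls b" "ctx_lbls (CR b Hole) = lbls b" "ctx_lbls Hole = {}"
  by (auto simp: ctx_lbls_def lbls_def)

lemma well_labelled_lift_single:
  "well_labelled a s \<Longrightarrow> lbl_dist (Dis a b) \<Longrightarrow> lbls b \<inter> created s = {} \<Longrightarrow> well_labelled (Dis a b) (lift_steps (DL Hole b) s)"
  "well_labelled a s \<Longrightarrow> lbl_dist (Dis b a) \<Longrightarrow> lbls b \<inter> created s = {} \<Longrightarrow> well_labelled (Dis b a) (lift_steps (DR b Hole) s)"
  "well_labelled a s \<Longrightarrow> lbl_dist (Con a b) \<Longrightarrow> lbls b \<inter> created s = {} \<Longrightarrow> well_labelled (Con a b) (lift_steps (CL Hole b) s)"
  "well_labelled a s \<Longrightarrow> lbl_dist (Con b a) \<Longrightarrow> lbls b \<inter> created s = {} \<Longrightarrow> well_labelled (Con b a) (lift_steps (CR b Hole) s)"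
  using well_labelled_lift[of a s "DL Hole b"] well_labelled_lift[of a s "DR b Hole"]
    well_labelled_lift[of a s "CL Hole b"] well_labelled_lift[of a s "CR b Hole"] by simp_all

fun pull :: "'x ctx \<Rightarrow> 'x formula \<Rightarrow> 'x formula \<Rightarrow> ('x ctx \<times> 'x inst) list" where
  "pull Hole g d = []"
| "pull (DL c b) g d = lift_steps (DL Hole b) (pull c g d) @
     [(Hole, RAssocD (plug c g) d b), (DR (plug c g) Hole, RCommD d b), (Hole, RAssocD' (plug c g) b d)]"
| "pull (DR b c) g d = lift_steps (DR b Hole) (pull c g d) @ [(Hole, RAssocD' b (plug c g) d)]"
| "pull (CL c b) g d = lift_steps (CL Hole b) (pull c g d) @
     [(Hole, RCommC (Dis (plug c g) d) b), (Hole, RSw b (plug c g) d), (DL Hole d, RCommC b (plug c g))]"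
| "pull (CR b c) g d = lift_steps (CR b Hole) (pull c g d) @ [(Hole, RSw b (plug c g) d)]"

lemma pull_chain: "chain_ok (plug c (Dis g d)) (pull c g d) \<and> final (plug c (Dis g d)) (pull c g d) = Dis (plug c g) d"
  by (induction c) (auto simp: chain_ok_append final_append)

lemma pull_structural: "structural (pull c g d)"
  by (induction c) auto

fun push :: "'x ctx \<Rightarrow> 'x formula \<Rightarrow> 'x formula \<Rightarrow> ('x ctx \<times> 'x inst) list" where
  "push Hole g d = []"
| "push (DL c b) g d = [(Hole, RCommC (Dis (plug c g) b) d), (Hole, RSw d (plug c g) b),
     (DL Hole b, RCommC d (plug c g))] @ lift_steps (DL Hole b) (push c g d)"
| "push (DR b c) g d = [(Hole, RCommC (Dis b (plug c g)) d), (CR d Hole, RCommD b (plug c g)),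
     (Hole, RSw d (plug c g) b), (DL Hole b, RCommC d (plug c g)), (Hole, RCommD (Con (plug c g) d) b)]
     @ lift_steps (DR b Hole) (push c g d)"
| "push (CL c b) g d = [(Hole, RAssocC (plug c g) b d), (CR (plug c g) Hole, RCommC b d),
     (Hole, RAssocC' (plug c g) d b)] @ lift_steps (CL Hole b) (push c g d)"
| "push (CR b c) g d = [(Hole, RAssocC b (plug c g) d)] @ lift_steps (CR b Hole) (push c g d)"

lemma push_chain: "chain_ok (Con (plug c g) d) (push c g d) \<and> final (Con (plug c g) d) (push c g d) = plug c (Con g d)"
  by (induction c) (auto simp: chain_ok_append final_append)

lemma push_structural: "structural (push c g d)"
  by (induction c) auto

fun cocontract_steps :: "(nat \<Rightarrow> nat) \<Rightarrow> (nat \<Rightarrow> nat) \<Rightarrow> (nat \<Rightarrow> nat) \<Rightarrow> ('x \<times> nat) formula \<Rightarrow>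
    (('x \<times> nat) ctx \<times> ('x \<times> nat) inst) list" where
  "cocontract_steps g0 g1 g2 Ff = [(Hole, RFF')]"
| "cocontract_steps g0 g1 g2 Tt = [(Hole, RUnitT' Tt)]"
| "cocontract_steps g0 g1 g2 (At x) = [(Hole, RCoctr (apsnd g0 x) (apsnd g1 x) (apsnd g2 x))]"
| "cocontract_steps g0 g1 g2 (Dis A B) = lift_steps (DL Hole (relabel g0 B)) (cocontract_steps g0 g1 g2 A) @
     lift_steps (DR (Con (relabel g1 A) (relabel g2 A)) Hole) (cocontract_steps g0 g1 g2 B) @
     [(Hole, RMed (relabel g1 A) (relabel g2 A) (relabel g1 B) (relabel g2 B))]"
| "cocontract_steps g0 g1 g2 (Con A B) = lift_steps (CL Hole (relabel g0 B)) (cocontract_steps g0 g1 g2 A) @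
     lift_steps (CR (Con (relabel g1 A) (relabel g2 A)) Hole) (cocontract_steps g0 g1 g2 B) @
     [(Hole, RAssocC (relabel g1 A) (relabel g2 A) (Con (relabel g1 B) (relabel g2 B))),
      (CR (relabel g1 A) Hole, RAssocC' (relabel g2 A) (relabel g1 B) (relabel g2 B)),
      (CR (relabel g1 A) (CL Hole (relabel g2 B)), RCommC (relabel g2 A) (relabel g1 B)),
      (CR (relabel g1 A) Hole, RAssocC (relabel g1 B) (relabel g2 A) (relabel g2 B)),
      (Hole, RAssocC' (relabel g1 A) (relabel g1 B) (Con (relabel g2 A) (relabel g2 B)))]"

lemma cocontract_chain: "chain_ok (relabel g0 f) (cocontract_steps g0 g1 g2 f) \<and>
   final (relabel g0 f) (cocontract_steps g0 g1 g2 f) = Con (relabel g1 f) (relabel g2 f)"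
  by (induction f) (auto simp: chain_ok_append final_append)

lemma cocontract_sks_steps: "sks_steps (cocontract_steps g0 g1 g2 (f :: ('n atom \<times> nat) formula))"
  by (induction f) auto

lemma cocontract_well_labelled:
  assumes i0: "inj g0" and i1: "inj g1" and i2: "inj g2"
    and d01: "\<And>x y. g0 x \<noteq> g1 y" and d02: "\<And>x y. g0 x \<noteq> g2 y" and d12: "\<And>x y. g1 x \<noteq> g2 y"
    and f: "lbl_dist f"
  shows "well_labelled (relabel g0 f) (cocontract_steps g0 g1 g2 f) \<and>
     created (cocontract_steps g0 g1 g2 f) = g1 ` lbls f \<union> g2 ` lbls f \<and>
     step_sigs (cocontract_steps g0 g1 g2 f) = (\<lambda>l. (KCoctr, {g0 l}, {g1 l, g2 l})) ` lbls f"
proof -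
  note inj = inj_eq[OF i0] inj_eq[OF i1] inj_eq[OF i2]
  have dis: "g0 x \<noteq> g1 y" "g0 x \<noteq> g2 y" "g1 x \<noteq> g2 y" "g1 y \<noteq> g0 x" "g2 y \<noteq> g0 x" "g2 y \<noteq> g1 x" for x y
    using d01 d02 d12 by metis+
  show ?thesis using f
  proof (induction f)
    case (Dis A B)
    let ?s1 = "lift_steps (DL Hole (relabel g0 B)) (cocontract_steps g0 g1 g2 A)"
    let ?s2 = "lift_steps (DR (Con (relabel g1 A) (relabel g2 A)) Hole) (cocontract_steps g0 g1 g2 B)"
    let ?s3 = "[(Hole, RMed (relabel g1 A) (relabel g2 A) (relabel g1 B) (relabel g2 B))]"
    have dA: "lbl_dist A" "lbl_dist B" "lbls A \<inter> lbls B = {}" using Dis.prems by auto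
    note IA = Dis.IH(1)[OF dA(1)] and IB = Dis.IH(2)[OF dA(2)]
    have g1: "well_labelled (Dis (relabel g0 A) (relabel g0 B)) ?s1"
      by (rule well_labelled_lift_single(1)) (use IA dA in \<open>auto simp: lbl_dist_relabel i0 inj dis\<close>)
    have g2: "well_labelled (Dis (Con (relabel g1 A) (relabel g2 A)) (relabel g0 B)) ?s2"
      by (rule well_labelled_lift_single(2)) (use IB dA in \<open>auto simp: lbl_dist_relabel i0 i1 i2 inj dis\<close>)
    have g3: "well_labelled (Dis (Con (relabel g1 A) (relabel g2 A)) (Con (relabel g1 B) (relabel g2 B))) ?s3"
      using dA by (auto simp: well_labelled_single lbl_dist_relabel i0 i1 i2 inj dis)
    have g23: "well_labelled (Dis (Con (relabel g1 A) (relabel g2 A)) (relabel g0 B)) (?s2 @ ?s3)"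
      unfolding well_labelled_append using g2 g3 IB cocontract_chain[of g0 B g1 g2] by (auto simp: i1 i2)
    have "well_labelled (Dis (relabel g0 A) (relabel g0 B)) (?s1 @ ?s2 @ ?s3)"
      unfolding well_labelled_append[of _ ?s1] using g1 g23 IA IB cocontract_chain[of g0 A g1 g2] dA
      by (auto simp: inj dis)
    then show ?case using IA IB by auto
  next
    case (Con A B)
    let ?s1 = "lift_steps (CL Hole (relabel g0 B)) (cocontract_steps g0 g1 g2 A)"
    let ?s2 = "lift_steps (CR (Con (relabel g1 A) (relabel g2 A)) Hole) (cocontract_steps g0 g1 g2 B)"
    let ?s3 = "[(Hole, RAssocC (relabel g1 A) (relabel g2 A) (Con (relabel g1 B) (relabel g2 B))),
        (CR (relabel g1 A) Hole, RAssocC' (relabel g2 A) (relabel g1 B) (relabel g2 B)),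
        (CR (relabel g1 A) (CL Hole (relabel g2 B)), RCommC (relabel g2 A) (relabel g1 B)),
        (CR (relabel g1 A) Hole, RAssocC (relabel g1 B) (relabel g2 A) (relabel g2 B)),
        (Hole, RAssocC' (relabel g1 A) (relabel g1 B) (Con (relabel g2 A) (relabel g2 B)))]"
    have dA: "lbl_dist A" "lbl_dist B" "lbls A \<inter> lbls B = {}" using Con.prems by auto
    note IA = Con.IH(1)[OF dA(1)] and IB = Con.IH(2)[OF dA(2)]
    have g1: "well_labelled (Con (relabel g0 A) (relabel g0 B)) ?s1"
      by (rule well_labelled_lift_single(3)) (use IA dA in \<open>auto simp: lbl_dist_relabel i0 inj dis\<close>)
    have g2: "well_labelled (Con (Con (relabel g1 A) (relabel g2 A)) (relabel g0 B)) ?s2"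
      by (rule well_labelled_lift_single(4)) (use IB dA in \<open>auto simp: lbl_dist_relabel i0 i1 i2 inj dis\<close>)
    have st: "structural ?s3" by simp
    have ch3: "chain_ok (Con (Con (relabel g1 A) (relabel g2 A)) (Con (relabel g1 B) (relabel g2 B))) ?s3" by simp
    have dl3: "lbl_dist (Con (Con (relabel g1 A) (relabel g2 A)) (Con (relabel g1 B) (relabel g2 B)))"
      using dA by (auto simp: lbl_dist_relabel i0 i1 i2 inj dis)
    have g3: "well_labelled (Con (Con (relabel g1 A) (relabel g2 A)) (Con (relabel g1 B) (relabel g2 B))) ?s3"
      using structural_well_labelled[OF st ch3 dl3] by simp
    have g23: "well_labelled (Con (Con (relabel g1 A) (relabel g2 A)) (relabel g0 B)) (?s2 @ ?s3)"
      unfolding well_labelled_append using g2 g3 IB cocontract_chain[of g0 B g1 g2] structural_no_atomic[OF st] by auto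
    have "well_labelled (Con (relabel g0 A) (relabel g0 B)) (?s1 @ ?s2 @ ?s3)"
      unfolding well_labelled_append[of _ ?s1] using g1 g23 IA IB cocontract_chain[of g0 A g1 g2] dA
      structural_no_atomic[OF st] by (auto simp: inj dis)
    then show ?case using IA IB structural_no_atomic[OF st] by auto
  qed (auto simp: well_labelled_single step_sig_def d01 d02 d12 inj_eq[OF i1] inj_eq[OF i2])
qed

fun contract_steps :: "(nat \<Rightarrow> nat) \<Rightarrow> (nat \<Rightarrow> nat) \<Rightarrow> (nat \<Rightarrow> nat) \<Rightarrow> ('x \<times> nat) formula \<Rightarrow>
    (('x \<times> nat) ctx \<times> ('x \<times> nat) inst) list" where
  "contract_steps g0 g1 g2 Ff = [(Hole, RUnitF Ff)]"
| "contract_steps g0 g1 g2 Tt = [(Hole, RTT)]"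
| "contract_steps g0 g1 g2 (At x) = [(Hole, RCtr (apsnd g1 x) (apsnd g2 x) (apsnd g0 x))]"
| "contract_steps g0 g1 g2 (Con A B) = [(Hole, RMed (relabel g1 A) (relabel g1 B) (relabel g2 A) (relabel g2 B))] @
     lift_steps (CL Hole (Dis (relabel g1 B) (relabel g2 B))) (contract_steps g0 g1 g2 A) @
     lift_steps (CR (relabel g0 A) Hole) (contract_steps g0 g1 g2 B)"
| "contract_steps g0 g1 g2 (Dis A B) =
     [(Hole, RAssocD (relabel g1 A) (relabel g1 B) (Dis (relabel g2 A) (relabel g2 B))),
      (DR (relabel g1 A) Hole, RAssocD' (relabel g1 B) (relabel g2 A) (relabel g2 B)),
      (DR (relabel g1 A) (DL Hole (relabel g2 B)), RCommD (relabel g1 B) (relabel g2 A)),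
      (DR (relabel g1 A) Hole, RAssocD (relabel g2 A) (relabel g1 B) (relabel g2 B)),
      (Hole, RAssocD' (relabel g1 A) (relabel g2 A) (Dis (relabel g1 B) (relabel g2 B)))] @
     lift_steps (DL Hole (Dis (relabel g1 B) (relabel g2 B))) (contract_steps g0 g1 g2 A) @
     lift_steps (DR (relabel g0 A) Hole) (contract_steps g0 g1 g2 B)"

lemma contract_chain: "chain_ok (Dis (relabel g1 f) (relabel g2 f)) (contract_steps g0 g1 g2 f) \<and>
   final (Dis (relabel g1 f) (relabel g2 f)) (contract_steps g0 g1 g2 f) = relabel g0 f"
  by (induction f) (auto simp: chain_ok_append final_append)

lemma contract_sks_steps: "sks_steps (contract_steps g0 g1 g2 (f :: ('n atom \<times> nat) formula))"
  by (induction f) auto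

lemma contract_well_labelled:
  assumes i0: "inj g0" and i1: "inj g1" and i2: "inj g2"
    and d01: "\<And>x y. g0 x \<noteq> g1 y" and d02: "\<And>x y. g0 x \<noteq> g2 y" and d12: "\<And>x y. g1 x \<noteq> g2 y"
    and f: "lbl_dist f"
  shows "well_labelled (Dis (relabel g1 f) (relabel g2 f)) (contract_steps g0 g1 g2 f) \<and>
     created (contract_steps g0 g1 g2 f) = g0 ` lbls f \<and>
     step_sigs (contract_steps g0 g1 g2 f) = (\<lambda>l. (KCtr, {g1 l, g2 l}, {g0 l})) ` lbls f"
proof -
  note inj = inj_eq[OF i0] inj_eq[OF i1] inj_eq[OF i2]
  have dis: "g0 x \<noteq> g1 y" "g0 x \<noteq> g2 y" "g1 x \<noteq> g2 y" "g1 y \<noteq> g0 x" "g2 y \<noteq> g0 x" "g2 y \<noteq> g1 x" for x y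
    using d01 d02 d12 by metis+
  show ?thesis using f
  proof (induction f)
    case (Con A B)
    let ?s1 = "[(Hole, RMed (relabel g1 A) (relabel g1 B) (relabel g2 A) (relabel g2 B))]"
    let ?s2 = "lift_steps (CL Hole (Dis (relabel g1 B) (relabel g2 B))) (contract_steps g0 g1 g2 A)"
    let ?s3 = "lift_steps (CR (relabel g0 A) Hole) (contract_steps g0 g1 g2 B)"
    have dA: "lbl_dist A" "lbl_dist B" "lbls A \<inter> lbls B = {}" using Con.prems by auto
    note IA = Con.IH(1)[OF dA(1)] and IB = Con.IH(2)[OF dA(2)]
    have g1: "well_labelled (Dis (Con (relabel g1 A) (relabel g1 B)) (Con (relabel g2 A) (relabel g2 B))) ?s1"
      using dA by (auto simp: well_labelled_single lbl_dist_relabel i0 i1 i2 inj dis)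
    have g2: "well_labelled (Con (Dis (relabel g1 A) (relabel g2 A)) (Dis (relabel g1 B) (relabel g2 B))) ?s2"
      by (rule well_labelled_lift_single(3)) (use IA dA in \<open>auto simp: lbl_dist_relabel i0 i1 i2 inj dis\<close>)
    have g3: "well_labelled (Con (relabel g0 A) (Dis (relabel g1 B) (relabel g2 B))) ?s3"
      by (rule well_labelled_lift_single(4)) (use IB dA in \<open>auto simp: lbl_dist_relabel i0 i1 i2 inj dis\<close>)
    have g23: "well_labelled (Con (Dis (relabel g1 A) (relabel g2 A)) (Dis (relabel g1 B) (relabel g2 B))) (?s2 @ ?s3)"
      unfolding well_labelled_append using g2 g3 IA IB contract_chain[of g1 A g2 g0] dA by (auto simp: inj dis)
    have "well_labelled (Dis (Con (relabel g1 A) (relabel g1 B)) (Con (relabel g2 A) (relabel g2 B))) (?s1 @ ?s2 @ ?s3)"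
      unfolding well_labelled_append[of _ ?s1] using g1 g23 IA IB dA
      by (auto simp: inj dis)
    then show ?case using IA IB by (auto simp: step_sig_def)
  next
    case (Dis A B)
    let ?s1 = "[(Hole, RAssocD (relabel g1 A) (relabel g1 B) (Dis (relabel g2 A) (relabel g2 B))),
        (DR (relabel g1 A) Hole, RAssocD' (relabel g1 B) (relabel g2 A) (relabel g2 B)),
        (DR (relabel g1 A) (DL Hole (relabel g2 B)), RCommD (relabel g1 B) (relabel g2 A)),
        (DR (relabel g1 A) Hole, RAssocD (relabel g2 A) (relabel g1 B) (relabel g2 B)),
        (Hole, RAssocD' (relabel g1 A) (relabel g2 A) (Dis (relabel g1 B) (relabel g2 B)))]"
    let ?s2 = "lift_steps (DL Hole (Dis (relabel g1 B) (relabel g2 B))) (contract_steps g0 g1 g2 A)"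
    let ?s3 = "lift_steps (DR (relabel g0 A) Hole) (contract_steps g0 g1 g2 B)"
    have dA: "lbl_dist A" "lbl_dist B" "lbls A \<inter> lbls B = {}" using Dis.prems by auto
    note IA = Dis.IH(1)[OF dA(1)] and IB = Dis.IH(2)[OF dA(2)]
    have st: "structural ?s1" by simp
    have ch1: "chain_ok (Dis (Dis (relabel g1 A) (relabel g1 B)) (Dis (relabel g2 A) (relabel g2 B))) ?s1" by simp
    have dl1: "lbl_dist (Dis (Dis (relabel g1 A) (relabel g1 B)) (Dis (relabel g2 A) (relabel g2 B)))"
      using dA by (auto simp: lbl_dist_relabel i0 i1 i2 inj dis)
    have g1: "well_labelled (Dis (Dis (relabel g1 A) (relabel g1 B)) (Dis (relabel g2 A) (relabel g2 B))) ?s1"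
      using structural_well_labelled[OF st ch1 dl1] by simp
    have g2: "well_labelled (Dis (Dis (relabel g1 A) (relabel g2 A)) (Dis (relabel g1 B) (relabel g2 B))) ?s2"
      by (rule well_labelled_lift_single(1)) (use IA dA in \<open>auto simp: lbl_dist_relabel i0 i1 i2 inj dis\<close>)
    have g3: "well_labelled (Dis (relabel g0 A) (Dis (relabel g1 B) (relabel g2 B))) ?s3"
      by (rule well_labelled_lift_single(2)) (use IB dA in \<open>auto simp: lbl_dist_relabel i0 i1 i2 inj dis\<close>)
    have g23: "well_labelled (Dis (Dis (relabel g1 A) (relabel g2 A)) (Dis (relabel g1 B) (relabel g2 B))) (?s2 @ ?s3)"
      unfolding well_labelled_append using g2 g3 IA IB contract_chain[of g1 A g2 g0] dA by (auto simp: inj dis)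
    have "well_labelled (Dis (Dis (relabel g1 A) (relabel g1 B)) (Dis (relabel g2 A) (relabel g2 B))) (?s1 @ ?s2 @ ?s3)"
      unfolding well_labelled_append[of _ ?s1] using g1 g23 IA IB dA structural_no_atomic[OF st]
      by (auto simp: inj dis)
    then show ?case using IA IB structural_no_atomic[OF st] by (auto simp: step_sig_def)
  qed (auto simp: well_labelled_single step_sig_def d01 d02 d12 d01[symmetric] d02[symmetric] d12[symmetric] inj_eq[OF i0] insert_commute)
qed

lemma bar_bar[simp]: "bar (bar a) = a"
  by (simp add: bar_def)

section \<open>The derivation \<Psi>\<close>

instance see :: (countable) countable by countable_datatype

locale se_deriv =
  fixes a :: "('n atom \<times> nat) formula"
    and S1 :: "(('n atom \<times> nat) ctx \<times> ('n atom \<times> nat) inst) list"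
    and c :: "('n atom \<times> nat) ctx" and x y :: "'n atom \<times> nat"
    and S2 :: "(('n atom \<times> nat) ctx \<times> ('n atom \<times> nat) inst) list"
    and c' :: "('n atom \<times> nat) ctx" and x' y' :: "'n atom \<times> nat"
    and S3 :: "(('n atom \<times> nat) ctx \<times> ('n atom \<times> nat) inst) list"
    and le :: nat
  assumes gS: "well_labelled a (S1 @ (c, RInt x y) # S2 @ (c', RCut x' y') # S3)"
    and sS: "sks_steps (S1 @ (c, RInt x y) # S2 @ (c', RCut x' y') # S3)"
    and le1: "le = snd x \<or> le = snd y" and le2: "le = snd x' \<or> le = snd y'"
begin

abbreviation "S \<equiv> S1 @ (c, RInt x y) # S2 @ (c', RCut x' y') # S3"
text \<open>\<open>le\<close> is the label of \<epsilon>; \<open>w\<close> and \<open>z\<close>, labelled \<open>l2\<close> and \<open>l3\<close>, are the atoms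
  on \<epsilon>2 and \<epsilon>3.\<close>
definition "w = (if snd x = le then y else x)"
definition "z = (if snd x' = le then y' else x')"
abbreviation "l2 \<equiv> snd w"
abbreviation "l3 \<equiv> snd z"
text \<open>\<open>b1\<close> and \<open>pq\<close> are the conclusion of \<iota> and the premiss of \<kappa>, \<open>pn\<close> is the conclusion of \<Phi>.\<close>
abbreviation "b1 \<equiv> plug c (Dis (At x) (At y))"
abbreviation "pq \<equiv> plug c' (Con (At x') (At y'))"
abbreviation "b3 \<equiv> plug c' Ff"
abbreviation "pn \<equiv> final b3 S3"

lemma final_segments: "final a S1 = plug c Tt" "final b1 S2 = pq" "final a S = pn"
proof -
  have c0: "chain_ok a S" using well_labelled_chain[OF gS] .
  then show "final a S1 = plug c Tt" by (simp add: chain_ok_append)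
  have "chain_ok b1 (S2 @ (c', RCut x' y') # S3)" using c0 by (simp add: chain_ok_append final_append)
  then show "final b1 S2 = pq" by (simp add: chain_ok_append)
  show "final a S = pn" using c0 by (simp add: chain_ok_append final_append \<open>final b1 S2 = pq\<close>)
qed

lemma well_labelled_parts: "well_labelled a S1" "well_labelled (plug c Tt) ((c, RInt x y) # S2 @ (c', RCut x' y') # S3)"
   "well_labelled b1 (S2 @ (c', RCut x' y') # S3)" "well_labelled b1 S2" "well_labelled pq ((c', RCut x' y') # S3)" "well_labelled b3 S3"
proof -
  show g1: "well_labelled a S1" using gS by (simp add: well_labelled_append)
  show g2: "well_labelled (plug c Tt) ((c, RInt x y) # S2 @ (c', RCut x' y') # S3)" using gS final_segments(1) by (simp add: well_labelled_append)
  show g3: "well_labelled b1 (S2 @ (c', RCut x' y') # S3)" using g2 by (simp add: well_labelled_Cons)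
  show "well_labelled b1 S2" using g3 by (simp add: well_labelled_append)
  show g5: "well_labelled pq ((c', RCut x' y') # S3)" using g3 final_segments(2) by (simp add: well_labelled_append)
  show "well_labelled b3 S3" using g5 by (simp add: well_labelled_Cons)
qed

lemma lbl_dist_parts: "lbl_dist b1" "lbl_dist pq" "ctx_lbl_dist c" "ctx_lbl_dist c'" "snd x \<noteq> snd y" "snd x' \<noteq> snd y'"
  "snd x \<notin> ctx_lbls c" "snd y \<notin> ctx_lbls c" "snd x' \<notin> ctx_lbls c'" "snd y' \<notin> ctx_lbls c'"
proof -
  show d1: "lbl_dist b1" using well_labelled_dist[OF well_labelled_parts(3)] .
  show d2: "lbl_dist pq" using well_labelled_dist[OF well_labelled_parts(5)] .
  show "ctx_lbl_dist c" "snd x \<noteq> snd y" "snd x \<notin> ctx_lbls c" "snd y \<notin> ctx_lbls c" using d1 by (auto simp: lbl_dist_plug)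
  show "ctx_lbl_dist c'" "snd x' \<noteq> snd y'" "snd x' \<notin> ctx_lbls c'" "snd y' \<notin> ctx_lbls c'" using d2 by (auto simp: lbl_dist_plug)
qed

lemma created_disjoint:
  "(lbls a \<union> created S1) \<inter> ({snd x, snd y} \<union> created S2 \<union> created S3) = {}"
  "{snd x, snd y} \<inter> (created S2 \<union> created S3) = {}"
  "ctx_lbls c \<inter> (created S2 \<union> created S3) = {}"
  "(lbls b1 \<union> created S2) \<inter> created S3 = {}"
  "{snd x, snd y} \<inter> created S1 = {}"
  "{snd x', snd y'} \<inter> (consumed S1 \<union> consumed S2 \<union> consumed S3) = {}"
  "lbls pq \<inter> created S3 = {}"
proof -
  show "(lbls a \<union> created S1) \<inter> ({snd x, snd y} \<union> created S2 \<union> created S3) = {}"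
    using gS by (simp add: well_labelled_append Int_Un_distrib)
  have l: "lbls (rconcl (RInt x y)) \<inter> created (S2 @ (c', RCut x' y') # S3) = {} \<and>
    lbls (rprem (RInt x y)) \<inter> consumed (S2 @ (c', RCut x' y') # S3) = {}"
    by (rule well_labelled_step_later[of a S1 c _ "S2 @ (c', RCut x' y') # S3"]) (use gS in auto)
  then show "{snd x, snd y} \<inter> (created S2 \<union> created S3) = {}" by auto
  show "ctx_lbls c \<inter> (created S2 \<union> created S3) = {}"
    using well_labelled_parts(2) by (auto simp: well_labelled_Cons lbls_plug)
  show "(lbls b1 \<union> created S2) \<inter> created S3 = {}"
    using well_labelled_parts(3)[unfolded well_labelled_append] by simp
  have e: "lbls (rconcl (RInt x y)) \<inter> created S1 = {} \<and> lbls (rprem (RInt x y)) \<inter> consumed S1 = {}"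
    by (rule well_labelled_step_earlier[of a S1 c _ "S2 @ (c', RCut x' y') # S3"]) (use gS in auto)
  then show "{snd x, snd y} \<inter> created S1 = {}" by auto
  have e2: "lbls (rconcl (RCut x' y')) \<inter> created (S1 @ (c, RInt x y) # S2) = {} \<and>
     lbls (rprem (RCut x' y')) \<inter> consumed (S1 @ (c, RInt x y) # S2) = {}"
    by (rule well_labelled_step_earlier[of a "S1 @ (c, RInt x y) # S2" c' _ S3]) (use gS in auto)
  have e3: "lbls (rconcl (RCut x' y')) \<inter> created S3 = {} \<and>
     lbls (rprem (RCut x' y')) \<inter> consumed S3 = {}"
    by (rule well_labelled_step_later[of a "S1 @ (c, RInt x y) # S2" c' _ S3]) (use gS in auto)
  show "{snd x', snd y'} \<inter> (consumed S1 \<union> consumed S2 \<union> consumed S3) = {}"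
    using e2 e3 by auto
  show "lbls pq \<inter> created S3 = {}" using well_labelled_parts(5) by (simp add: well_labelled_Cons)
qed

lemma le_fresh: "le \<notin> lbls a" "le \<notin> created S1" "le \<notin> created S2" "le \<notin> created S3"
  "le \<notin> consumed S1" "le \<notin> consumed S2" "le \<notin> consumed S3" "le \<notin> ctx_lbls c" "le \<notin> ctx_lbls c'"
proof -
  have A: "le \<in> {snd x, snd y}" "le \<in> {snd x', snd y'}" using le1 le2 by auto
  show "le \<notin> lbls a" using created_disjoint(1) A(1) by blast
  show "le \<notin> created S1" using created_disjoint(5) A(1) by blast
  show "le \<notin> created S2" using created_disjoint(2) A(1) by blast
  show "le \<notin> created S3" using created_disjoint(2) A(1) by blast
  show "le \<notin> consumed S1" using created_disjoint(6) A(2) by blast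
  show "le \<notin> consumed S2" using created_disjoint(6) A(2) by blast
  show "le \<notin> consumed S3" using created_disjoint(6) A(2) by blast
  show "le \<notin> ctx_lbls c" using lbl_dist_parts(7,8) le1 by auto
  show "le \<notin> ctx_lbls c'" using lbl_dist_parts(9,10) le2 by auto
qed

lemma avoids_S2: "avoids le S2"
  unfolding avoids_def using le_fresh(3,6) created_mem consumed_mem by fastforce

lemma w_z_lbls: "snd w \<noteq> le" "snd z \<noteq> le" "snd w \<in> {snd x, snd y}" "snd z \<in> {snd x', snd y'}"
  using lbl_dist_parts le1 le2 unfolding w_def z_def by auto

lemma subst_b1: "subst_lbl le u b1 = plug c (if snd x = le then Dis u (At y) else Dis (At x) u)"
  using le_fresh lbl_dist_parts le1 by (auto simp: plug_subst[symmetric] subst_ctx_id)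

lemma subst_pq: "subst_lbl le u pq = plug c' (if snd x' = le then Con u (At y') else Con (At x') u)"
  using le_fresh lbl_dist_parts le2 by (auto simp: plug_subst[symmetric] subst_ctx_id)

text \<open>S2 carries the \<epsilon>-atom unchanged from \<iota> to \<kappa>, and w and z are both its dual.\<close>
lemma same_atom_w_z: "fst w = fst z"
proof -
  define xa where "xa = (if snd x = le then x else y)"
  define xk where "xk = (if snd x' = le then x' else y')"
  have "(fst xa, le) \<in> set (atoms_of b1)" using le1 lbl_dist_parts by (auto simp: xa_def set_atoms_plug)
  moreover have "(fst xk, le) \<in> set (atoms_of (final b1 S2))" using le2 final_segments(2) lbl_dist_parts by (auto simp: xk_def set_atoms_plug)
  ultimately have e: "fst xa = fst xk" using well_labelled_atom_const[OF well_labelled_parts(4)] by blast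
  have s1: "fst y = bar (fst x)" "fst y' = bar (fst x')"
    using sS by (auto simp: sks_steps_def)
  have "fst w = bar (fst xa)" using s1 by (auto simp: w_def xa_def)
  moreover have "fst z = bar (fst xk)" using s1 by (auto simp: z_def xk_def)
  ultimately show ?thesis using e by simp
qed

definition "tilde_int = (if snd x = le then [(c, RUnitF' Tt), (ctx_comp c (DR Tt Hole), RWk y)]
   else [(c, RUnitF' Tt), (c, RCommD Tt Ff), (ctx_comp c (DL Hole Tt), RWk x)])"
definition "tilde_cut = (if snd x' = le then [(c', RCommC Tt (At y')), (c', RUnitT (At y')), (c', RUnitF' (At y')), (c', RCommD (At y') Ff)]
   else [(c', RUnitT (At x')), (c', RUnitF' (At x')), (c', RCommD (At x') Ff)])"
definition "tilde_steps = S1 @ tilde_int @ subst_steps le Tt S2 @ tilde_cut @ pull c' Ff (At z) @ lift_steps (DL Hole (At z)) S3"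

lemma tilde_int_props: "well_labelled (plug c Tt) tilde_int" "final (plug c Tt) tilde_int = subst_lbl le Tt b1" "created tilde_int = {l2}"
   "step_sigs tilde_int = {(KWk, {}, {l2})}" "sks_steps tilde_int"
proof -
  show "well_labelled (plug c Tt) tilde_int" using lbl_dist_parts le1 by (auto simp: tilde_int_def well_labelled_Cons lbls_plug lbl_dist_plug w_def)
  show "final (plug c Tt) tilde_int = subst_lbl le Tt b1" using le1 lbl_dist_parts by (auto simp: tilde_int_def subst_b1)
  show "created tilde_int = {l2}" using le1 lbl_dist_parts by (auto simp: tilde_int_def w_def)
  show "step_sigs tilde_int = {(KWk, {}, {l2})}" using le1 lbl_dist_parts by (auto simp: tilde_int_def w_def step_sig_def)
  show "sks_steps tilde_int" by (simp add: tilde_int_def)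
qed

lemma tilde_cut_props: "structural tilde_cut" "chain_ok (subst_lbl le Tt pq) tilde_cut" "final (subst_lbl le Tt pq) tilde_cut = plug c' (Dis Ff (At z))"
   "sks_steps tilde_cut"
  using le2 lbl_dist_parts by (auto simp: tilde_cut_def subst_pq z_def structural_sks_steps)

lemma tilde_steps_props: "well_labelled a tilde_steps" "final a tilde_steps = Dis pn (At z)"
  "created tilde_steps = created S1 \<union> {l2} \<union> created S2 \<union> created S3"
  "step_sigs tilde_steps = step_sigs S1 \<union> step_sigs S2 \<union> step_sigs S3 \<union> {(KWk, {}, {l2})}" "sks_steps tilde_steps"
proof -
  have zl: "l3 \<in> lbls pq" using w_z_lbls by (auto simp: lbls_plug)
  have g6: "well_labelled (Dis b3 (At z)) (lift_steps (DL Hole (At z)) S3)"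
    by (rule well_labelled_lift_single(1)[OF well_labelled_parts(6)])
       (use well_labelled_dist[OF well_labelled_parts(6)] lbl_dist_parts zl created_disjoint(7) w_z_lbls in \<open>auto simp: lbl_dist_plug lbls_plug\<close>)
  have dpl: "lbl_dist (plug c' (Dis Ff (At z)))" using lbl_dist_parts w_z_lbls by (auto simp: lbl_dist_plug)
  have g5: "well_labelled (plug c' (Dis Ff (At z))) (pull c' Ff (At z))"
    using structural_well_labelled[OF pull_structural pull_chain[THEN conjunct1] dpl] by simp
  have g56: "well_labelled (plug c' (Dis Ff (At z))) (pull c' Ff (At z) @ lift_steps (DL Hole (At z)) S3)"
    by (rule well_labelled_appendI[OF g5 pull_chain[THEN conjunct2] g6])
       (use structural_no_atomic[OF pull_structural[of c' Ff "At z"]] created_disjoint(7) lbl_dist_parts zl in \<open>auto simp: lbls_plug\<close>)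
  have dsq: "lbl_dist (subst_lbl le Tt pq)" using lbl_dist_subst[OF _ lbl_dist_parts(2)] by simp
  have g4: "well_labelled (subst_lbl le Tt pq) tilde_cut" using structural_well_labelled[OF tilde_cut_props(1,2) dsq] by simp
  have g46: "well_labelled (subst_lbl le Tt pq) (tilde_cut @ pull c' Ff (At z) @ lift_steps (DL Hole (At z)) S3)"
    by (rule well_labelled_appendI[OF g4 tilde_cut_props(3) g56])
       (use structural_no_atomic[OF tilde_cut_props(1)] structural_no_atomic[OF pull_structural[of c' Ff "At z"]] created_disjoint(7)
        in \<open>auto simp: lbls_subst\<close>)
  have g3: "well_labelled (subst_lbl le Tt b1) (subst_steps le Tt S2)" using well_labelled_subst[OF _ avoids_S2 well_labelled_parts(4)] by simp
  have e3: "final (subst_lbl le Tt b1) (subst_steps le Tt S2) = subst_lbl le Tt pq" using final_subst[OF avoids_S2] final_segments(2) by simp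
  have g36: "well_labelled (subst_lbl le Tt b1) (subst_steps le Tt S2 @ tilde_cut @ pull c' Ff (At z) @ lift_steps (DL Hole (At z)) S3)"
    by (rule well_labelled_appendI[OF g3 e3 g46])
       (use structural_no_atomic[OF tilde_cut_props(1)] structural_no_atomic[OF pull_structural[of c' Ff "At z"]] created_disjoint(4) in \<open>auto simp: lbls_subst\<close>)
  have g26: "well_labelled (plug c Tt) (tilde_int @ subst_steps le Tt S2 @ tilde_cut @ pull c' Ff (At z) @ lift_steps (DL Hole (At z)) S3)"
    by (rule well_labelled_appendI[OF tilde_int_props(1,2) g36])
       (use structural_no_atomic[OF tilde_cut_props(1)] structural_no_atomic[OF pull_structural[of c' Ff "At z"]] created_disjoint(2,3) w_z_lbls tilde_int_props(3)
        in \<open>auto simp: lbls_plug\<close>)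
  show "well_labelled a tilde_steps" unfolding tilde_steps_def
    by (rule well_labelled_appendI[OF well_labelled_parts(1) final_segments(1) g26])
       (use structural_no_atomic[OF tilde_cut_props(1)] structural_no_atomic[OF pull_structural[of c' Ff "At z"]] created_disjoint(1) w_z_lbls tilde_int_props(3)
        in \<open>auto\<close>)
  show "final a tilde_steps = Dis pn (At z)" unfolding tilde_steps_def
    using final_segments(1) tilde_int_props(2) e3 tilde_cut_props(3) pull_chain[of c' Ff "At z"] by (simp add: final_append)
  show "created tilde_steps = created S1 \<union> {l2} \<union> created S2 \<union> created S3" unfolding tilde_steps_def
    using structural_no_atomic[OF tilde_cut_props(1)] structural_no_atomic[OF pull_structural[of c' Ff "At z"]] tilde_int_props(3) by auto
  show "step_sigs tilde_steps = step_sigs S1 \<union> step_sigs S2 \<union> step_sigs S3 \<union> {(KWk, {}, {l2})}" unfolding tilde_steps_def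
    using structural_no_atomic[OF tilde_cut_props(1)] structural_no_atomic[OF pull_structural[of c' Ff "At z"]] tilde_int_props(4) by auto
  have sA: "sks_steps S1" "sks_steps S2" "sks_steps S3" using sS by auto
  show "sks_steps tilde_steps" unfolding tilde_steps_def
    using sA tilde_int_props(5) tilde_cut_props(4) structural_sks_steps[OF pull_structural] sks_steps_subst by auto
qed

definition "hat_int = push c Tt (At w) @ [(c, RCommC Tt (At w)), (c, RUnitT (At w)), (c, RUnitF' (At w))] @
   (if snd x = le then [(c, RCommD (At w) Ff)] else [])"
definition "hat_cut = (if snd x' = le then [(ctx_comp c' (CR Ff Hole), RCowk y'), (c', RUnitT Ff)]
   else [(ctx_comp c' (CL Hole Ff), RCowk x'), (c', RCommC Tt Ff), (c', RUnitT Ff)])"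
definition "hat_steps = lift_steps (CL Hole (At w)) S1 @ hat_int @ subst_steps le Ff S2 @ hat_cut @ S3"

lemma hat_int_props: "structural hat_int" "chain_ok (Con (plug c Tt) (At w)) hat_int" "final (Con (plug c Tt) (At w)) hat_int = subst_lbl le Ff b1"
   "sks_steps hat_int"
proof -
  show "structural hat_int" by (simp add: hat_int_def push_structural)
  show "chain_ok (Con (plug c Tt) (At w)) hat_int"
    using push_chain[of c Tt "At w"] by (simp add: hat_int_def chain_ok_append)
  show "final (Con (plug c Tt) (At w)) hat_int = subst_lbl le Ff b1"
    using push_chain[of c Tt "At w"] le1 lbl_dist_parts by (auto simp: hat_int_def final_append chain_ok_append subst_b1 w_def)
  show "sks_steps hat_int" using structural_sks_steps \<open>structural hat_int\<close> by blast
qed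

lemma hat_cut_props: "well_labelled (subst_lbl le Ff pq) hat_cut" "final (subst_lbl le Ff pq) hat_cut = b3" "created hat_cut = {}"
   "step_sigs hat_cut = {(KCowk, {l3}, {})}" "sks_steps hat_cut"
proof -
  show "well_labelled (subst_lbl le Ff pq) hat_cut" using lbl_dist_parts le2 by (auto simp: hat_cut_def well_labelled_Cons lbls_plug lbl_dist_plug subst_pq)
  show "final (subst_lbl le Ff pq) hat_cut = b3" using le2 lbl_dist_parts by (auto simp: hat_cut_def subst_pq)
  show "created hat_cut = {}" by (auto simp: hat_cut_def)
  show "step_sigs hat_cut = {(KCowk, {l3}, {})}" using le2 lbl_dist_parts by (auto simp: hat_cut_def z_def step_sig_def)
  show "sks_steps hat_cut" by (simp add: hat_cut_def)
qed

lemma hat_steps_props: "well_labelled (Con a (At w)) hat_steps" "final (Con a (At w)) hat_steps = pn"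
  "created hat_steps = created S1 \<union> created S2 \<union> created S3"
  "step_sigs hat_steps = step_sigs S1 \<union> step_sigs S2 \<union> step_sigs S3 \<union> {(KCowk, {l3}, {})}" "sks_steps hat_steps"
proof -
  have g45: "well_labelled (subst_lbl le Ff pq) (hat_cut @ S3)"
    by (rule well_labelled_appendI[OF hat_cut_props(1,2) well_labelled_parts(6)]) (use hat_cut_props(3) created_disjoint(7) in \<open>auto simp: lbls_subst\<close>)
  have g3: "well_labelled (subst_lbl le Ff b1) (subst_steps le Ff S2)" using well_labelled_subst[OF _ avoids_S2 well_labelled_parts(4)] by simp
  have e3: "final (subst_lbl le Ff b1) (subst_steps le Ff S2) = subst_lbl le Ff pq" using final_subst[OF avoids_S2] final_segments(2) by simp
  have g35: "well_labelled (subst_lbl le Ff b1) (subst_steps le Ff S2 @ hat_cut @ S3)"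
    by (rule well_labelled_appendI[OF g3 e3 g45]) (use hat_cut_props(3) created_disjoint(4) in \<open>auto simp: lbls_subst\<close>)
  have dh: "lbl_dist (Con (plug c Tt) (At w))" using lbl_dist_parts w_z_lbls by (auto simp: lbl_dist_plug lbls_plug)
  have g2: "well_labelled (Con (plug c Tt) (At w)) hat_int" using structural_well_labelled[OF hat_int_props(1,2) dh] by simp
  have g25: "well_labelled (Con (plug c Tt) (At w)) (hat_int @ subst_steps le Ff S2 @ hat_cut @ S3)"
    by (rule well_labelled_appendI[OF g2 hat_int_props(3) g35])
       (use structural_no_atomic[OF hat_int_props(1)] hat_cut_props(3) created_disjoint(2,3) w_z_lbls in \<open>auto simp: lbls_plug\<close>)
  have da: "lbl_dist (Con a (At w))" using well_labelled_dist[OF well_labelled_parts(1)] created_disjoint(1) w_z_lbls by auto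
  have g1: "well_labelled (Con a (At w)) (lift_steps (CL Hole (At w)) S1)"
    by (rule well_labelled_lift_single(3)[OF well_labelled_parts(1) da]) (use created_disjoint(5) w_z_lbls in auto)
  show "well_labelled (Con a (At w)) hat_steps" unfolding hat_steps_def
    by (rule well_labelled_appendI[OF g1 _ g25]) (use final_segments(1) structural_no_atomic[OF hat_int_props(1)] hat_cut_props(3) created_disjoint(1,2) w_z_lbls in auto)
  show "final (Con a (At w)) hat_steps = pn" unfolding hat_steps_def
    using final_segments(1) hat_int_props(3) e3 hat_cut_props(2) by (simp add: final_append)
  show "created hat_steps = created S1 \<union> created S2 \<union> created S3" unfolding hat_steps_def
    using structural_no_atomic[OF hat_int_props(1)] hat_cut_props(3) by auto
  show "step_sigs hat_steps = step_sigs S1 \<union> step_sigs S2 \<union> step_sigs S3 \<union> {(KCowk, {l3}, {})}" unfolding hat_steps_def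
    using structural_no_atomic[OF hat_int_props(1)] hat_cut_props(4) by auto
  have sA: "sks_steps S1" "sks_steps S2" "sks_steps S3" using sS by auto
  show "sks_steps hat_steps" unfolding hat_steps_def
    using sA hat_int_props(4) hat_cut_props(5) sks_steps_subst by auto
qed

text \<open>The edges of the reduct are encoded as labels by \<open>to_nat\<close>. \<open>gT\<close> and \<open>gH\<close> label the tilde and
  hat copies, where the tilde copy of \<epsilon>3 and the hat copy of \<epsilon>2 are identified as \<open>EMid\<close>;
  \<open>gTp\<close> and \<open>gHp\<close> are the copies without this identification.\<close>
definition "gT l = to_nat (if l = l3 then (EMid :: nat see) else ECp True l)"
definition "gH l = to_nat (if l = l2 then (EMid :: nat see) else ECp False l)"
definition "gTp l = to_nat (ECp True l :: nat see)"
definition "gHp l = to_nat (ECp False l :: nat see)"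
definition "gI l = to_nat (EIn l :: nat see)"
definition "gO l = to_nat (EOut l :: nat see)"

lemma g_inj: "inj gT" "inj gH" "inj gTp" "inj gHp" "inj gI" "inj gO"
  by (auto simp: inj_def gT_def gH_def gTp_def gHp_def gI_def gO_def split: if_splits)

lemma g_distinct: "gI l \<noteq> gT m" "gI l \<noteq> gHp m" "gT l \<noteq> gHp m" "gO l \<noteq> gTp m" "gO l \<noteq> gH m" "gTp l \<noteq> gH m"
  "gI l \<noteq> gH m" "gI l \<noteq> gO m" "gT l \<noteq> gO m" "gH l \<noteq> gO m" "gI l \<noteq> gTp m"
  "gT m \<noteq> gI l" "gHp m \<noteq> gI l" "gHp m \<noteq> gT l" "gTp m \<noteq> gO l" "gH m \<noteq> gO l" "gH m \<noteq> gTp l"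
  "gH m \<noteq> gI l" "gO m \<noteq> gI l" "gO m \<noteq> gT l" "gO m \<noteq> gH l" "gTp m \<noteq> gI l"
  "gHp l \<noteq> gO m" "gO m \<noteq> gHp l" "gHp l \<noteq> gTp m" "gTp m \<noteq> gHp l"
  by (auto simp: gT_def gH_def gTp_def gHp_def gI_def gO_def)

lemma g_eq_iff: "gH l = gT m \<longleftrightarrow> l = l2 \<and> m = l3" "gT m = gH l \<longleftrightarrow> l = l2 \<and> m = l3"
  "gHp l = gH m \<longleftrightarrow> l = m \<and> m \<noteq> l2" "gH m = gHp l \<longleftrightarrow> l = m \<and> m \<noteq> l2"
  "gT l = gTp m \<longleftrightarrow> l = m \<and> l \<noteq> l3" "gTp m = gT l \<longleftrightarrow> l = m \<and> l \<noteq> l3"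
  by (auto simp: gT_def gH_def gTp_def gHp_def)

lemma l3_pn: "l3 \<notin> lbls pn"
proof -
  have "l3 \<in> consumed S" using w_z_lbls by auto
  then show ?thesis using well_labelled_consumed_final[OF gS] final_segments(3) by auto
qed

lemma le_pn: "le \<notin> lbls pn"
proof -
  have "le \<in> consumed S" using le2 by auto
  then show ?thesis using well_labelled_consumed_final[OF gS] final_segments(3) by auto
qed

lemma l2_a: "l2 \<notin> lbls a" using created_disjoint(1) w_z_lbls by auto
lemma le_a: "le \<notin> lbls a" using le_fresh by auto

lemma l2_cr: "l2 \<notin> created S1" "l2 \<notin> created S2" "l2 \<notin> created S3"
  using created_disjoint(2,5) w_z_lbls by auto

lemma lbls_a_fresh: "lbls a \<inter> created S = {}" using well_labelled_created_fresh[OF gS] .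

abbreviation "Ta \<equiv> relabel gT a"
abbreviation "Ha \<equiv> relabel gH a"
abbreviation "P \<equiv> relabel gT pn"
abbreviation "zT \<equiv> At (apsnd gT z)"

lemma relabel_gHp_a: "relabel gHp a = Ha" by (rule relabel_cong) (use l2_a in \<open>auto simp: gH_def gHp_def\<close>)
lemma relabel_gTp_pn: "relabel gTp pn = P" by (rule relabel_cong) (use l3_pn in \<open>auto simp: gT_def gTp_def\<close>)
lemma w_hat_eq_z_tilde: "apsnd gH w = apsnd gT z"
  using same_atom_w_z by (cases w; cases z) (auto simp: gH_def gT_def)

definition "cocon_part = cocontract_steps gI gT gHp a"
definition "tilde_part = lift_steps (CL Hole Ha) (relabel_steps gT tilde_steps)"
definition "switch_part = [(Hole, RCommC (Dis P zT) Ha), (CR Ha Hole, RCommD P zT), (Hole, RSw Ha zT P)]"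
definition "hat_part = lift_steps (DL Hole P) (relabel_steps gH hat_steps)"
definition "comm_part = [(Hole, RCommD (relabel gH pn) P)]"
definition "contr_part = contract_steps gO gTp gH pn"
definition "Psi = cocon_part @ tilde_part @ switch_part @ hat_part @ comm_part @ contr_part"
abbreviation "P0 \<equiv> relabel gI a"

lemma lbl_dist_a: "lbl_dist a" using well_labelled_dist[OF gS] .
lemma lbl_dist_pn: "lbl_dist pn" using well_labelled_final_dist[OF gS] final_segments(3) by simp

lemma cocon_part_props: "well_labelled P0 cocon_part" "final P0 cocon_part = Con Ta Ha" "created cocon_part = gT ` lbls a \<union> gHp ` lbls a"
  "step_sigs cocon_part = (\<lambda>l. (KCoctr, {gI l}, {gT l, gHp l})) ` lbls a" "sks_steps cocon_part"
proof -
  have h: "well_labelled (relabel gI a) (cocontract_steps gI gT gHp a) \<and> created (cocontract_steps gI gT gHp a) = gT ` lbls a \<union> gHp ` lbls a \<and>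
     step_sigs (cocontract_steps gI gT gHp a) = (\<lambda>l. (KCoctr, {gI l}, {gT l, gHp l})) ` lbls a"
    by (rule cocontract_well_labelled[OF g_inj(5,1,4)]) (use g_distinct lbl_dist_a in auto)
  then show "well_labelled P0 cocon_part" "created cocon_part = gT ` lbls a \<union> gHp ` lbls a"
    "step_sigs cocon_part = (\<lambda>l. (KCoctr, {gI l}, {gT l, gHp l})) ` lbls a" by (auto simp: cocon_part_def)
  show "final P0 cocon_part = Con Ta Ha" using cocontract_chain[of gI a gT gHp] relabel_gHp_a by (simp add: cocon_part_def)
  show "sks_steps cocon_part" by (simp add: cocon_part_def cocontract_sks_steps)
qed

lemma contr_part_props: "well_labelled (Dis P (relabel gH pn)) contr_part" "final (Dis P (relabel gH pn)) contr_part = relabel gO pn"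
  "created contr_part = gO ` lbls pn"
  "step_sigs contr_part = (\<lambda>l. (KCtr, {gTp l, gH l}, {gO l})) ` lbls pn" "sks_steps contr_part"
proof -
  have h: "well_labelled (Dis (relabel gTp pn) (relabel gH pn)) (contract_steps gO gTp gH pn) \<and> created (contract_steps gO gTp gH pn) = gO ` lbls pn \<and>
     step_sigs (contract_steps gO gTp gH pn) = (\<lambda>l. (KCtr, {gTp l, gH l}, {gO l})) ` lbls pn"
    by (rule contract_well_labelled[OF g_inj(6,3,2)]) (use g_distinct lbl_dist_pn in auto)
  then show "well_labelled (Dis P (relabel gH pn)) contr_part" "created contr_part = gO ` lbls pn"
    "step_sigs contr_part = (\<lambda>l. (KCtr, {gTp l, gH l}, {gO l})) ` lbls pn" using relabel_gTp_pn by (auto simp: contr_part_def)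
  show "final (Dis P (relabel gH pn)) contr_part = relabel gO pn" using contract_chain[of gTp pn gH gO] relabel_gTp_pn by (simp add: contr_part_def)
  show "sks_steps contr_part" by (simp add: contr_part_def contract_sks_steps)
qed

lemma structural_switch_comm: "structural switch_part" "structural comm_part"
  by (auto simp: switch_part_def comm_part_def)

lemma final_parts_Psi:
  "final (Con Ta Ha) tilde_part = Con (Dis P zT) Ha"
  "final (Con (Dis P zT) Ha) switch_part = Dis (Con Ha zT) P"
  "final (Dis (Con Ha zT) P) hat_part = Dis (relabel gH pn) P"
  "final (Dis (relabel gH pn) P) comm_part = Dis P (relabel gH pn)"
proof -
  show "final (Con Ta Ha) tilde_part = Con (Dis P zT) Ha"
    using tilde_steps_props(2) final_map[of "apsnd gT" a tilde_steps] by (simp add: tilde_part_def)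
  show "final (Dis (Con Ha zT) P) hat_part = Dis (relabel gH pn) P"
    using hat_steps_props(2) final_map[of "apsnd gH" "Con a (At w)" hat_steps] w_hat_eq_z_tilde by (simp add: hat_part_def)
qed (simp_all add: switch_part_def comm_part_def)

lemma created_tilde_hat_part:
  "created tilde_part = gT ` (created S1 \<union> {l2} \<union> created S2 \<union> created S3)"
  "created hat_part = gH ` (created S1 \<union> created S2 \<union> created S3)"
  using tilde_steps_props(3) hat_steps_props(3)
  by (simp_all add: tilde_part_def hat_part_def created_relabel)

lemma lbls_a_fresh_tilde: "lbls a \<inter> (created S1 \<union> {l2} \<union> created S2 \<union> created S3) = {}"
  using lbls_a_fresh w_z_lbls(3) by auto

lemma l2_not_created: "l2 \<notin> created S1 \<union> created S2 \<union> created S3"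
  using l2_cr by auto

lemma well_labelled_tilde_part: "well_labelled (Con Ta Ha) tilde_part"
  unfolding tilde_part_def
proof (rule well_labelled_lift_single(3))
  show "well_labelled Ta (relabel_steps gT tilde_steps)"
    by (rule well_labelled_relabel[OF g_inj(1) tilde_steps_props(1)])
  show "lbl_dist (Con Ta Ha)" using well_labelled_final_dist[OF cocon_part_props(1)] cocon_part_props(2) by simp
  show "lbls Ha \<inter> created (relabel_steps gT tilde_steps) = {}"
    using lbls_a_fresh_tilde l2_not_created l2_a unfolding created_relabel tilde_steps_props(3)
    by (auto simp: gT_def gH_def split: if_splits)
qed

lemma well_labelled_hat_part:
  assumes "lbl_dist (Dis (Con Ha zT) P)"
  shows "well_labelled (Dis (Con Ha zT) P) hat_part"
  unfolding hat_part_def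
proof (rule well_labelled_lift_single(1)[OF _ assms])
  show "well_labelled (Con Ha zT) (relabel_steps gH hat_steps)"
    using well_labelled_relabel[OF g_inj(2) hat_steps_props(1)] w_hat_eq_z_tilde by simp
  show "lbls P \<inter> created (relabel_steps gH hat_steps) = {}"
    using l2_not_created l3_pn unfolding created_relabel hat_steps_props(3)
    by (auto simp: gT_def gH_def split: if_splits)
qed

lemma well_labelled_Psi: "well_labelled P0 Psi"
proof -
  note sw = structural_switch_comm and fin = final_parts_Psi and cr = created_tilde_hat_part
  note cSW = structural_no_atomic[OF sw(1)] structural_no_atomic[OF sw(2)]
  note inj = inj_eq[OF g_inj(1)] inj_eq[OF g_inj(2)] inj_eq[OF g_inj(3)] inj_eq[OF g_inj(4)]
    inj_eq[OF g_inj(5)] inj_eq[OF g_inj(6)]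
  note fresh = lbls_a_fresh_tilde l2_not_created
  have gSW: "well_labelled (Con (Dis P zT) Ha) switch_part"
    using structural_well_labelled[OF sw(1) _ well_labelled_final_dist[OF well_labelled_tilde_part]] fin(1)
    by (simp add: switch_part_def)
  have gHH: "well_labelled (Dis (Con Ha zT) P) hat_part"
    using well_labelled_hat_part well_labelled_final_dist[OF gSW] fin(2) by simp
  have gCM: "well_labelled (Dis (relabel gH pn) P) comm_part"
    using structural_well_labelled[OF sw(2) _ well_labelled_final_dist[OF gHH]] fin(3)
    by (simp add: comm_part_def)
  have g56: "well_labelled (Dis (relabel gH pn) P) (comm_part @ contr_part)"
    by (rule well_labelled_appendI[OF gCM fin(4) contr_part_props(1)])
       (use cSW contr_part_props(3) g_distinct in auto)
  have g46: "well_labelled (Dis (Con Ha zT) P) (hat_part @ comm_part @ contr_part)"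
    by (rule well_labelled_appendI[OF gHH fin(3) g56]) (use cSW contr_part_props(3) g_distinct cr in auto)
  have g36: "well_labelled (Con (Dis P zT) Ha) (switch_part @ hat_part @ comm_part @ contr_part)"
    by (rule well_labelled_appendI[OF gSW fin(2) g46])
       (use cSW contr_part_props(3) g_distinct l3_pn fresh cr in \<open>auto simp: g_eq_iff inj\<close>)
  have g26: "well_labelled (Con Ta Ha) (tilde_part @ switch_part @ hat_part @ comm_part @ contr_part)"
    by (rule well_labelled_appendI[OF well_labelled_tilde_part fin(1) g36])
       (use cSW contr_part_props(3) g_distinct fresh cr in \<open>auto simp: g_eq_iff inj\<close>)
  show ?thesis unfolding Psi_def
    by (rule well_labelled_appendI[OF cocon_part_props(1,2) g26])
       (use cSW contr_part_props(3) cocon_part_props(3) g_distinct fresh cr in \<open>auto simp: g_eq_iff inj\<close>)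
qed

lemma final_Psi: "final P0 Psi = relabel gO pn"
  unfolding Psi_def using cocon_part_props(2) final_parts_Psi contr_part_props(2) by (simp add: final_append)

lemma sks_steps_Psi: "sks_steps Psi"
  unfolding Psi_def tilde_part_def hat_part_def
  using cocon_part_props(5) contr_part_props(5) tilde_steps_props(5) hat_steps_props(5)
    structural_sks_steps[OF structural_switch_comm(1)] structural_sks_steps[OF structural_switch_comm(2)]
  by (simp add: sks_steps_relabel)

lemma step_sigs_Psi:
  "step_sigs Psi = (\<lambda>l. (KCoctr, {gI l}, {gT l, gHp l})) ` lbls a \<union>
      relabel_sig gT ` (step_sigs S1 \<union> step_sigs S2 \<union> step_sigs S3 \<union> {(KWk, {}, {l2})}) \<union>
      relabel_sig gH ` (step_sigs S1 \<union> step_sigs S2 \<union> step_sigs S3 \<union> {(KCowk, {l3}, {})}) \<union>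
      (\<lambda>l. (KCtr, {gTp l, gH l}, {gO l})) ` lbls pn"
  unfolding Psi_def tilde_part_def hat_part_def
  using cocon_part_props(4) contr_part_props(4) tilde_steps_props(4) hat_steps_props(4)
    structural_no_atomic[OF structural_switch_comm(1)] structural_no_atomic[OF structural_switch_comm(2)]
  by (simp add: step_sigs_relabel Un_assoc)

end

lemma flow_iso_trans: "flow_iso F G \<Longrightarrow> flow_iso G H \<Longrightarrow> flow_iso F H"
proof -
  assume "flow_iso F G" "flow_iso G H"
  then obtain fv fe gv ge where f: "bij_betw fv (fV F) (fV G)" "bij_betw fe (fE F) (fE G)"
     "\<forall>v\<in>fV F. flab G (fv v) = flab F v"
     "\<forall>e\<in>fE F. fup G (fe e) = map_option fv (fup F e) \<and> flo G (fe e) = map_option fv (flo F e)"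
    and g: "bij_betw gv (fV G) (fV H)" "bij_betw ge (fE G) (fE H)"
     "\<forall>v\<in>fV G. flab H (gv v) = flab G v"
     "\<forall>e\<in>fE G. fup H (ge e) = map_option gv (fup G e) \<and> flo H (ge e) = map_option gv (flo G e)"
    unfolding flow_iso_def by blast
  show "flow_iso F H" unfolding flow_iso_def
  proof (intro exI conjI ballI)
    show "bij_betw (gv \<circ> fv) (fV F) (fV H)" using f(1) g(1) by (rule bij_betw_trans)
    show "bij_betw (ge \<circ> fe) (fE F) (fE H)" using f(2) g(2) by (rule bij_betw_trans)
    fix v assume v: "v \<in> fV F"
    then have "fv v \<in> fV G" using f(1) by (auto simp: bij_betw_def)
    then show "flab H ((gv \<circ> fv) v) = flab F v" using f(3) g(3) v by simp
  next
    fix e assume e: "e \<in> fE F"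
    then have "fe e \<in> fE G" using f(2) by (auto simp: bij_betw_def)
    then show "fup H ((ge \<circ> fe) e) = map_option (gv \<circ> fv) (fup F e)"
      "flo H ((ge \<circ> fe) e) = map_option (gv \<circ> fv) (flo F e)"
      using f(4) g(4) e by (auto simp: option.map_comp)
  qed
qed

lemma flow_iso_sym:
  assumes af: "\<forall>e\<in>fE F. (\<forall>v. fup F e = Some v \<longrightarrow> v \<in> fV F) \<and> (\<forall>v. flo F e = Some v \<longrightarrow> v \<in> fV F)"
    and iso: "flow_iso F G"
  shows "flow_iso G F"
proof -
  obtain fv fe where f: "bij_betw fv (fV F) (fV G)" "bij_betw fe (fE F) (fE G)"
     "\<forall>v\<in>fV F. flab G (fv v) = flab F v"
     "\<forall>e\<in>fE F. fup G (fe e) = map_option fv (fup F e) \<and> flo G (fe e) = map_option fv (flo F e)"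
    using iso unfolding flow_iso_def by blast
  let ?gv = "inv_into (fV F) fv" and ?ge = "inv_into (fE F) fe"
  have gv: "bij_betw ?gv (fV G) (fV F)" using f(1) by (rule bij_betw_inv_into)
  have ge: "bij_betw ?ge (fE G) (fE F)" using f(2) by (rule bij_betw_inv_into)
  show ?thesis unfolding flow_iso_def
  proof (intro exI conjI ballI)
    show "bij_betw ?gv (fV G) (fV F)" by (rule gv)
    show "bij_betw ?ge (fE G) (fE F)" by (rule ge)
    fix v assume v: "v \<in> fV G"
    then have "?gv v \<in> fV F" "fv (?gv v) = v" using f(1) gv
      by (auto simp: bij_betw_def f_inv_into_f)
    then show "flab F (?gv v) = flab G v" using f(3) by metis
  next
    fix e assume e: "e \<in> fE G"
    then have e1: "?ge e \<in> fE F" "fe (?ge e) = e" using f(2) ge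
      by (auto simp: bij_betw_def f_inv_into_f)
    have inv: "?gv (fv u) = u" if "u \<in> fV F" for u
      using f(1) that by (simp add: bij_betw_def inv_into_f_f)
    have "fup G e = map_option fv (fup F (?ge e))" using f(4) e1 by metis
    then show "fup F (?ge e) = map_option ?gv (fup G e)"
      using af e1(1) inv by (cases "fup F (?ge e)") auto
    have "flo G e = map_option fv (flo F (?ge e))" using f(4) e1 by metis
    then show "flo F (?ge e) = map_option ?gv (flo G e)"
      using af e1(1) inv by (cases "flo F (?ge e)") auto
  qed
qed

lemma flow_iso_sig_flowI:
  fixes F :: "('v, 'e) flow"
  assumes bv: "bij_betw fv (fV F) Sg"
    and be: "bij_betw fe (fE F) (P \<union> \<Union> ((snd \<circ> snd) ` Sg))"
    and lab: "\<forall>v\<in>fV F. fst (fv v) = flab F v"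
    and up: "\<forall>x\<in>fE F. (fup F x = None \<longleftrightarrow> fe x \<in> P) \<and>
               (\<forall>v. fup F x = Some v \<longrightarrow> v \<in> fV F \<and> fe x \<in> snd (snd (fv v)))"
    and lo: "\<forall>x\<in>fE F. (flo F x = None \<longleftrightarrow> fe x \<in> Q) \<and>
               (\<forall>v. flo F x = Some v \<longrightarrow> v \<in> fV F \<and> fe x \<in> fst (snd (fv v)))"
    and dj: "\<forall>s1\<in>Sg. \<forall>s2\<in>Sg. s1 \<noteq> s2 \<longrightarrow> snd (snd s1) \<inter> snd (snd s2) = {} \<and> fst (snd s1) \<inter> fst (snd s2) = {}"
  shows "flow_iso F (sig_flow P Sg Q)"
  unfolding flow_iso_def
proof (intro exI conjI ballI)
  show "bij_betw fv (fV F) (fV (sig_flow P Sg Q))" using bv by (simp add: sig_flow_def)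
  show "bij_betw fe (fE F) (fE (sig_flow P Sg Q))" using be by (simp add: sig_flow_def)
  fix v assume "v \<in> fV F" then show "flab (sig_flow P Sg Q) (fv v) = flab F v" using lab by (simp add: sig_flow_def)
next
  fix x assume x: "x \<in> fE F"
  have fvS: "fv v \<in> Sg" if "v \<in> fV F" for v using bv that by (auto simp: bij_betw_def)
  show "fup (sig_flow P Sg Q) (fe x) = map_option fv (fup F x)"
  proof (cases "fup F x")
    case None then show ?thesis using up x by (simp add: sig_flow_def)
  next
    case (Some v)
    then have v: "v \<in> fV F" "fe x \<in> snd (snd (fv v))" "fe x \<notin> P" using up x by auto
    have "(THE \<sigma>. \<sigma> \<in> Sg \<and> fe x \<in> snd (snd \<sigma>)) = fv v"
      by (rule the_equality) (use v fvS dj in blast)+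
    then show ?thesis using Some v by (simp add: sig_flow_def)
  qed
  show "flo (sig_flow P Sg Q) (fe x) = map_option fv (flo F x)"
  proof (cases "flo F x")
    case None then show ?thesis using lo x by (simp add: sig_flow_def)
  next
    case (Some v)
    then have v: "v \<in> fV F" "fe x \<in> fst (snd (fv v))" "fe x \<notin> Q" using lo x by auto
    have "(THE \<sigma>. \<sigma> \<in> Sg \<and> fe x \<in> fst (snd \<sigma>)) = fv v"
      by (rule the_equality) (use v fvS dj in blast)+
    then show ?thesis using Some v by (simp add: sig_flow_def)
  qed
qed

lemma se_construct_parts:
  fixes B :: "('v, 'e) flow"
  assumes "\<iota> = the (fup B \<epsilon>)" "\<kappa> = the (flo B \<epsilon>)"
    "\<epsilon>2 = (THE e. e \<in> fE B \<and> e \<noteq> \<epsilon> \<and> fup B e = Some \<iota>)"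
    "\<epsilon>3 = (THE e. e \<in> fE B \<and> e \<noteq> \<epsilon> \<and> flo B e = Some \<kappa>)"
  shows "fV (se_construct B \<epsilon>) = {Cp b v | b v. v \<in> fV B - {\<iota>, \<kappa>}} \<union> {NW, NCW}
      \<union> NCoc ` {e \<in> fE B - {\<epsilon>}. e \<noteq> \<epsilon>2 \<and> fup B e = None}
      \<union> NCon ` {e \<in> fE B - {\<epsilon>}. e \<noteq> \<epsilon>3 \<and> flo B e = None}"
   and "fE (se_construct B \<epsilon>) = {ECp True e | e. e \<in> fE B - {\<epsilon>} \<and> e \<noteq> \<epsilon>3}
      \<union> {ECp False e | e. e \<in> fE B - {\<epsilon>} \<and> e \<noteq> \<epsilon>2} \<union> {EMid}
      \<union> EIn ` {e \<in> fE B - {\<epsilon>}. e \<noteq> \<epsilon>2 \<and> fup B e = None}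
      \<union> EOut ` {e \<in> fE B - {\<epsilon>}. e \<noteq> \<epsilon>3 \<and> flo B e = None}"
   and "flab (se_construct B \<epsilon>) = (\<lambda>x. case x of Cp b v \<Rightarrow> flab B v | NW \<Rightarrow> KWk | NCW \<Rightarrow> KCowk
                          | NCoc e \<Rightarrow> KCoctr | NCon e \<Rightarrow> KCtr)"
   and "fup (se_construct B \<epsilon>) = (\<lambda>x. case x of
          ECp b e \<Rightarrow> (if e = \<epsilon>2 then Some NW
                    else (case fup B e of None \<Rightarrow> Some (NCoc e) | Some v \<Rightarrow> Some (Cp b v)))
        | EIn e \<Rightarrow> None | EOut e \<Rightarrow> Some (NCon e)
        | EMid \<Rightarrow> (if \<epsilon>3 = \<epsilon>2 then Some NW
                    else (case fup B \<epsilon>3 of None \<Rightarrow> Some (NCoc \<epsilon>3) | Some v \<Rightarrow> Some (Cp True v))))"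
   and "flo (se_construct B \<epsilon>) = (\<lambda>x. case x of
          ECp b e \<Rightarrow> (if e = \<epsilon>3 then Some NCW
                    else (case flo B e of None \<Rightarrow> Some (NCon e) | Some v \<Rightarrow> Some (Cp b v)))
        | EIn e \<Rightarrow> Some (NCoc e) | EOut e \<Rightarrow> None
        | EMid \<Rightarrow> (if \<epsilon>2 = \<epsilon>3 then Some NCW
                    else (case flo B \<epsilon>2 of None \<Rightarrow> Some (NCon \<epsilon>2) | Some v \<Rightarrow> Some (Cp False v))))"
  unfolding assms by (simp_all add: se_construct_def Let_def)

section \<open>The atomic flow of \<Psi>\<close>

text \<open>\<open>B\<close> is the flow of \<Phi>, identified with \<open>steps_flow a S\<close> by \<open>fvB\<close> and \<open>feB\<close>; its edge \<epsilon>
  joins the interaction \<iota> to the cut \<kappa>.\<close>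
locale se_flow = se_deriv a S1 c x y S2 c' x' y' S3 le
  for a :: "('n atom \<times> nat) formula" and S1 c x y S2 c' x' y' S3 le +
  fixes B :: "('v, 'e) flow" and \<epsilon> :: 'e and \<iota> \<kappa> :: 'v
    and fvB :: "'v \<Rightarrow> vkind \<times> nat set \<times> nat set" and feB :: "'e \<Rightarrow> nat"
  assumes afB: "\<forall>e\<in>fE B. (\<forall>v. fup B e = Some v \<longrightarrow> v \<in> fV B) \<and> (\<forall>v. flo B e = Some v \<longrightarrow> v \<in> fV B)"
    and epsE: "\<epsilon> \<in> fE B" and upe: "fup B \<epsilon> = Some \<iota>" and loe: "flo B \<epsilon> = Some \<kappa>"
    and bvB: "bij_betw fvB (fV B) (step_sigs (S1 @ (c, RInt x y) # S2 @ (c', RCut x' y') # S3))"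
    and beB: "bij_betw feB (fE B) (lbls a \<union> created (S1 @ (c, RInt x y) # S2 @ (c', RCut x' y') # S3))"
    and labB: "\<forall>v\<in>fV B. fst (fvB v) = flab B v"
    and isoB: "\<forall>e\<in>fE B. fup (steps_flow a (S1 @ (c, RInt x y) # S2 @ (c', RCut x' y') # S3)) (feB e) = map_option fvB (fup B e) \<and>
                flo (steps_flow a (S1 @ (c, RInt x y) # S2 @ (c', RCut x' y') # S3)) (feB e) = map_option fvB (flo B e)"
    and s_iota: "fvB \<iota> = step_sig (RInt x y)" and s_kappa: "fvB \<kappa> = step_sig (RCut x' y')" and fe_eps: "feB \<epsilon> = le"
begin

lemma feB_img: "feB ` fE B = lbls a \<union> created S" using beB unfolding bij_betw_def by (rule conjunct2)
lemma feB_in: "e \<in> fE B \<Longrightarrow> feB e \<in> lbls a \<union> created S" using feB_img by blast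
lemma feB_inj: "e \<in> fE B \<Longrightarrow> e' \<in> fE B \<Longrightarrow> feB e = feB e' \<longleftrightarrow> e = e'"
  using beB unfolding bij_betw_def inj_on_def by blast
lemma feB_surj: assumes "l \<in> lbls a \<union> created S" shows "\<exists>e\<in>fE B. feB e = l"
proof -
  from assms have "l \<in> feB ` fE B" unfolding feB_img .
  then show ?thesis by blast
qed
lemma fvB_img: "fvB ` fV B = step_sigs S" using bvB unfolding bij_betw_def by (rule conjunct2)
lemma fvB_in: "v \<in> fV B \<Longrightarrow> fvB v \<in> step_sigs S" using fvB_img by blast
lemma fvB_inj: "v \<in> fV B \<Longrightarrow> v' \<in> fV B \<Longrightarrow> fvB v = fvB v' \<longleftrightarrow> v = v'"
  using bvB unfolding bij_betw_def inj_on_def by blast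

lemma lbls_balance: "lbls a \<union> created S = lbls pn \<union> consumed S" using well_labelled_lbls_balance[OF gS] final_segments(3) by simp

lemma consumed_final: "consumed S \<inter> lbls pn = {}" using well_labelled_consumed_final[OF gS] unfolding final_segments(3) .

lemma iota_V: "\<iota> \<in> fV B" and kappa_V: "\<kappa> \<in> fV B" using afB epsE upe loe by auto

lemma fup_None_iff: "e \<in> fE B \<Longrightarrow> fup B e = None \<longleftrightarrow> feB e \<in> lbls a"
  using isoB by (cases "fup B e") (auto simp: sig_flow_def split: if_splits)

lemma flo_None_iff: "e \<in> fE B \<Longrightarrow> flo B e = None \<longleftrightarrow> feB e \<in> lbls pn"
  using isoB final_segments(3) by (cases "flo B e") (auto simp: sig_flow_def split: if_splits)

lemma fup_Some:
  assumes e: "e \<in> fE B" and u: "fup B e = Some v"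
  shows "v \<in> fV B" "feB e \<in> snd (snd (fvB v))"
proof -
  show "v \<in> fV B" using afB e u by auto
  have "fup (steps_flow a S) (feB e) = Some (fvB v)" using isoB e u by auto
  then show "feB e \<in> snd (snd (fvB v))" using steps_flow_fup_Some[OF gS feB_in[OF e]] by blast
qed

lemma flo_Some:
  assumes e: "e \<in> fE B" and u: "flo B e = Some v"
  shows "v \<in> fV B" "feB e \<in> fst (snd (fvB v))"
proof -
  show "v \<in> fV B" using afB e u by auto
  have "flo (steps_flow a S) (feB e) = Some (fvB v)" using isoB e u by auto
  then show "feB e \<in> fst (snd (fvB v))" using steps_flow_flo_Some[OF gS feB_in[OF e]] by blast
qed

lemma out_edge_exists: assumes v: "v \<in> fV B" and l: "l \<in> snd (snd (fvB v))"
  shows "\<exists>e\<in>fE B. feB e = l \<and> fup B e = Some v"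
proof -
  have lc: "l \<in> created S" using step_sigs_out_created[OF fvB_in[OF v]] l by blast
  then obtain e where e: "e \<in> fE B" "feB e = l" using feB_surj by blast
  have n: "l \<notin> lbls a" using lc lbls_a_fresh by blast
  have "fup (steps_flow a S) l = Some (fvB v)"
    using n the_step_sig_out[OF gS fvB_in[OF v] l] by (simp add: sig_flow_def)
  then have "map_option fvB (fup B e) = Some (fvB v)" using isoB e by auto
  then obtain v' where v': "fup B e = Some v'" "fvB v' = fvB v" by auto
  have "v' \<in> fV B" using afB e v' by auto
  then have "v' = v" using v v' fvB_inj by blast
  then show ?thesis using e v' by blast
qed

lemma in_edge_exists: assumes v: "v \<in> fV B" and l: "l \<in> fst (snd (fvB v))"
  shows "\<exists>e\<in>fE B. feB e = l \<and> flo B e = Some v"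
proof -
  have lc: "l \<in> consumed S" using step_sigs_in_consumed[OF fvB_in[OF v]] l by blast
  then have "l \<in> lbls a \<union> created S" using lbls_balance by blast
  then obtain e where e: "e \<in> fE B" "feB e = l" using feB_surj by blast
  have n: "l \<notin> lbls pn" using lc consumed_final by blast
  have "flo (steps_flow a S) l = Some (fvB v)"
    using n the_step_sig_in[OF gS fvB_in[OF v] l] final_segments(3) by (simp add: sig_flow_def)
  then have "map_option fvB (flo B e) = Some (fvB v)" using isoB e by auto
  then obtain v' where v': "flo B e = Some v'" "fvB v' = fvB v" by auto
  have "v' \<in> fV B" using afB e v' by auto
  then have "v' = v" using v v' fvB_inj by blast
  then show ?thesis using e v' by blast
qed

definition "\<epsilon>2 = (THE e. e \<in> fE B \<and> e \<noteq> \<epsilon> \<and> fup B e = Some \<iota>)"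
definition "\<epsilon>3 = (THE e. e \<in> fE B \<and> e \<noteq> \<epsilon> \<and> flo B e = Some \<kappa>)"

lemma outs_iota: "snd (snd (fvB \<iota>)) = {le, l2}" and ins_iota: "fst (snd (fvB \<iota>)) = {}"
  using s_iota w_z_lbls le1 lbl_dist_parts by (auto simp: step_sig_def w_def)
lemma ins_kappa: "fst (snd (fvB \<kappa>)) = {le, l3}" and outs_kappa: "snd (snd (fvB \<kappa>)) = {}"
  using s_kappa w_z_lbls le2 lbl_dist_parts by (auto simp: step_sig_def z_def)

lemma eps2: "\<epsilon>2 \<in> fE B" "\<epsilon>2 \<noteq> \<epsilon>" "fup B \<epsilon>2 = Some \<iota>" "feB \<epsilon>2 = l2"
proof -
  obtain e0 where e0: "e0 \<in> fE B" "feB e0 = l2" "fup B e0 = Some \<iota>"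
    using out_edge_exists[OF iota_V, of l2] outs_iota by auto
  have ne: "e0 \<noteq> \<epsilon>" using e0(2) fe_eps w_z_lbls by auto
  have "\<epsilon>2 = e0" unfolding \<epsilon>2_def
  proof (rule the_equality)
    show "e0 \<in> fE B \<and> e0 \<noteq> \<epsilon> \<and> fup B e0 = Some \<iota>" using e0 ne by simp
  next
    fix e assume e: "e \<in> fE B \<and> e \<noteq> \<epsilon> \<and> fup B e = Some \<iota>"
    then have "feB e \<in> {le, l2}" using fup_Some[of e \<iota>] outs_iota by auto
    moreover have "feB e \<noteq> le" using e feB_inj[OF _ epsE] fe_eps by auto
    ultimately have "feB e = feB e0" using e0 by auto
    then show "e = e0" using feB_inj e e0 by blast
  qed
  then show "\<epsilon>2 \<in> fE B" "\<epsilon>2 \<noteq> \<epsilon>" "fup B \<epsilon>2 = Some \<iota>" "feB \<epsilon>2 = l2" using e0 ne by auto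
qed

lemma eps3: "\<epsilon>3 \<in> fE B" "\<epsilon>3 \<noteq> \<epsilon>" "flo B \<epsilon>3 = Some \<kappa>" "feB \<epsilon>3 = l3"
proof -
  obtain e0 where e0: "e0 \<in> fE B" "feB e0 = l3" "flo B e0 = Some \<kappa>"
    using in_edge_exists[OF kappa_V, of l3] ins_kappa by auto
  have ne: "e0 \<noteq> \<epsilon>" using e0(2) fe_eps w_z_lbls by auto
  have "\<epsilon>3 = e0" unfolding \<epsilon>3_def
  proof (rule the_equality)
    show "e0 \<in> fE B \<and> e0 \<noteq> \<epsilon> \<and> flo B e0 = Some \<kappa>" using e0 ne by simp
  next
    fix e assume e: "e \<in> fE B \<and> e \<noteq> \<epsilon> \<and> flo B e = Some \<kappa>"
    then have "feB e \<in> {le, l3}" using flo_Some[of e \<kappa>] ins_kappa by auto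
    moreover have "feB e \<noteq> le" using e feB_inj[OF _ epsE] fe_eps by auto
    ultimately have "feB e = feB e0" using e0 by auto
    then show "e = e0" using feB_inj e e0 by blast
  qed
  then show "\<epsilon>3 \<in> fE B" "\<epsilon>3 \<noteq> \<epsilon>" "flo B \<epsilon>3 = Some \<kappa>" "feB \<epsilon>3 = l3" using e0 ne by auto
qed

lemma fvB_other_vertices: "fvB ` (fV B - {\<iota>, \<kappa>}) = step_sigs S1 \<union> step_sigs S2 \<union> step_sigs S3"
proof -
  have i1: "fvB \<iota> \<notin> step_sigs S1 \<union> step_sigs S2 \<union> step_sigs S3"
  proof
    assume "fvB \<iota> \<in> step_sigs S1 \<union> step_sigs S2 \<union> step_sigs S3"
    then have "le \<in> created S1 \<union> created S2 \<union> created S3"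
      using step_sigs_out_created[of "fvB \<iota>" S1] step_sigs_out_created[of "fvB \<iota>" S2] step_sigs_out_created[of "fvB \<iota>" S3] outs_iota by blast
    then show False using le_fresh by blast
  qed
  have k1: "fvB \<kappa> \<notin> step_sigs S1 \<union> step_sigs S2 \<union> step_sigs S3"
  proof
    assume "fvB \<kappa> \<in> step_sigs S1 \<union> step_sigs S2 \<union> step_sigs S3"
    then have "le \<in> consumed S1 \<union> consumed S2 \<union> consumed S3"
      using step_sigs_in_consumed[of "fvB \<kappa>" S1] step_sigs_in_consumed[of "fvB \<kappa>" S2] step_sigs_in_consumed[of "fvB \<kappa>" S3] ins_kappa by blast
    then show False using le_fresh by blast
  qed
  have sS': "step_sigs S = step_sigs S1 \<union> {fvB \<iota>} \<union> step_sigs S2 \<union> {fvB \<kappa>} \<union> step_sigs S3"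
    using s_iota s_kappa by auto
  have "fvB ` (fV B - {\<iota>, \<kappa>}) = fvB ` fV B - {fvB \<iota>, fvB \<kappa>}"
    using bvB iota_V kappa_V by (auto simp: bij_betw_def inj_on_def)
  also have "\<dots> = step_sigs S1 \<union> step_sigs S2 \<union> step_sigs S3" unfolding fvB_img sS' using i1 k1 by blast
  finally show ?thesis .
qed

abbreviation "F \<equiv> se_construct B \<epsilon>"
definition "Ups = {e \<in> fE B - {\<epsilon>}. e \<noteq> \<epsilon>2 \<and> fup B e = None}"
definition "Los = {e \<in> fE B - {\<epsilon>}. e \<noteq> \<epsilon>3 \<and> flo B e = None}"

lemma iota_the: "\<iota> = the (fup B \<epsilon>)" using upe by simp
lemma kappa_the: "\<kappa> = the (flo B \<epsilon>)" using loe by simp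

lemmas F_parts = se_construct_parts[OF iota_the kappa_the \<epsilon>2_def \<epsilon>3_def]

lemma F_vertices: "fV F = {Cp b v | b v. v \<in> fV B - {\<iota>, \<kappa>}} \<union> {NW, NCW} \<union> NCoc ` Ups \<union> NCon ` Los"
  using F_parts(1) by (simp add: Ups_def Los_def)
lemma F_edges: "fE F = {ECp True e | e. e \<in> fE B - {\<epsilon>} \<and> e \<noteq> \<epsilon>3} \<union> {ECp False e | e. e \<in> fE B - {\<epsilon>} \<and> e \<noteq> \<epsilon>2}
   \<union> {EMid} \<union> EIn ` Ups \<union> EOut ` Los"
  using F_parts(2) by (simp add: Ups_def Los_def)
lemmas F_flab = F_parts(3) and F_fup = F_parts(4) and F_flo = F_parts(5)

definition feF :: "'e see \<Rightarrow> nat" where "feF xx = to_nat (map_see feB xx)"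
definition fvF :: "('v, 'e) sev \<Rightarrow> vkind \<times> nat set \<times> nat set" where
  "fvF v = (case v of Cp b u \<Rightarrow> relabel_sig (if b then gT else gH) (fvB u) | NW \<Rightarrow> (KWk, {}, {gT l2})
     | NCW \<Rightarrow> (KCowk, {gH l3}, {}) | NCoc e \<Rightarrow> (KCoctr, {gI (feB e)}, {gT (feB e), gHp (feB e)})
     | NCon e \<Rightarrow> (KCtr, {gTp (feB e), gH (feB e)}, {gO (feB e)}))"

lemma feF_simps[simp]: "feF (ECp True e) = gTp (feB e)" "feF (ECp False e) = gHp (feB e)"
  "feF EMid = to_nat (EMid :: nat see)" "feF (EIn e) = gI (feB e)" "feF (EOut e) = gO (feB e)"
  by (simp_all add: feF_def gTp_def gHp_def gI_def gO_def)

lemma fvF_simps[simp]: "fvF (Cp True u) = relabel_sig gT (fvB u)" "fvF (Cp False u) = relabel_sig gH (fvB u)"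
  "fvF NW = (KWk, {}, {gT l2})" "fvF NCW = (KCowk, {gH l3}, {})"
  "fvF (NCoc e) = (KCoctr, {gI (feB e)}, {gT (feB e), gHp (feB e)})"
  "fvF (NCon e) = (KCtr, {gTp (feB e), gH (feB e)}, {gO (feB e)})"
  by (simp_all add: fvF_def)

lemma gT_ne: "l \<noteq> l3 \<Longrightarrow> gT l = gTp l" by (simp add: gT_def gTp_def)
lemma gH_ne: "l \<noteq> l2 \<Longrightarrow> gH l = gHp l" by (simp add: gH_def gHp_def)
lemma gT_l3: "gT l3 = to_nat (EMid :: nat see)" by (simp add: gT_def)
lemma gH_l2: "gH l2 = to_nat (EMid :: nat see)" by (simp add: gH_def)
lemma g_ne_mid: "gTp l \<noteq> to_nat (EMid :: nat see)" "gHp l \<noteq> to_nat (EMid :: nat see)"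
  "gI l \<noteq> to_nat (EMid :: nat see)" "gO l \<noteq> to_nat (EMid :: nat see)"
  "to_nat (EMid :: nat see) \<noteq> gTp l" "to_nat (EMid :: nat see) \<noteq> gHp l"
  "to_nat (EMid :: nat see) \<noteq> gI l" "to_nat (EMid :: nat see) \<noteq> gO l"
  by (simp_all add: gTp_def gHp_def gI_def gO_def)

lemma mid_notin[simp]: "to_nat (EMid :: nat see) \<notin> gI ` A" "to_nat (EMid :: nat see) \<notin> gO ` A"
  by (auto simp: gI_def gO_def)

lemma relabel_sig_simps[simp]: "fst (relabel_sig g \<sigma>) = fst \<sigma>" "fst (snd (relabel_sig g \<sigma>)) = g ` fst (snd \<sigma>)"
  "snd (snd (relabel_sig g \<sigma>)) = g ` snd (snd \<sigma>)"
  by (simp_all add: relabel_sig_def)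

lemma eps2_eq_eps3_iff: "\<epsilon>2 = \<epsilon>3 \<longleftrightarrow> l2 = l3" using eps2 eps3 feB_inj by metis

lemma up_iota: "e \<in> fE B \<Longrightarrow> fup B e = Some \<iota> \<Longrightarrow> e = \<epsilon> \<or> e = \<epsilon>2"
proof -
  assume e: "e \<in> fE B" "fup B e = Some \<iota>"
  then have "feB e \<in> {le, l2}" using fup_Some[OF e] outs_iota by simp
  then have "feB e = feB \<epsilon> \<or> feB e = feB \<epsilon>2" using eps2 fe_eps by auto
  then show ?thesis using e(1) epsE eps2(1) feB_inj by blast
qed
lemma lo_kappa: "e \<in> fE B \<Longrightarrow> flo B e = Some \<kappa> \<Longrightarrow> e = \<epsilon> \<or> e = \<epsilon>3"
proof -
  assume e: "e \<in> fE B" "flo B e = Some \<kappa>"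
  then have "feB e \<in> {le, l3}" using flo_Some[OF e] ins_kappa by simp
  then have "feB e = feB \<epsilon> \<or> feB e = feB \<epsilon>3" using eps3 fe_eps by auto
  then show ?thesis using e(1) epsE eps3(1) feB_inj by blast
qed
lemma up_kappa: "e \<in> fE B \<Longrightarrow> fup B e \<noteq> Some \<kappa>"
  using fup_Some outs_kappa by fastforce
lemma lo_iota: "e \<in> fE B \<Longrightarrow> flo B e \<noteq> Some \<iota>"
  using flo_Some ins_iota by fastforce

lemma Ups_a: "e \<in> Ups \<Longrightarrow> feB e \<in> lbls a" using fup_None_iff by (auto simp: Ups_def)
lemma Los_pn: "e \<in> Los \<Longrightarrow> feB e \<in> lbls pn" using flo_None_iff by (auto simp: Los_def)

lemma F_edges_cases:
  assumes "xx \<in> fE F"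
  obtains (T) e where "xx = ECp True e" "e \<in> fE B" "e \<noteq> \<epsilon>" "e \<noteq> \<epsilon>3"
    | (H) e where "xx = ECp False e" "e \<in> fE B" "e \<noteq> \<epsilon>" "e \<noteq> \<epsilon>2"
    | (M) "xx = EMid"
    | (I) e where "xx = EIn e" "e \<in> Ups"
    | (O) e where "xx = EOut e" "e \<in> Los"
  using assms unfolding F_edges by blast

lemma feB_ne: "e \<in> fE B \<Longrightarrow> e \<noteq> \<epsilon>3 \<Longrightarrow> feB e \<noteq> l3"
  "e \<in> fE B \<Longrightarrow> e \<noteq> \<epsilon>2 \<Longrightarrow> feB e \<noteq> l2"
  using feB_inj eps2 eps3 by metis+

lemma in_F_vertices: "v \<in> fV B \<Longrightarrow> v \<noteq> \<iota> \<Longrightarrow> v \<noteq> \<kappa> \<Longrightarrow> Cp b v \<in> fV F"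
  "NW \<in> fV F" "NCW \<in> fV F" "e \<in> Ups \<Longrightarrow> NCoc e \<in> fV F" "e \<in> Los \<Longrightarrow> NCon e \<in> fV F"
  unfolding F_vertices by blast+

lemma fup_Some_inner:
  assumes "e \<in> fE B" "e \<noteq> \<epsilon>" "e \<noteq> \<epsilon>2" "fup B e = Some v"
  shows "v \<in> fV B" "v \<noteq> \<iota>" "v \<noteq> \<kappa>" "feB e \<in> snd (snd (fvB v))"
  using fup_Some[OF assms(1,4)] up_iota[OF assms(1)] up_kappa[OF assms(1)] assms(2-4) by auto

lemma flo_Some_inner:
  assumes "e \<in> fE B" "e \<noteq> \<epsilon>" "e \<noteq> \<epsilon>3" "flo B e = Some v"
  shows "v \<in> fV B" "v \<noteq> \<iota>" "v \<noteq> \<kappa>" "feB e \<in> fst (snd (fvB v))"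
  using flo_Some[OF assms(1,4)] lo_kappa[OF assms(1)] lo_iota[OF assms(1)] assms(2-4) by auto

definition fup_matches :: "'e see \<Rightarrow> bool" where
  "fup_matches xx \<longleftrightarrow> (fup F xx = None \<longleftrightarrow> feF xx \<in> gI ` lbls a) \<and>
     (\<forall>v. fup F xx = Some v \<longrightarrow> v \<in> fV F \<and> feF xx \<in> snd (snd (fvF v)))"

definition flo_matches :: "'e see \<Rightarrow> bool" where
  "flo_matches xx \<longleftrightarrow> (flo F xx = None \<longleftrightarrow> feF xx \<in> gO ` lbls pn) \<and>
     (\<forall>v. flo F xx = Some v \<longrightarrow> v \<in> fV F \<and> feF xx \<in> fst (snd (fvF v)))"

lemma fup_matches_tilde:
  assumes e: "e \<in> fE B" "e \<noteq> \<epsilon>" "e \<noteq> \<epsilon>3"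
  shows "fup_matches (ECp True e)"
proof -
  have l: "feB e \<noteq> l3" using feB_ne e by blast
  consider "e = \<epsilon>2" | "e \<noteq> \<epsilon>2" "fup B e = None" | v where "e \<noteq> \<epsilon>2" "fup B e = Some v"
    by (cases "fup B e") auto
  then show ?thesis
  proof cases
    case 1
    then have "l2 \<noteq> l3" using e eps2_eq_eps3_iff by simp
    then show ?thesis using 1 in_F_vertices g_distinct by (auto simp: fup_matches_def F_fup gT_ne eps2)
  next
    case 2
    then have "e \<in> Ups" using e by (simp add: Ups_def)
    then show ?thesis using 2 in_F_vertices l g_distinct by (auto simp: fup_matches_def F_fup gT_ne)
  next
    case (3 v)
    note v = fup_Some_inner[OF e(1,2) 3]
    have "gTp (feB e) \<in> gT ` snd (snd (fvB v))" using v(4) gT_ne[OF l] by (metis image_eqI)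
    then show ?thesis using 3 in_F_vertices v l g_distinct by (auto simp: fup_matches_def F_fup gT_ne)
  qed
qed

lemma fup_matches_hat:
  assumes e: "e \<in> fE B" "e \<noteq> \<epsilon>" "e \<noteq> \<epsilon>2"
  shows "fup_matches (ECp False e)"
proof (cases "fup B e")
  case None
  then have "e \<in> Ups" using e by (simp add: Ups_def)
  then show ?thesis using e None in_F_vertices feB_ne g_distinct by (auto simp: fup_matches_def F_fup gH_ne)
next
  case (Some v)
  note v = fup_Some_inner[OF e Some]
  have l: "feB e \<noteq> l2" using feB_ne e by blast
  have "gHp (feB e) \<in> gH ` snd (snd (fvB v))" using v(4) gH_ne[OF l] by (metis image_eqI)
  then show ?thesis using e Some in_F_vertices v l g_distinct by (auto simp: fup_matches_def F_fup gH_ne)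
qed

lemma fup_matches_mid: "fup_matches EMid"
proof -
  consider "\<epsilon>3 = \<epsilon>2" | "\<epsilon>3 \<noteq> \<epsilon>2" "fup B \<epsilon>3 = None" | v where "\<epsilon>3 \<noteq> \<epsilon>2" "fup B \<epsilon>3 = Some v"
    by (cases "fup B \<epsilon>3") auto
  then show ?thesis
  proof cases
    case 1
    then have "l2 = l3" using eps2_eq_eps3_iff by simp
    then show ?thesis using 1 in_F_vertices g_ne_mid by (auto simp: fup_matches_def F_fup gT_l3)
  next
    case 2
    then have "\<epsilon>3 \<in> Ups" using eps3 by (simp add: Ups_def)
    then show ?thesis using 2 in_F_vertices g_ne_mid by (auto simp: fup_matches_def F_fup eps3 gT_l3)
  next
    case (3 v)
    note v = fup_Some_inner[OF eps3(1,2) 3]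
    have "to_nat (EMid :: nat see) \<in> gT ` snd (snd (fvB v))" using v(4) eps3(4) gT_l3 by (metis image_eqI)
    then show ?thesis using 3 in_F_vertices v g_ne_mid by (auto simp: fup_matches_def F_fup gT_l3)
  qed
qed

lemma F_fup_matches:
  assumes "xx \<in> fE F" shows "fup_matches xx"
  using assms
proof (cases rule: F_edges_cases)
  case (I e)
  then show ?thesis using Ups_a by (auto simp: fup_matches_def F_fup)
next
  case (O e)
  then show ?thesis using in_F_vertices g_distinct by (auto simp: fup_matches_def F_fup)
qed (simp_all add: fup_matches_tilde fup_matches_hat fup_matches_mid)

lemma flo_matches_tilde:
  assumes e: "e \<in> fE B" "e \<noteq> \<epsilon>" "e \<noteq> \<epsilon>3"
  shows "flo_matches (ECp True e)"
proof (cases "flo B e")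
  case None
  then have "e \<in> Los" using e by (simp add: Los_def)
  then show ?thesis using e None in_F_vertices feB_ne g_distinct by (auto simp: flo_matches_def F_flo)
next
  case (Some v)
  note v = flo_Some_inner[OF e Some]
  have l: "feB e \<noteq> l3" using feB_ne e by blast
  have "gTp (feB e) \<in> gT ` fst (snd (fvB v))" using v(4) gT_ne[OF l] by (metis image_eqI)
  then show ?thesis using e Some in_F_vertices v l g_distinct by (auto simp: flo_matches_def F_flo gT_ne)
qed

lemma flo_matches_hat:
  assumes e: "e \<in> fE B" "e \<noteq> \<epsilon>" "e \<noteq> \<epsilon>2"
  shows "flo_matches (ECp False e)"
proof -
  have l: "feB e \<noteq> l2" using feB_ne e by blast
  consider "e = \<epsilon>3" | "e \<noteq> \<epsilon>3" "flo B e = None" | v where "e \<noteq> \<epsilon>3" "flo B e = Some v"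
    by (cases "flo B e") auto
  then show ?thesis
  proof cases
    case 1
    then have "l2 \<noteq> l3" using e eps2_eq_eps3_iff by simp
    then show ?thesis using 1 in_F_vertices g_distinct by (auto simp: flo_matches_def F_flo gH_ne eps3)
  next
    case 2
    then have "e \<in> Los" using e by (simp add: Los_def)
    then show ?thesis using 2 in_F_vertices l g_distinct by (auto simp: flo_matches_def F_flo gH_ne)
  next
    case (3 v)
    note v = flo_Some_inner[OF e(1,2) 3]
    have "gHp (feB e) \<in> gH ` fst (snd (fvB v))" using v(4) gH_ne[OF l] by (metis image_eqI)
    then show ?thesis using 3 in_F_vertices v l g_distinct by (auto simp: flo_matches_def F_flo gH_ne)
  qed
qed

lemma flo_matches_mid: "flo_matches EMid"
proof -
  consider "\<epsilon>2 = \<epsilon>3" | "\<epsilon>2 \<noteq> \<epsilon>3" "flo B \<epsilon>2 = None" | v where "\<epsilon>2 \<noteq> \<epsilon>3" "flo B \<epsilon>2 = Some v"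
    by (cases "flo B \<epsilon>2") auto
  then show ?thesis
  proof cases
    case 1
    then have "gH l3 = to_nat (EMid :: nat see)" using eps2_eq_eps3_iff gH_l2 by simp
    then show ?thesis using 1 in_F_vertices g_ne_mid by (auto simp: flo_matches_def F_flo gH_l2)
  next
    case 2
    then have "\<epsilon>2 \<in> Los" using eps2 by (simp add: Los_def)
    then show ?thesis using 2 in_F_vertices g_ne_mid by (auto simp: flo_matches_def F_flo eps2 gH_l2)
  next
    case (3 v)
    note v = flo_Some_inner[OF eps2(1,2) 3]
    have "to_nat (EMid :: nat see) \<in> gH ` fst (snd (fvB v))" using v(4) eps2(4) gH_l2 by (metis image_eqI)
    then show ?thesis using 3 in_F_vertices v g_ne_mid by (auto simp: flo_matches_def F_flo gH_l2)
  qed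
qed

lemma F_flo_matches:
  assumes "xx \<in> fE F" shows "flo_matches xx"
  using assms
proof (cases rule: F_edges_cases)
  case (I e)
  then show ?thesis using in_F_vertices g_distinct by (auto simp: flo_matches_def F_flo)
next
  case (O e)
  then show ?thesis using Los_pn by (auto simp: flo_matches_def F_flo)
qed (simp_all add: flo_matches_tilde flo_matches_hat flo_matches_mid)

lemma F_vertices_cases:
  assumes "v \<in> fV F"
  obtains (C) b u where "v = Cp b u" "u \<in> fV B" "u \<noteq> \<iota>" "u \<noteq> \<kappa>"
    | (W) "v = NW" | (CW) "v = NCW" | (Co) e where "v = NCoc e" "e \<in> Ups"
    | (Ct) e where "v = NCon e" "e \<in> Los"
  using assms unfolding F_vertices by blast

lemma in_F_edges: "e \<in> fE B \<Longrightarrow> e \<noteq> \<epsilon> \<Longrightarrow> e \<noteq> \<epsilon>3 \<Longrightarrow> ECp True e \<in> fE F"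
  "e \<in> fE B \<Longrightarrow> e \<noteq> \<epsilon> \<Longrightarrow> e \<noteq> \<epsilon>2 \<Longrightarrow> ECp False e \<in> fE F"
  "EMid \<in> fE F" "e \<in> Ups \<Longrightarrow> EIn e \<in> fE F" "e \<in> Los \<Longrightarrow> EOut e \<in> fE F"
  unfolding F_edges by blast+

definition tilde_edge :: "'e \<Rightarrow> 'e see" where
  "tilde_edge e = (if e = \<epsilon>3 then EMid else ECp True e)"

definition hat_edge :: "'e \<Rightarrow> 'e see" where
  "hat_edge e = (if e = \<epsilon>2 then EMid else ECp False e)"

lemma tilde_edge_in_F_edges: "e \<in> fE B \<Longrightarrow> e \<noteq> \<epsilon> \<Longrightarrow> tilde_edge e \<in> fE F"
  and hat_edge_in_F_edges: "e \<in> fE B \<Longrightarrow> e \<noteq> \<epsilon> \<Longrightarrow> hat_edge e \<in> fE F"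
  using in_F_edges by (auto simp: tilde_edge_def hat_edge_def)

lemma feF_tilde_edge: "e \<in> fE B \<Longrightarrow> feF (tilde_edge e) = gT (feB e)"
  and feF_hat_edge: "e \<in> fE B \<Longrightarrow> feF (hat_edge e) = gH (feB e)"
  using feB_ne eps2(4) eps3(4) gT_l3 gH_l2 gT_ne gH_ne by (auto simp: tilde_edge_def hat_edge_def)

lemma fup_tilde_edge: "fup F (tilde_edge e) =
    (if e = \<epsilon>2 then Some NW else case fup B e of None \<Rightarrow> Some (NCoc e) | Some v \<Rightarrow> Some (Cp True v))"
  by (cases "e = \<epsilon>3") (auto simp: tilde_edge_def F_fup)

lemma flo_hat_edge: "flo F (hat_edge e) =
    (if e = \<epsilon>3 then Some NCW else case flo B e of None \<Rightarrow> Some (NCon e) | Some v \<Rightarrow> Some (Cp False v))"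
  by (cases "e = \<epsilon>2") (auto simp: hat_edge_def F_flo)

lemma F_out_edge_exists:
  assumes v: "v \<in> fV F" and l: "l \<in> snd (snd (fvF v))"
  shows "\<exists>xx\<in>fE F. fup F xx = Some v \<and> feF xx = l"
  using v
proof (cases rule: F_vertices_cases)
  case (C b u)
  obtain m where m: "m \<in> snd (snd (fvB u))" "l = (if b then gT m else gH m)"
    using l C by (cases b) auto
  obtain e where e: "e \<in> fE B" "feB e = m" "fup B e = Some u" using out_edge_exists[OF C(2) m(1)] by blast
  have ne: "e \<noteq> \<epsilon>" "e \<noteq> \<epsilon>2" using e(3) upe eps2(3) C(3) by auto
  show ?thesis
  proof (cases b)
    case True
    then show ?thesis using tilde_edge_in_F_edges[OF e(1) ne(1)] fup_tilde_edge[of e] feF_tilde_edge[OF e(1)] e ne m C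
      by auto
  next
    case False
    have "fup F (hat_edge e) = Some v" using e ne C False by (simp add: hat_edge_def F_fup)
    then show ?thesis using hat_edge_in_F_edges[OF e(1) ne(1)] feF_hat_edge[OF e(1)] e m False by auto
  qed
next
  case W
  then show ?thesis using l tilde_edge_in_F_edges[OF eps2(1,2)] fup_tilde_edge[of "\<epsilon>2"] feF_tilde_edge[OF eps2(1)] eps2(4)
    by auto
next
  case CW
  then show ?thesis using l by simp
next
  case (Co e)
  have e: "e \<in> fE B" "fup B e = None" "e \<noteq> \<epsilon>" "e \<noteq> \<epsilon>2" using Co(2) unfolding Ups_def by blast+
  have "l = gT (feB e) \<or> l = gHp (feB e)" using l Co by simp
  then show ?thesis
  proof
    assume "l = gT (feB e)"
    then show ?thesis using tilde_edge_in_F_edges[OF e(1,3)] fup_tilde_edge[of e] feF_tilde_edge[OF e(1)] e Co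
      by auto
  next
    assume "l = gHp (feB e)"
    moreover have "fup F (ECp False e) = Some v" using e Co by (simp add: F_fup)
    ultimately show ?thesis using in_F_edges(2)[OF e(1,3,4)] by auto
  qed
next
  case (Ct e)
  then have "fup F (EOut e) = Some v" "feF (EOut e) = l" using l by (auto simp: F_fup)
  then show ?thesis using in_F_edges(5)[OF Ct(2)] by blast
qed

lemma F_in_edge_exists:
  assumes v: "v \<in> fV F" and l: "l \<in> fst (snd (fvF v))"
  shows "\<exists>xx\<in>fE F. flo F xx = Some v \<and> feF xx = l"
  using v
proof (cases rule: F_vertices_cases)
  case (C b u)
  obtain m where m: "m \<in> fst (snd (fvB u))" "l = (if b then gT m else gH m)"
    using l C by (cases b) auto
  obtain e where e: "e \<in> fE B" "feB e = m" "flo B e = Some u" using in_edge_exists[OF C(2) m(1)] by blast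
  have ne: "e \<noteq> \<epsilon>" "e \<noteq> \<epsilon>3" using e(3) loe eps3(3) C(4) by auto
  show ?thesis
  proof (cases b)
    case True
    have "flo F (tilde_edge e) = Some v" using e ne C True by (simp add: tilde_edge_def F_flo)
    then show ?thesis using tilde_edge_in_F_edges[OF e(1) ne(1)] feF_tilde_edge[OF e(1)] e m True by auto
  next
    case False
    then show ?thesis using hat_edge_in_F_edges[OF e(1) ne(1)] flo_hat_edge[of e] feF_hat_edge[OF e(1)] e ne m C
      by auto
  qed
next
  case W
  then show ?thesis using l by simp
next
  case CW
  then show ?thesis using l hat_edge_in_F_edges[OF eps3(1,2)] flo_hat_edge[of "\<epsilon>3"] feF_hat_edge[OF eps3(1)] eps3(4)
    by auto
next
  case (Co e)
  then have "flo F (EIn e) = Some v" "feF (EIn e) = l" using l by (auto simp: F_flo)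
  then show ?thesis using in_F_edges(4)[OF Co(2)] by blast
next
  case (Ct e)
  have e: "e \<in> fE B" "flo B e = None" "e \<noteq> \<epsilon>" "e \<noteq> \<epsilon>3" using Ct(2) unfolding Los_def by blast+
  have "l = gTp (feB e) \<or> l = gH (feB e)" using l Ct by simp
  then show ?thesis
  proof
    assume "l = gTp (feB e)"
    moreover have "flo F (ECp True e) = Some v" using e Ct by (simp add: F_flo)
    ultimately show ?thesis using in_F_edges(1)[OF e(1,3,4)] by auto
  next
    assume "l = gH (feB e)"
    then show ?thesis using hat_edge_in_F_edges[OF e(1,3)] flo_hat_edge[of e] feF_hat_edge[OF e(1)] e Ct
      by auto
  qed
qed

lemma relabel_sig_weakening: "relabel_sig gT (KWk, {}, {l2}) = (KWk, {}, {gT l2})" by (simp add: relabel_sig_def)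
lemma relabel_sig_coweakening: "relabel_sig gH (KCowk, {l3}, {}) = (KCowk, {gH l3}, {})" by (simp add: relabel_sig_def)

lemma step_sigs_Psi_subsets: "(\<lambda>l. (KCoctr, {gI l}, {gT l, gHp l})) ` lbls a \<subseteq> step_sigs Psi"
  "relabel_sig gT ` (step_sigs S1 \<union> step_sigs S2 \<union> step_sigs S3 \<union> {(KWk, {}, {l2})}) \<subseteq> step_sigs Psi"
  "relabel_sig gH ` (step_sigs S1 \<union> step_sigs S2 \<union> step_sigs S3 \<union> {(KCowk, {l3}, {})}) \<subseteq> step_sigs Psi"
  "(\<lambda>l. (KCtr, {gTp l, gH l}, {gO l})) ` lbls pn \<subseteq> step_sigs Psi"
  by (simp_all only: step_sigs_Psi) blast+

lemma fvF_mem: assumes v: "v \<in> fV F" shows "fvF v \<in> step_sigs Psi"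
  using v
proof (cases rule: F_vertices_cases)
  case (C b u)
  then have "fvB u \<in> step_sigs S1 \<union> step_sigs S2 \<union> step_sigs S3" using fvB_other_vertices by blast
  then have h: "relabel_sig gT (fvB u) \<in> step_sigs Psi" "relabel_sig gH (fvB u) \<in> step_sigs Psi"
    using subsetD[OF step_sigs_Psi_subsets(2) imageI] subsetD[OF step_sigs_Psi_subsets(3) imageI] by blast+
  then show ?thesis using C(1) by (cases b) simp_all
next
  case W
  have "relabel_sig gT (KWk, {}, {l2}) \<in> step_sigs Psi" using subsetD[OF step_sigs_Psi_subsets(2) imageI] by blast
  then show ?thesis using W relabel_sig_weakening by simp
next
  case CW
  have "relabel_sig gH (KCowk, {l3}, {}) \<in> step_sigs Psi" using subsetD[OF step_sigs_Psi_subsets(3) imageI] by blast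
  then show ?thesis using CW relabel_sig_coweakening by simp
next
  case (Co e) then show ?thesis using Ups_a subsetD[OF step_sigs_Psi_subsets(1) imageI, of "feB e"] by simp
next
  case (Ct e) then show ?thesis using Los_pn subsetD[OF step_sigs_Psi_subsets(4) imageI, of "feB e"] by simp
qed

lemma lbls_a_Ups: "m \<in> lbls a \<Longrightarrow> \<exists>e\<in>Ups. feB e = m"
proof -
  assume m: "m \<in> lbls a"
  obtain e where e: "e \<in> fE B" "feB e = m" using feB_surj m by blast
  have "e \<noteq> \<epsilon>" using e fe_eps m le_a by auto
  moreover have "e \<noteq> \<epsilon>2" using e eps2 m l2_a by auto
  moreover have "fup B e = None" using fup_None_iff[OF e(1)] e m by simp
  ultimately show ?thesis using e by (auto simp: Ups_def)
qed

lemma lbls_pn_Los: "m \<in> lbls pn \<Longrightarrow> \<exists>e\<in>Los. feB e = m"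
proof -
  assume m: "m \<in> lbls pn"
  then have "m \<in> lbls a \<union> created S" using lbls_balance by blast
  then obtain e where e: "e \<in> fE B" "feB e = m" using feB_surj by blast
  have "e \<noteq> \<epsilon>" using e fe_eps m le_pn by auto
  moreover have "e \<noteq> \<epsilon>3" using e eps3 m l3_pn by auto
  moreover have "flo B e = None" using flo_None_iff[OF e(1)] e m by simp
  ultimately show ?thesis using e by (auto simp: Los_def)
qed

lemma fvF_surj: assumes s: "\<sigma> \<in> step_sigs Psi" shows "\<exists>v\<in>fV F. fvF v = \<sigma>"
proof -
  from s consider (a) l where "l \<in> lbls a" "\<sigma> = (KCoctr, {gI l}, {gT l, gHp l})"
    | (t) s0 where "s0 \<in> step_sigs S1 \<union> step_sigs S2 \<union> step_sigs S3" "\<sigma> = relabel_sig gT s0"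
    | (w) "\<sigma> = relabel_sig gT (KWk, {}, {l2})"
    | (h) s0 where "s0 \<in> step_sigs S1 \<union> step_sigs S2 \<union> step_sigs S3" "\<sigma> = relabel_sig gH s0"
    | (cw) "\<sigma> = relabel_sig gH (KCowk, {l3}, {})"
    | (n) l where "l \<in> lbls pn" "\<sigma> = (KCtr, {gTp l, gH l}, {gO l})"
    unfolding step_sigs_Psi by blast
  then show ?thesis
  proof cases
    case a
    then show ?thesis using lbls_a_Ups in_F_vertices(4) by force
  next
    case t
    then obtain u where "u \<in> fV B - {\<iota>, \<kappa>}" "s0 = fvB u" using fvB_other_vertices by blast
    then show ?thesis using in_F_vertices(1)[of u True] t by force
  next
    case w then show ?thesis using in_F_vertices(2) relabel_sig_weakening by force
  next
    case h
    then obtain u where "u \<in> fV B - {\<iota>, \<kappa>}" "s0 = fvB u" using fvB_other_vertices by blast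
    then show ?thesis using in_F_vertices(1)[of u False] h by force
  next
    case cw then show ?thesis using in_F_vertices(3) relabel_sig_coweakening by force
  next
    case n
    then show ?thesis using lbls_pn_Los in_F_vertices(5) by force
  qed
qed

lemma F_edges_inner: "ECp b e \<in> fE F \<Longrightarrow> e \<in> fE B" "EIn e \<in> fE F \<Longrightarrow> e \<in> fE B" "EOut e \<in> fE F \<Longrightarrow> e \<in> fE B"
  unfolding F_edges Ups_def Los_def by auto

lemma feF_inj: "inj_on feF (fE F)"
proof (rule inj_onI)
  fix x1 x2 assume x1: "x1 \<in> fE F" and x2: "x2 \<in> fE F" and eq: "feF x1 = feF x2"
  then have m: "map_see feB x1 = map_see feB x2" by (simp add: feF_def)
  show "x1 = x2"
  proof (cases x1)
    case (ECp b e)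
    then obtain e' where "x2 = ECp b e'" "feB e = feB e'" using m by (cases x2) auto
    then show ?thesis using ECp x1 x2 F_edges_inner feB_inj by metis
  next
    case (EIn e)
    then obtain e' where "x2 = EIn e'" "feB e = feB e'" using m by (cases x2) auto
    then show ?thesis using EIn x1 x2 F_edges_inner feB_inj by metis
  next
    case (EOut e)
    then obtain e' where "x2 = EOut e'" "feB e = feB e'" using m by (cases x2) auto
    then show ?thesis using EOut x1 x2 F_edges_inner feB_inj by metis
  next
    case EMid
    then show ?thesis using m by (cases x2) auto
  qed
qed

lemma fvF_inj: "inj_on fvF (fV F)"
proof (rule inj_onI)
  fix v1 v2 assume v1: "v1 \<in> fV F" and v2: "v2 \<in> fV F" and eq: "fvF v1 = fvF v2"
  have ne: "fst (snd (fvF v1)) \<union> snd (snd (fvF v1)) \<noteq> {}" using step_sigs_nonempty[OF fvF_mem[OF v1]] .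
  then obtain l where "l \<in> fst (snd (fvF v1)) \<or> l \<in> snd (snd (fvF v1))" by blast
  then show "v1 = v2"
  proof
    assume l: "l \<in> fst (snd (fvF v1))"
    obtain x1 where x1: "x1 \<in> fE F" "flo F x1 = Some v1" "feF x1 = l" using F_in_edge_exists[OF v1 l] by blast
    obtain x2 where x2: "x2 \<in> fE F" "flo F x2 = Some v2" "feF x2 = l" using F_in_edge_exists[OF v2] l eq by metis
    have "x1 = x2" using feF_inj x1 x2 by (metis inj_onD)
    then show ?thesis using x1 x2 by simp
  next
    assume l: "l \<in> snd (snd (fvF v1))"
    obtain x1 where x1: "x1 \<in> fE F" "fup F x1 = Some v1" "feF x1 = l" using F_out_edge_exists[OF v1 l] by blast
    obtain x2 where x2: "x2 \<in> fE F" "fup F x2 = Some v2" "feF x2 = l" using F_out_edge_exists[OF v2] l eq by metis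
    have "x1 = x2" using feF_inj x1 x2 by (metis inj_onD)
    then show ?thesis using x1 x2 by simp
  qed
qed

lemma fvF_fst: "fst (fvF (Cp b u)) = fst (fvB u)" by (cases b) simp_all

lemma fvF_lab: "v \<in> fV F \<Longrightarrow> fst (fvF v) = flab F v"
  by (erule F_vertices_cases) (auto simp: F_flab labB fvF_fst)

lemma feF_image: "feF ` fE F = lbls P0 \<union> \<Union> ((snd \<circ> snd) ` step_sigs Psi)"
proof
  show "feF ` fE F \<subseteq> lbls P0 \<union> \<Union> ((snd \<circ> snd) ` step_sigs Psi)"
  proof
    fix l assume "l \<in> feF ` fE F"
    then obtain xx where xx: "xx \<in> fE F" "l = feF xx" by blast
    show "l \<in> lbls P0 \<union> \<Union> ((snd \<circ> snd) ` step_sigs Psi)"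
    proof (cases "fup F xx")
      case None then show ?thesis using F_fup_matches[OF xx(1), unfolded fup_matches_def] xx by auto
    next
      case (Some v)
      then have "v \<in> fV F" "feF xx \<in> snd (snd (fvF v))" using F_fup_matches[OF xx(1), unfolded fup_matches_def] by auto
      then show ?thesis using fvF_mem xx by force
    qed
  qed
next
  show "lbls P0 \<union> \<Union> ((snd \<circ> snd) ` step_sigs Psi) \<subseteq> feF ` fE F"
  proof
    fix l assume "l \<in> lbls P0 \<union> \<Union> ((snd \<circ> snd) ` step_sigs Psi)"
    then consider "l \<in> gI ` lbls a" | \<sigma> where "\<sigma> \<in> step_sigs Psi" "l \<in> snd (snd \<sigma>)" by auto
    then show "l \<in> feF ` fE F"
    proof cases
      case 1
      then show ?thesis using lbls_a_Ups in_F_edges(4) by force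
    next
      case 2
      then obtain v where v: "v \<in> fV F" "fvF v = \<sigma>" using fvF_surj by blast
      then show ?thesis using F_out_edge_exists[of v l] 2 by force
    qed
  qed
qed

lemma se_construct_iso: "flow_iso F (steps_flow P0 Psi)"
proof -
  have PP: "lbls P0 = gI ` lbls a" by simp
  have QQ: "lbls (final P0 Psi) = gO ` lbls pn" using final_Psi by simp
  have bv: "bij_betw fvF (fV F) (step_sigs Psi)"
    unfolding bij_betw_def using fvF_inj fvF_mem fvF_surj by blast
  have be: "bij_betw feF (fE F) (lbls P0 \<union> \<Union> ((snd \<circ> snd) ` step_sigs Psi))"
    unfolding bij_betw_def using feF_inj feF_image by blast
  show ?thesis
    by (rule flow_iso_sig_flowI[OF bv be])
       (use fvF_lab F_fup_matches[unfolded fup_matches_def] F_flo_matches[unfolded flo_matches_def]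
        well_labelled_sigs_disjoint[OF well_labelled_Psi] PP QQ in auto)
qed

lemma se_result:
  "ann_ok (P0, Psi)" "flow_iso F (flow_of_ann (P0, Psi))"
  "map_formula fst P0 = map_formula fst a" "map_formula fst (final P0 Psi) = map_formula fst (final a S)"
proof -
  show "ann_ok (P0, Psi)" using well_labelled_Psi sks_steps_Psi by (simp add: ann_ok_iff)
  have "flow_iso (steps_flow P0 Psi) (flow_of_ann (P0, Psi))"
    using flow_iso_sym[OF flow_of_ann_endpoints flow_of_ann_iso_steps_flow] well_labelled_Psi by blast
  then show "flow_iso F (flow_of_ann (P0, Psi))" using flow_iso_trans[OF se_construct_iso] by blast
  show "map_formula fst P0 = map_formula fst a" by (rule erase_relabel)
  show "map_formula fst (final P0 Psi) = map_formula fst (final a S)"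
    unfolding final_Psi final_segments(3) by (rule erase_relabel)
qed

end

lemma well_labelled_consumed_later:
  assumes g: "well_labelled a (s1 @ (c, r) # s2)" and r: "is_atomic r" "l \<in> lbls (rconcl r)"
    and r': "(c', r') \<in> set (s1 @ (c, r) # s2)" "is_atomic r'" "l \<in> lbls (rprem r')"
  shows "(c', r') \<in> set s2"
proof -
  have "(c', r') \<notin> set s1"
  proof
    assume "(c', r') \<in> set s1"
    then have "l \<in> consumed s1" using consumed_mem r' by blast
    then have "l \<in> lbls a \<union> created s1"
      using well_labelled_lbls_balance g by (auto simp: well_labelled_append)
    moreover have "l \<notin> created s1" using well_labelled_step_earlier[OF g r(1)] r(2) by blast
    moreover have "l \<notin> lbls a" using well_labelled_created_fresh[OF g] r by auto
    ultimately show False by blast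
  qed
  moreover have "(c', r') \<noteq> (c, r)"
  proof
    assume "(c', r') = (c, r)"
    moreover have "lbls (rconcl r) \<inter> lbls (rprem r) = {}"
    proof -
      have "plug c (rprem r) = final a s1" "lbls (rconcl r) \<inter> lbls (final a s1) = {}"
        using g r(1) by (auto simp: well_labelled_append well_labelled_Cons)
      moreover have "lbls (rprem r) \<subseteq> lbls (plug c (rprem r))" by (simp add: lbls_plug)
      ultimately show ?thesis by auto
    qed
    ultimately show False using r(2) r'(3) by blast
  qed
  ultimately show ?thesis using r' by auto
qed

lemma premiss_erase: "premiss (erase (a, s)) = map_formula fst a"
  by (simp add: premiss_def erase_eq)

lemma conclusion_erase: "conclusion (erase (a, s)) = map_formula fst (final a s)"
  by (simp only: conclusion_def erase_eq last_forms_final final_map fst_conv snd_conv)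

lemma atomic_flow_endpoints:
  "atomic_flow F \<Longrightarrow>
     \<forall>e\<in>fE F. (\<forall>v. fup F e = Some v \<longrightarrow> v \<in> fV F) \<and> (\<forall>v. flo F e = Some v \<longrightarrow> v \<in> fV F)"
  by (simp add: atomic_flow_def)

lemma se_redex_in_deriv:
  assumes gS: "well_labelled a S" and sS: "sks_steps S" and isoB: "flow_iso B (steps_flow a S)"
    and afB: "atomic_flow B" and eps: "\<epsilon> \<in> fE B" "fup B \<epsilon> = Some \<iota>" "flab B \<iota> = KInt"
    "flo B \<epsilon> = Some \<kappa>" "flab B \<kappa> = KCut"
  shows "\<exists>S1 c x y S2 c' x' y' S3 fvB feB. S = S1 @ (c, RInt x y) # S2 @ (c', RCut x' y') # S3 \<and>
     se_flow a S1 c x y S2 c' x' y' S3 (feB \<epsilon>) B \<epsilon> \<iota> \<kappa> fvB feB"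
proof -
  obtain fvB feB where f: "bij_betw fvB (fV B) (fV (steps_flow a S))" "bij_betw feB (fE B) (fE (steps_flow a S))"
     "\<forall>v\<in>fV B. flab (steps_flow a S) (fvB v) = flab B v"
     "\<forall>e\<in>fE B. fup (steps_flow a S) (feB e) = map_option fvB (fup B e) \<and>
        flo (steps_flow a S) (feB e) = map_option fvB (flo B e)"
    using isoB unfolding flow_iso_def by blast
  have VSF: "fV (steps_flow a S) = step_sigs S" "fE (steps_flow a S) = lbls a \<union> created S"
    "flab (steps_flow a S) = fst"
    by (auto simp: sig_flow_def created_step_sigs)
  note ends = atomic_flow_endpoints[OF afB]
  have iV: "\<iota> \<in> fV B" "\<kappa> \<in> fV B" using ends eps by auto
  have fvin: "fvB v \<in> step_sigs S" if "v \<in> fV B" for v using f(1) VSF that by (auto simp: bij_betw_def)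
  obtain c r where cr: "fvB \<iota> = step_sig r" "(c, r) \<in> set S" "is_atomic r"
    using fvin[OF iV(1)] unfolding step_sigs_set by blast
  have "kind r = KInt" using f(3) iV eps cr VSF by (auto simp: step_sig_def)
  then obtain x y where r: "r = RInt x y" using cr(3) by (cases r) auto
  obtain c' r' where cr': "fvB \<kappa> = step_sig r'" "(c', r') \<in> set S" "is_atomic r'"
    using fvin[OF iV(2)] unfolding step_sigs_set by blast
  have "kind r' = KCut" using f(3) iV eps cr' VSF by (auto simp: step_sig_def)
  then obtain x' y' where r': "r' = RCut x' y'" using cr'(3) by (cases r') auto
  define le where "le = feB \<epsilon>"
  have leE: "le \<in> lbls a \<union> created S" using f(2) eps VSF le_def by (auto simp: bij_betw_def)
  have "fup (steps_flow a S) le = Some (fvB \<iota>)" using f(4) eps le_def by auto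
  then have le1: "le = snd x \<or> le = snd y"
    using steps_flow_fup_Some[OF gS leE] cr r by (auto simp: step_sig_def)
  have "flo (steps_flow a S) le = Some (fvB \<kappa>)" using f(4) eps le_def by auto
  then have le2: "le = snd x' \<or> le = snd y'"
    using steps_flow_flo_Some[OF gS leE] cr' r' by (auto simp: step_sig_def)
  obtain S1 R where S1: "S = S1 @ (c, RInt x y) # R" using cr(2) r by (meson split_list)
  have "(c', RCut x' y') \<in> set R"
    using well_labelled_consumed_later[of a S1 c "RInt x y" R le c' "RCut x' y'"] gS S1 le1 le2 cr'(2) r'
    by auto
  then obtain S2 S3 where R: "R = S2 @ (c', RCut x' y') # S3" by (meson split_list)
  have S': "S = S1 @ (c, RInt x y) # S2 @ (c', RCut x' y') # S3" using S1 R by simp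
  have "se_flow a S1 c x y S2 c' x' y' S3 (feB \<epsilon>) B \<epsilon> \<iota> \<kappa> fvB feB"
    using gS sS le1 le2 ends eps f VSF cr cr' r r' S' by unfold_locales (simp_all add: le_def)
  then show ?thesis using S' by blast
qed

theorem theorem5p3:
  fixes B :: "('v, 'e) flow" and C :: "('w, 'f) flow" and Phi :: "'n atom deriv"
  assumes "se_red B C"
    and "sks_deriv Phi"
    and "is_flow_of B Phi"
  shows "\<exists>Psi :: 'n atom deriv. sks_deriv Psi \<and> premiss Psi = premiss Phi \<and>
           conclusion Psi = conclusion Phi \<and> is_flow_of C Psi"
proof -
  from assms(1) obtain \<epsilon> \<iota> \<kappa> where red: "atomic_flow B" "\<epsilon> \<in> fE B" "fup B \<epsilon> = Some \<iota>"
    "flab B \<iota> = KInt" "flo B \<epsilon> = Some \<kappa>" "flab B \<kappa> = KCut" and isoC: "flow_iso C (se_construct B \<epsilon>)"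
    unfolding se_red_def by blast
  from assms(3) obtain a s where D: "ann_ok (a, s)" "erase (a, s) = Phi" "flow_iso B (flow_of_ann (a, s))"
    unfolding is_flow_of_def by auto
  then have gs: "well_labelled a s" and ss: "sks_steps s" by (auto simp: ann_ok_iff)
  have "flow_iso B (steps_flow a s)"
    using flow_iso_trans[OF D(3) flow_of_ann_iso_steps_flow[OF gs]] .
  then obtain S1 c x y S2 c' x' y' S3 fvB feB
    where s: "s = S1 @ (c, RInt x y) # S2 @ (c', RCut x' y') # S3"
      and redex: "se_flow a S1 c x y S2 c' x' y' S3 (feB \<epsilon>) B \<epsilon> \<iota> \<kappa> fvB feB"
    using se_redex_in_deriv[OF gs ss _ red] by blast
  interpret se_flow a S1 c x y S2 c' x' y' S3 "feB \<epsilon>" B \<epsilon> \<iota> \<kappa> fvB feB by (rule redex)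
  let ?Psi = "erase (P0, Psi)"
  have "sks_deriv ?Psi" using se_result(1) by (simp add: ann_ok_def)
  moreover have "premiss ?Psi = premiss Phi" "conclusion ?Psi = conclusion Phi"
    using D(2) se_result(3,4) s by (auto simp: premiss_erase conclusion_erase)
  moreover have "is_flow_of C ?Psi"
    unfolding is_flow_of_def using se_result(1,2) flow_iso_trans[OF isoC] by blast
  ultimately show ?thesis by blast
qed

end
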